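(* Let $R$ be a commutative ring with identity and $S$ a multiplicative subset of $R$. An $R$-module $F$ is $u$-$S$-flat if and only if every short ($u$-$S$-)exact sequence $0\rightarrow A\rightarrow B\rightarrow F\rightarrow 0$ of $R$-modules is $u$-$S$-pure.
   Context: A multiplicative subset $S$ satisfies $1\in S$ and is closed under products. An $R$-module $T$ is $u$-$S$-torsion if $sT=0$ for some $s\in S$. A short sequence $0\to A\xrightarrow{f}B\xrightarrow{g}C\to 0$ is $u$-$S$-exact if there is $s\in S$ with $s\,\mathrm{Ker}(f)=0$, $s\,\mathrm{Ker}(g)\subseteq\mathrm{Im}(f)$, $s\,\mathrm{Im}(f)\subseteq\mathrm{Ker}(g)$, $sC\subseteq\mathrm{Im}(g)$. It is $u$-$S$-pure if for every $R$-module $M$ the induced sequence $0\rightarrow M\otimes_RA\rightarrow M\otimes_RB\rightarrow M\otimes_RC\rightarrow 0$ is $u$-$S$-exact. An $R$-module $F$ is $u$-$S$-flat if for every short $u$-$S$-exact sequence $0\to A\to B\to C\to 0$ the induced sequence $0\to A\otimes_RF\to B\otimes_RF\to C\otimes_RF\to 0$ is $u$-$S$-exact; equivalently, $\mathrm{Tor}_1^R(M,F)$ is $u$-$S$-torsion for every $R$-module $M$. *)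

theory Defs
  imports "HOL-Algebra.Module"
begin

definition mult_subset :: "'r ring \<Rightarrow> 'r set \<Rightarrow> bool" where
  "mult_subset R S \<longleftrightarrow> S \<subseteq> carrier R \<and> \<one>\<^bsub>R\<^esub> \<in> S \<and>
     (\<forall>s\<in>S. \<forall>t\<in>S. s \<otimes>\<^bsub>R\<^esub> t \<in> S)"

definition mod_hom :: "'r ring \<Rightarrow> ('r,'a) module \<Rightarrow> ('r,'b) module \<Rightarrow> ('a \<Rightarrow> 'b) \<Rightarrow> bool" where
  "mod_hom R M N f \<longleftrightarrow> f \<in> carrier M \<rightarrow> carrier N \<and>
     (\<forall>x\<in>carrier M. \<forall>y\<in>carrier M. f (x \<oplus>\<^bsub>M\<^esub> y) = f x \<oplus>\<^bsub>N\<^esub> f y) \<and>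
     (\<forall>r\<in>carrier R. \<forall>x\<in>carrier M. f (r \<odot>\<^bsub>M\<^esub> x) = r \<odot>\<^bsub>N\<^esub> f x)"

definition u_S_exact :: "'r ring \<Rightarrow> 'r set \<Rightarrow> ('r,'a) module \<Rightarrow> ('r,'b) module \<Rightarrow> ('r,'c) module
    \<Rightarrow> ('a \<Rightarrow> 'b) \<Rightarrow> ('b \<Rightarrow> 'c) \<Rightarrow> bool" where
  "u_S_exact R S A B C f g \<longleftrightarrow> (\<exists>s\<in>S.
     (\<forall>a\<in>carrier A. f a = \<zero>\<^bsub>B\<^esub> \<longrightarrow> s \<odot>\<^bsub>A\<^esub> a = \<zero>\<^bsub>A\<^esub>) \<and>
     (\<forall>b\<in>carrier B. g b = \<zero>\<^bsub>C\<^esub> \<longrightarrow> s \<odot>\<^bsub>B\<^esub> b \<in> f ` carrier A) \<and>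
     (\<forall>a\<in>carrier A. g (s \<odot>\<^bsub>B\<^esub> f a) = \<zero>\<^bsub>C\<^esub>) \<and>
     (\<forall>c\<in>carrier C. s \<odot>\<^bsub>C\<^esub> c \<in> g ` carrier B))"

definition short_exact :: "('r,'a) module \<Rightarrow> ('r,'b) module \<Rightarrow> ('r,'c) module
    \<Rightarrow> ('a \<Rightarrow> 'b) \<Rightarrow> ('b \<Rightarrow> 'c) \<Rightarrow> bool" where
  "short_exact A B C f g \<longleftrightarrow>
     {a\<in>carrier A. f a = \<zero>\<^bsub>B\<^esub>} = {\<zero>\<^bsub>A\<^esub>} \<and>
     {b\<in>carrier B. g b = \<zero>\<^bsub>C\<^esub>} = f ` carrier A \<and>
     g ` carrier B = carrier C"

text \<open>Free R-module on the set carrier M x carrier A: finitely supported formal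
  R-linear combinations.\<close>
definition tfree :: "'r ring \<Rightarrow> ('r,'m) module \<Rightarrow> ('r,'a) module \<Rightarrow> ('m \<times> 'a \<Rightarrow> 'r) set" where
  "tfree R M A = {x. (\<forall>p. x p \<in> carrier R) \<and>
      (\<forall>p. p \<notin> carrier M \<times> carrier A \<longrightarrow> x p = \<zero>\<^bsub>R\<^esub>) \<and>
      finite {p. x p \<noteq> \<zero>\<^bsub>R\<^esub>}}"

definition fadd :: "'r ring \<Rightarrow> ('p \<Rightarrow> 'r) \<Rightarrow> ('p \<Rightarrow> 'r) \<Rightarrow> 'p \<Rightarrow> 'r" where
  "fadd R x y = (\<lambda>p. x p \<oplus>\<^bsub>R\<^esub> y p)"

definition fsmult :: "'r ring \<Rightarrow> 'r \<Rightarrow> ('p \<Rightarrow> 'r) \<Rightarrow> 'p \<Rightarrow> 'r" where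
  "fsmult R r x = (\<lambda>p. r \<otimes>\<^bsub>R\<^esub> x p)"

definition fneg :: "'r ring \<Rightarrow> ('p \<Rightarrow> 'r) \<Rightarrow> 'p \<Rightarrow> 'r" where
  "fneg R x = (\<lambda>p. \<ominus>\<^bsub>R\<^esub> x p)"

definition fdelta :: "'r ring \<Rightarrow> 'p \<Rightarrow> 'p \<Rightarrow> 'r" where
  "fdelta R q = (\<lambda>p. if p = q then \<one>\<^bsub>R\<^esub> else \<zero>\<^bsub>R\<^esub>)"

definition fzero :: "'r ring \<Rightarrow> 'p \<Rightarrow> 'r" where
  "fzero R = (\<lambda>p. \<zero>\<^bsub>R\<^esub>)"

definition tgens :: "'r ring \<Rightarrow> ('r,'m) module \<Rightarrow> ('r,'a) module \<Rightarrow> ('m \<times> 'a \<Rightarrow> 'r) set" where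
  "tgens R M A =
     {fadd R (fdelta R (m \<oplus>\<^bsub>M\<^esub> m', a)) (fneg R (fadd R (fdelta R (m, a)) (fdelta R (m', a))))
        | m m' a. m \<in> carrier M \<and> m' \<in> carrier M \<and> a \<in> carrier A} \<union>
     {fadd R (fdelta R (m, a \<oplus>\<^bsub>A\<^esub> a')) (fneg R (fadd R (fdelta R (m, a)) (fdelta R (m, a'))))
        | m a a'. m \<in> carrier M \<and> a \<in> carrier A \<and> a' \<in> carrier A} \<union>
     {fadd R (fdelta R (r \<odot>\<^bsub>M\<^esub> m, a)) (fneg R (fsmult R r (fdelta R (m, a))))
        | r m a. r \<in> carrier R \<and> m \<in> carrier M \<and> a \<in> carrier A} \<union>
     {fadd R (fdelta R (m, r \<odot>\<^bsub>A\<^esub> a)) (fneg R (fsmult R r (fdelta R (m, a))))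
        | r m a. r \<in> carrier R \<and> m \<in> carrier M \<and> a \<in> carrier A}"

definition trel :: "'r ring \<Rightarrow> ('r,'m) module \<Rightarrow> ('r,'a) module \<Rightarrow> ('m \<times> 'a \<Rightarrow> 'r) set" where
  "trel R M A = \<Inter>{N. N \<subseteq> tfree R M A \<and> fzero R \<in> N \<and> tgens R M A \<subseteq> N \<and>
      (\<forall>x\<in>N. \<forall>y\<in>N. fadd R x y \<in> N) \<and> (\<forall>r\<in>carrier R. \<forall>x\<in>N. fsmult R r x \<in> N)}"

definition tclass :: "'r ring \<Rightarrow> ('r,'m) module \<Rightarrow> ('r,'a) module \<Rightarrow> ('m \<times> 'a \<Rightarrow> 'r)
    \<Rightarrow> ('m \<times> 'a \<Rightarrow> 'r) set" where
  "tclass R M A x = {y \<in> tfree R M A. fadd R y (fneg R x) \<in> trel R M A}"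

text \<open>The tensor product M (x)_R A as an R-module (elements are cosets;
  the multiplicative fields of the record are irrelevant).\<close>
definition tensor :: "'r ring \<Rightarrow> ('r,'m) module \<Rightarrow> ('r,'a) module
    \<Rightarrow> ('r, ('m \<times> 'a \<Rightarrow> 'r) set) module" where
  "tensor R M A =
    \<lparr>carrier = tclass R M A ` tfree R M A,
     mult = (\<lambda>X Y. trel R M A),
     one = trel R M A,
     zero = tclass R M A (fzero R),
     add = (\<lambda>X Y. tclass R M A (fadd R (SOME x. x \<in> X) (SOME y. y \<in> Y))),
     smult = (\<lambda>r X. tclass R M A (fsmult R r (SOME x. x \<in> X)))\<rparr>"

definition tpush :: "'r ring \<Rightarrow> ('r,'m) module \<Rightarrow> ('r,'a) module \<Rightarrow> ('r,'m2) module \<Rightarrow> ('r,'a2) module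
    \<Rightarrow> ('m \<Rightarrow> 'm2) \<Rightarrow> ('a \<Rightarrow> 'a2) \<Rightarrow> ('m \<times> 'a \<Rightarrow> 'r) \<Rightarrow> ('m2 \<times> 'a2 \<Rightarrow> 'r)" where
  "tpush R M A M' A' f g x = (\<lambda>(b, d).
     if (b, d) \<in> carrier M' \<times> carrier A'
     then finsum R x {(m, a). m \<in> carrier M \<and> a \<in> carrier A \<and> f m = b \<and> g a = d \<and> x (m, a) \<noteq> \<zero>\<^bsub>R\<^esub>}
     else \<zero>\<^bsub>R\<^esub>)"

definition tensor_map :: "'r ring \<Rightarrow> ('r,'m) module \<Rightarrow> ('r,'a) module \<Rightarrow> ('r,'m2) module \<Rightarrow> ('r,'a2) module
    \<Rightarrow> ('m \<Rightarrow> 'm2) \<Rightarrow> ('a \<Rightarrow> 'a2) \<Rightarrow> ('m \<times> 'a \<Rightarrow> 'r) set \<Rightarrow> ('m2 \<times> 'a2 \<Rightarrow> 'r) set" where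
  "tensor_map R M A M' A' f g X = tclass R M' A' (tpush R M A M' A' f g (SOME x. x \<in> X))"

text \<open>0 -> A -> B -> C -> 0 is u-S-pure, where the test modules M range over all
  R-modules whose carrier lives in the type 'm.\<close>
definition u_S_pure :: "'m itself \<Rightarrow> 'r ring \<Rightarrow> 'r set \<Rightarrow> ('r,'a) module \<Rightarrow> ('r,'b) module
    \<Rightarrow> ('r,'c) module \<Rightarrow> ('a \<Rightarrow> 'b) \<Rightarrow> ('b \<Rightarrow> 'c) \<Rightarrow> bool" where
  "u_S_pure _ R S A B C f g \<longleftrightarrow> (\<forall>M :: ('r,'m) module. module R M \<longrightarrow>
     u_S_exact R S (tensor R M A) (tensor R M B) (tensor R M C)
       (tensor_map R M A M B id f) (tensor_map R M B M C id g))"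

text \<open>F is u-S-flat, tested against all u-S-exact sequences 0 -> A -> B -> C -> 0 with
  carriers in the types 'a, 'b, 'c.\<close>
definition u_S_flat :: "'a itself \<Rightarrow> 'b itself \<Rightarrow> 'c itself \<Rightarrow> 'r ring \<Rightarrow> 'r set
    \<Rightarrow> ('r,'f) module \<Rightarrow> bool" where
  "u_S_flat _ _ _ R S F \<longleftrightarrow> (\<forall>(A :: ('r,'a) module) (B :: ('r,'b) module) (C :: ('r,'c) module) f g.
     module R A \<and> module R B \<and> module R C \<and> mod_hom R A B f \<and> mod_hom R B C g \<and>
     u_S_exact R S A B C f g \<longrightarrow>
     u_S_exact R S (tensor R A F) (tensor R B F) (tensor R C F)
       (tensor_map R A F B F f id) (tensor_map R B F C F g id))"

end

theory Submission
  imports Defs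
begin

text \<open>Two facts carry the
  proof. First, tensoring is right exact up to the scalar s of a u-S-exact sequence
  0 \<rightarrow> A \<rightarrow> B \<rightarrow> C \<rightarrow> 0: the tensored sequence is exact at the middle up to
  s^2 and at the end up to s. Second, tensoring with a free module
  R^(I) preserves injectivity up to s, via coordinates
  Y \<otimes> R^(I) \<cong> Y^(I).

  Given M, present it as 0 \<rightarrow> K \<rightarrow> P \<rightarrow> M \<rightarrow> 0 with P free. If
  K \<otimes> C \<rightarrow> P \<otimes> C is injective up to t, a diagram chase through the square of
  tensor products of this presentation with A \<rightarrow> B \<rightarrow> C shows that the kernel of
  M \<otimes> A \<rightarrow> M \<otimes> B is killed by s^4 t. If F is u-S-flat, the hypothesis holds with
  C = F for every M, and the chase gives u-S-purity of u-S-exact sequences ending in F.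
  Conversely, purity of the presentation 0 \<rightarrow> K \<rightarrow> P \<rightarrow> F \<rightarrow> 0 gives the hypothesis with
  M = F for every C, and the chase, read through the symmetry of the tensor product, shows
  that F is u-S-flat.\<close>

lemma fadd_app: "fadd R x y p = x p \<oplus>\<^bsub>R\<^esub> y p" by (simp add: fadd_def)
lemma fsmult_app: "fsmult R r x p = r \<otimes>\<^bsub>R\<^esub> x p" by (simp add: fsmult_def)
lemma fneg_app: "fneg R x p = \<ominus>\<^bsub>R\<^esub> x p" by (simp add: fneg_def)
lemma fzero_app: "fzero R p = \<zero>\<^bsub>R\<^esub>" by (simp add: fzero_def)
lemma fdelta_app: "fdelta R q p = (if p = q then \<one>\<^bsub>R\<^esub> else \<zero>\<^bsub>R\<^esub>)" by (simp add: fdelta_def)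
lemmas fapp = fadd_app fsmult_app fneg_app fzero_app

text \<open>The definitions take plain ring records, while cring allows ring schemes.\<close>
locale tensor_cring = cring R for R :: "'r ring" (structure)

context tensor_cring begin

definition rfuns :: "('p \<Rightarrow> 'r) set" where "rfuns = {x. \<forall>p. x p \<in> carrier R}"

lemma rfunsI[intro]: "(\<And>p. x p \<in> carrier R) \<Longrightarrow> x \<in> rfuns" by (simp add: rfuns_def)
lemma rfunsD[simp]: "x \<in> rfuns \<Longrightarrow> x p \<in> carrier R" by (simp add: rfuns_def)

lemma fadd_rfuns[simp]: "x \<in> rfuns \<Longrightarrow> y \<in> rfuns \<Longrightarrow> fadd R x y \<in> rfuns" by (auto simp: fapp)
lemma fsmult_rfuns[simp]: "r \<in> carrier R \<Longrightarrow> x \<in> rfuns \<Longrightarrow> fsmult R r x \<in> rfuns" by (auto simp: fapp)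
lemma fneg_rfuns[simp]: "x \<in> rfuns \<Longrightarrow> fneg R x \<in> rfuns" by (auto simp: fapp)
lemma fzero_rfuns[simp]: "fzero R \<in> rfuns" by (auto simp: fapp)
lemma fdelta_rfuns[simp]: "fdelta R q \<in> rfuns" by (auto simp: fdelta_app)

lemma fadd_fneg_self[simp]: "x \<in> rfuns \<Longrightarrow> fadd R x (fneg R x) = fzero R" by (rule ext) (simp add: fapp r_neg)
lemma fneg_fzero[simp]: "fneg R (fzero R) = fzero R" by (rule ext) (simp add: fapp)
lemma fadd_fzero_right[simp]: "x \<in> rfuns \<Longrightarrow> fadd R x (fzero R) = x" by (rule ext) (simp add: fapp)
lemma fadd_fzero_left[simp]: "x \<in> rfuns \<Longrightarrow> fadd R (fzero R) x = x" by (rule ext) (simp add: fapp)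
lemma fsmult_fzero[simp]: "r \<in> carrier R \<Longrightarrow> fsmult R r (fzero R) = fzero R" by (rule ext) (simp add: fapp)
lemma fsmult_zero[simp]: "x \<in> rfuns \<Longrightarrow> fsmult R \<zero> x = fzero R" by (rule ext) (simp add: fapp)
lemma fsmult_one[simp]: "x \<in> rfuns \<Longrightarrow> fsmult R \<one> x = x" by (rule ext) (simp add: fapp)
lemma fneg_eq_fsmult: "x \<in> rfuns \<Longrightarrow> fneg R x = fsmult R (\<ominus> \<one>) x" by (rule ext) (simp add: fapp l_minus)
lemma fadd_comm: "x \<in> rfuns \<Longrightarrow> y \<in> rfuns \<Longrightarrow> fadd R x y = fadd R y x" by (rule ext) (simp add: fapp a_comm)
lemma fadd_assoc: "x \<in> rfuns \<Longrightarrow> y \<in> rfuns \<Longrightarrow> z \<in> rfuns \<Longrightarrow> fadd R (fadd R x y) z = fadd R x (fadd R y z)"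
  by (rule ext) (simp add: fapp a_assoc)
lemma fsmult_fadd: "r \<in> carrier R \<Longrightarrow> x \<in> rfuns \<Longrightarrow> y \<in> rfuns \<Longrightarrow> fsmult R r (fadd R x y) = fadd R (fsmult R r x) (fsmult R r y)"
  by (rule ext) (simp add: fapp r_distr)
lemma fsmult_assoc: "r \<in> carrier R \<Longrightarrow> t \<in> carrier R \<Longrightarrow> x \<in> rfuns \<Longrightarrow> fsmult R r (fsmult R t x) = fsmult R (r \<otimes> t) x"
  by (rule ext) (simp add: fapp m_assoc)
lemma fsmult_commute: "r \<in> carrier R \<Longrightarrow> s \<in> carrier R \<Longrightarrow> x \<in> rfuns \<Longrightarrow> fsmult R s (fsmult R r x) = fsmult R r (fsmult R s x)"
  by (simp add: fsmult_assoc m_comm)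
lemma fadd_fsmult_distr: "r \<in> carrier R \<Longrightarrow> t \<in> carrier R \<Longrightarrow> x \<in> rfuns \<Longrightarrow> fadd R (fsmult R r x) (fsmult R t x) = fsmult R (r \<oplus> t) x"
  by (rule ext) (simp add: fapp l_distr)
lemma fsmult_fneg: "r \<in> carrier R \<Longrightarrow> x \<in> rfuns \<Longrightarrow> fsmult R r (fneg R x) = fneg R (fsmult R r x)"
  by (rule ext) (simp add: fapp r_minus)

lemma tfree_iff: "x \<in> tfree R M X \<longleftrightarrow> x \<in> rfuns \<and> (\<forall>p. p \<notin> carrier M \<times> carrier X \<longrightarrow> x p = \<zero>)
   \<and> finite {p. x p \<noteq> \<zero>}"
  by (simp only: tfree_def rfuns_def mem_Collect_eq)

lemma tfree_rfuns[simp]: "x \<in> tfree R M X \<Longrightarrow> x \<in> rfuns" by (simp add: tfree_iff)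

lemma tfree_out: "x \<in> tfree R M X \<Longrightarrow> p \<notin> carrier M \<times> carrier X \<Longrightarrow> x p = \<zero>"
  by (cases p) (simp add: tfree_iff)

lemma tfree_fin: "x \<in> tfree R M X \<Longrightarrow> finite {p. x p \<noteq> \<zero>}"
  by (simp add: tfree_iff)

lemma tfree_supp: "x \<in> tfree R M X \<Longrightarrow> {p. x p \<noteq> \<zero>} \<subseteq> carrier M \<times> carrier X"
  using tfree_out by blast

lemma tfreeI: "x \<in> rfuns \<Longrightarrow> (\<And>p. p \<notin> carrier M \<times> carrier X \<Longrightarrow> x p = \<zero>) \<Longrightarrow> {p. x p \<noteq> \<zero>} \<subseteq> F
   \<Longrightarrow> finite F \<Longrightarrow> x \<in> tfree R M X"
  unfolding tfree_iff by (blast intro: finite_subset)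

lemma fadd_tfree[simp]: "x \<in> tfree R M X \<Longrightarrow> y \<in> tfree R M X \<Longrightarrow> fadd R x y \<in> tfree R M X"
  by (rule tfreeI[where F="{p. x p \<noteq> \<zero>} \<union> {p. y p \<noteq> \<zero>}"]) (auto simp: tfree_out tfree_fin fapp)

lemma fsmult_tfree[simp]: "r \<in> carrier R \<Longrightarrow> x \<in> tfree R M X \<Longrightarrow> fsmult R r x \<in> tfree R M X"
  by (rule tfreeI[where F="{p. x p \<noteq> \<zero>}"]) (auto simp: tfree_out tfree_fin fapp)

lemma fneg_tfree[simp]: "x \<in> tfree R M X \<Longrightarrow> fneg R x \<in> tfree R M X"
  by (rule tfreeI[where F="{p. x p \<noteq> \<zero>}"]) (auto simp: tfree_out tfree_fin fapp)

lemma fzero_tfree[simp]: "fzero R \<in> tfree R M X" by (simp add: tfree_iff fapp)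

lemma fdelta_tfree[simp]: "p \<in> carrier M \<times> carrier X \<Longrightarrow> fdelta R p \<in> tfree R M X"
  by (rule tfreeI[where F="{p}"]) (auto simp: fdelta_app)

lemma tfree_induct[consumes 1, case_names zero step]:
  assumes x: "x \<in> tfree R M X" and zero: "P (fzero R)"
  and step: "\<And>y r p. y \<in> tfree R M X \<Longrightarrow> P y \<Longrightarrow> r \<in> carrier R \<Longrightarrow> p \<in> carrier M \<times> carrier X
     \<Longrightarrow> y p = \<zero> \<Longrightarrow> P (fadd R y (fsmult R r (fdelta R p)))"
  shows "P x"
proof -
  have "\<forall>x. x \<in> tfree R M X \<longrightarrow> card {p. x p \<noteq> \<zero>} = n \<longrightarrow> P x" for n
  proof (induction n)
    case 0
    have "x = fzero R" if "finite {p. x p \<noteq> \<zero>}" "card {p. x p \<noteq> \<zero>} = 0" for x :: "_ \<Rightarrow> 'r"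
      using that by (intro ext) (auto simp: fapp)
    then show ?case using zero tfree_fin by blast
  next
    case (Suc n)
    show ?case
    proof (intro allI impI)
      fix x assume xt: "x \<in> tfree R M X" and c: "card {p. x p \<noteq> \<zero>} = Suc n"
      then obtain p where p: "x p \<noteq> \<zero>" by (metis (mono_tags, lifting) Collect_empty_eq card.empty nat.distinct(1))
      define y where "y = x(p := \<zero>)"
      have yt: "y \<in> tfree R M X"
        by (rule tfreeI[where F="{p. x p \<noteq> \<zero>}"]) (use xt in \<open>auto simp: y_def tfree_out tfree_fin\<close>)
      have "{q. y q \<noteq> \<zero>} = {q. x q \<noteq> \<zero>} - {p}" by (auto simp: y_def)
      then have "card {q. y q \<noteq> \<zero>} = n" using c p tfree_fin[OF xt] by simp
      then have Py: "P y" using Suc.IH yt by blast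
      have pc: "p \<in> carrier M \<times> carrier X" using p tfree_out[OF xt] by blast
      have "x = fadd R y (fsmult R (x p) (fdelta R p))"
        using xt by (intro ext) (auto simp: y_def fdelta_app fapp)
      moreover have "P (fadd R y (fsmult R (x p) (fdelta R p)))"
        by (rule step[OF yt Py]) (use xt pc in \<open>simp_all add: y_def\<close>)
      ultimately show "P x" by simp
    qed
  qed
  then show ?thesis using x by blast
qed

lemma module_add_closed[simp]: "module R M \<Longrightarrow> x \<in> carrier M \<Longrightarrow> y \<in> carrier M \<Longrightarrow> x \<oplus>\<^bsub>M\<^esub> y \<in> carrier M"
  by (rule abelian_monoid.a_closed[OF abelian_group.axioms(1)[OF module.axioms(2)]])

lemma module_zero_closed[simp]: "module R M \<Longrightarrow> \<zero>\<^bsub>M\<^esub> \<in> carrier M"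
  by (rule abelian_monoid.zero_closed[OF abelian_group.axioms(1)[OF module.axioms(2)]])

lemma module_neg_closed[simp]: "module R M \<Longrightarrow> x \<in> carrier M \<Longrightarrow> \<ominus>\<^bsub>M\<^esub> x \<in> carrier M"
  by (rule abelian_group.a_inv_closed[OF module.axioms(2)])

lemma module_minus_closed[simp]: "module R M \<Longrightarrow> x \<in> carrier M \<Longrightarrow> y \<in> carrier M \<Longrightarrow> x \<ominus>\<^bsub>M\<^esub> y \<in> carrier M"
  by (rule abelian_group.minus_closed[OF module.axioms(2)])

lemma module_smult_closed[simp]: "module R M \<Longrightarrow> r \<in> carrier R \<Longrightarrow> x \<in> carrier M \<Longrightarrow> r \<odot>\<^bsub>M\<^esub> x \<in> carrier M"
  by (rule module.smult_closed)

lemma tgens_ladd: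
  "m \<in> carrier M \<Longrightarrow> m' \<in> carrier M \<Longrightarrow> a \<in> carrier A \<Longrightarrow>
   fadd R (fdelta R (m \<oplus>\<^bsub>M\<^esub> m', a)) (fneg R (fadd R (fdelta R (m, a)) (fdelta R (m', a)))) \<in> tgens R M A"
  unfolding tgens_def by blast

lemma tgens_radd:
  "m \<in> carrier M \<Longrightarrow> a \<in> carrier A \<Longrightarrow> a' \<in> carrier A \<Longrightarrow>
   fadd R (fdelta R (m, a \<oplus>\<^bsub>A\<^esub> a')) (fneg R (fadd R (fdelta R (m, a)) (fdelta R (m, a')))) \<in> tgens R M A"
  unfolding tgens_def by blast

lemma tgens_lsmult:
  "r \<in> carrier R \<Longrightarrow> m \<in> carrier M \<Longrightarrow> a \<in> carrier A \<Longrightarrow>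
   fadd R (fdelta R (r \<odot>\<^bsub>M\<^esub> m, a)) (fneg R (fsmult R r (fdelta R (m, a)))) \<in> tgens R M A"
  unfolding tgens_def by blast

lemma tgens_rsmult:
  "r \<in> carrier R \<Longrightarrow> m \<in> carrier M \<Longrightarrow> a \<in> carrier A \<Longrightarrow>
   fadd R (fdelta R (m, r \<odot>\<^bsub>A\<^esub> a)) (fneg R (fsmult R r (fdelta R (m, a)))) \<in> tgens R M A"
  unfolding tgens_def by blast

lemma tgens_tfree: "module R M \<Longrightarrow> module R X \<Longrightarrow> tgens R M X \<subseteq> tfree R M X"
  unfolding tgens_def by auto

lemma trel_minimal:
  assumes "N \<subseteq> tfree R M X" "fzero R \<in> N" "tgens R M X \<subseteq> N"
    "\<And>x y. x \<in> N \<Longrightarrow> y \<in> N \<Longrightarrow> fadd R x y \<in> N"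
    "\<And>r x. r \<in> carrier R \<Longrightarrow> x \<in> N \<Longrightarrow> fsmult R r x \<in> N"
  shows "trel R M X \<subseteq> N"
  unfolding trel_def using assms by (intro Inter_lower) simp

lemma trel_fzero[simp]: "fzero R \<in> trel R M X"
  unfolding trel_def by blast
lemma trel_gens: "x \<in> tgens R M X \<Longrightarrow> x \<in> trel R M X"
  unfolding trel_def by blast
lemma trel_fadd[simp]: "x \<in> trel R M X \<Longrightarrow> y \<in> trel R M X \<Longrightarrow> fadd R x y \<in> trel R M X"
  unfolding trel_def by blast
lemma trel_fsmult[simp]: "r \<in> carrier R \<Longrightarrow> x \<in> trel R M X \<Longrightarrow> fsmult R r x \<in> trel R M X"
  unfolding trel_def by blast

lemma trel_tfree: "module R M \<Longrightarrow> module R X \<Longrightarrow> trel R M X \<subseteq> tfree R M X"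
  by (rule trel_minimal) (auto simp: tgens_tfree)

lemma trel_imp_tfree[simp]: "module R M \<Longrightarrow> module R X \<Longrightarrow> x \<in> trel R M X \<Longrightarrow> x \<in> tfree R M X"
  using trel_tfree by blast

lemma trel_rfuns[simp]: "module R M \<Longrightarrow> module R X \<Longrightarrow> x \<in> trel R M X \<Longrightarrow> x \<in> rfuns"
  using trel_tfree tfree_rfuns by blast

lemma trel_induct[consumes 3, case_names zero ladd radd lsmult rsmult add smult]:
  assumes "module R M" "module R A" "x \<in> trel R M A"
    and zero: "P (fzero R)"
    and ladd: "\<And>m m' a. m \<in> carrier M \<Longrightarrow> m' \<in> carrier M \<Longrightarrow> a \<in> carrier A \<Longrightarrow>
      P (fadd R (fdelta R (m \<oplus>\<^bsub>M\<^esub> m', a)) (fneg R (fadd R (fdelta R (m, a)) (fdelta R (m', a)))))"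
    and radd: "\<And>m a a'. m \<in> carrier M \<Longrightarrow> a \<in> carrier A \<Longrightarrow> a' \<in> carrier A \<Longrightarrow>
      P (fadd R (fdelta R (m, a \<oplus>\<^bsub>A\<^esub> a')) (fneg R (fadd R (fdelta R (m, a)) (fdelta R (m, a')))))"
    and lsmult: "\<And>r m a. r \<in> carrier R \<Longrightarrow> m \<in> carrier M \<Longrightarrow> a \<in> carrier A \<Longrightarrow>
      P (fadd R (fdelta R (r \<odot>\<^bsub>M\<^esub> m, a)) (fneg R (fsmult R r (fdelta R (m, a)))))"
    and rsmult: "\<And>r m a. r \<in> carrier R \<Longrightarrow> m \<in> carrier M \<Longrightarrow> a \<in> carrier A \<Longrightarrow>
      P (fadd R (fdelta R (m, r \<odot>\<^bsub>A\<^esub> a)) (fneg R (fsmult R r (fdelta R (m, a)))))"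
    and add: "\<And>x y. x \<in> trel R M A \<Longrightarrow> y \<in> trel R M A \<Longrightarrow> P x \<Longrightarrow> P y \<Longrightarrow> P (fadd R x y)"
    and smult: "\<And>r x. r \<in> carrier R \<Longrightarrow> x \<in> trel R M A \<Longrightarrow> P x \<Longrightarrow> P (fsmult R r x)"
  shows "P x"
proof -
  have "trel R M A \<subseteq> {x \<in> tfree R M A. x \<in> trel R M A \<and> P x}"
  proof (rule trel_minimal)
    show "tgens R M A \<subseteq> {x \<in> tfree R M A. x \<in> trel R M A \<and> P x}"
    proof
      fix x assume x: "x \<in> tgens R M A"
      then have "P x" unfolding tgens_def
        by (elim UnE CollectE exE conjE) (simp_all add: ladd radd lsmult rsmult)
      then show "x \<in> {x \<in> tfree R M A. x \<in> trel R M A \<and> P x}"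
        using x tgens_tfree[OF assms(1,2)] trel_gens by blast
    qed
  qed (auto intro: zero add smult)
  then show ?thesis using assms(3) by blast
qed

definition tequiv :: "('r,'m) module \<Rightarrow> ('r,'x) module \<Rightarrow> ('m \<times> 'x \<Rightarrow> 'r) \<Rightarrow> ('m \<times> 'x \<Rightarrow> 'r) \<Rightarrow> bool"
  where "tequiv M X x y \<longleftrightarrow> fadd R x (fneg R y) \<in> trel R M X"

lemma fdiff_swap: "x \<in> rfuns \<Longrightarrow> y \<in> rfuns \<Longrightarrow> fadd R y (fneg R x) = fneg R (fadd R x (fneg R y))"
proof (rule ext)
  fix p assume "x \<in> rfuns" "y \<in> rfuns"
  then have "x p \<in> carrier R" "y p \<in> carrier R" by auto
  then show "fadd R y (fneg R x) p = fneg R (fadd R x (fneg R y)) p" by (simp add: fapp) algebra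
qed

lemma fdiff_trans: "x \<in> rfuns \<Longrightarrow> y \<in> rfuns \<Longrightarrow> z \<in> rfuns \<Longrightarrow>
   fadd R x (fneg R z) = fadd R (fadd R x (fneg R y)) (fadd R y (fneg R z))"
proof (rule ext)
  fix p assume "x \<in> rfuns" "y \<in> rfuns" "z \<in> rfuns"
  then have "x p \<in> carrier R" "y p \<in> carrier R" "z p \<in> carrier R" by auto
  then show "fadd R x (fneg R z) p = fadd R (fadd R x (fneg R y)) (fadd R y (fneg R z)) p" by (simp add: fapp) algebra
qed

lemma fdiff_fadd: "x \<in> rfuns \<Longrightarrow> y \<in> rfuns \<Longrightarrow> x' \<in> rfuns \<Longrightarrow> y' \<in> rfuns \<Longrightarrow>
   fadd R (fadd R x y) (fneg R (fadd R x' y')) = fadd R (fadd R x (fneg R x')) (fadd R y (fneg R y'))"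
proof (rule ext)
  fix p assume "x \<in> rfuns" "y \<in> rfuns" "x' \<in> rfuns" "y' \<in> rfuns"
  then have "x p \<in> carrier R" "y p \<in> carrier R" "x' p \<in> carrier R" "y' p \<in> carrier R" by auto
  then show "fadd R (fadd R x y) (fneg R (fadd R x' y')) p = fadd R (fadd R x (fneg R x')) (fadd R y (fneg R y')) p"
    by (simp add: fapp) algebra
qed

lemma fdiff_fsmult: "r \<in> carrier R \<Longrightarrow> x \<in> rfuns \<Longrightarrow> y \<in> rfuns \<Longrightarrow>
   fadd R (fsmult R r x) (fneg R (fsmult R r y)) = fsmult R r (fadd R x (fneg R y))"
proof (rule ext)
  fix p assume "r \<in> carrier R" "x \<in> rfuns" "y \<in> rfuns"
  then have "x p \<in> carrier R" "y p \<in> carrier R" "r \<in> carrier R" by auto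
  then show "fadd R (fsmult R r x) (fneg R (fsmult R r y)) p = fsmult R r (fadd R x (fneg R y)) p"
    by (simp add: fapp) algebra
qed

lemma fdiff_move: "u \<in> rfuns \<Longrightarrow> v \<in> rfuns \<Longrightarrow> w \<in> rfuns \<Longrightarrow>
   fadd R v (fneg R (fadd R u (fneg R w))) = fneg R (fadd R u (fneg R (fadd R v w)))"
proof (rule ext)
  fix p assume "u \<in> rfuns" "v \<in> rfuns" "w \<in> rfuns"
  then have "u p \<in> carrier R" "v p \<in> carrier R" "w p \<in> carrier R" by auto
  then show "fadd R v (fneg R (fadd R u (fneg R w))) p = fneg R (fadd R u (fneg R (fadd R v w))) p"
    by (simp add: fapp) algebra
qed

lemma fdiff_fadd_cancel: "u \<in> rfuns \<Longrightarrow> v \<in> rfuns \<Longrightarrow> fadd R (fadd R u (fneg R v)) v = u"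
proof (rule ext)
  fix p assume "u \<in> rfuns" "v \<in> rfuns"
  then have "u p \<in> carrier R" "v p \<in> carrier R" by auto
  then show "fadd R (fadd R u (fneg R v)) v p = u p" by (simp add: fapp) algebra
qed

context
  fixes M :: "('r,'m) module" and X :: "('r,'x) module"
  assumes mM: "module R M" and mX: "module R X"
begin

lemma trel_fneg[simp]: "x \<in> trel R M X \<Longrightarrow> fneg R x \<in> trel R M X"
  using mM mX by (simp add: fneg_eq_fsmult)

lemma tequiv_refl[simp]: "x \<in> rfuns \<Longrightarrow> tequiv M X x x"
  by (simp add: tequiv_def)

lemma tequiv_sym: assumes "x \<in> rfuns" "y \<in> rfuns" "tequiv M X x y" shows "tequiv M X y x"
  using assms(3) unfolding tequiv_def fdiff_swap[OF assms(1,2)] by (rule trel_fneg)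

lemma tequiv_trans: "x \<in> rfuns \<Longrightarrow> y \<in> rfuns \<Longrightarrow> z \<in> rfuns \<Longrightarrow> tequiv M X x y \<Longrightarrow> tequiv M X y z \<Longrightarrow> tequiv M X x z"
  unfolding tequiv_def by (subst fdiff_trans[of x y z]) auto

lemma tequiv_add: "x \<in> rfuns \<Longrightarrow> y \<in> rfuns \<Longrightarrow> x' \<in> rfuns \<Longrightarrow> y' \<in> rfuns \<Longrightarrow> tequiv M X x x' \<Longrightarrow> tequiv M X y y'
   \<Longrightarrow> tequiv M X (fadd R x y) (fadd R x' y')"
  unfolding tequiv_def by (subst fdiff_fadd) auto

lemma tequiv_smult: "r \<in> carrier R \<Longrightarrow> x \<in> rfuns \<Longrightarrow> y \<in> rfuns \<Longrightarrow> tequiv M X x y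
   \<Longrightarrow> tequiv M X (fsmult R r x) (fsmult R r y)"
  unfolding tequiv_def by (subst fdiff_fsmult) auto

lemma tequiv_neg: "x \<in> rfuns \<Longrightarrow> y \<in> rfuns \<Longrightarrow> tequiv M X x y \<Longrightarrow> tequiv M X (fneg R x) (fneg R y)"
  using tequiv_smult[of "\<ominus> \<one>" x y] by (simp add: fneg_eq_fsmult)

lemma tequiv_zero_iff: "x \<in> rfuns \<Longrightarrow> tequiv M X x (fzero R) \<longleftrightarrow> x \<in> trel R M X"
  unfolding tequiv_def by (simp add: fapp)

lemma tequiv_move: "u \<in> rfuns \<Longrightarrow> v \<in> rfuns \<Longrightarrow> w \<in> rfuns \<Longrightarrow> tequiv M X u (fadd R v w) \<Longrightarrow>
  tequiv M X v (fadd R u (fneg R w))"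
  unfolding tequiv_def by (subst fdiff_move) auto

lemma tequiv_rel: "x \<in> rfuns \<Longrightarrow> y \<in> rfuns \<Longrightarrow> tequiv M X x y \<Longrightarrow> y \<in> trel R M X \<Longrightarrow> x \<in> trel R M X"
  using tequiv_trans[of x y "fzero R"] by (simp add: tequiv_zero_iff)

lemma tequiv_delta_ladd: "m \<in> carrier M \<Longrightarrow> m' \<in> carrier M \<Longrightarrow> a \<in> carrier X \<Longrightarrow>
  tequiv M X (fdelta R (m \<oplus>\<^bsub>M\<^esub> m', a)) (fadd R (fdelta R (m, a)) (fdelta R (m', a)))"
  unfolding tequiv_def by (intro trel_gens tgens_ladd)

lemma tequiv_delta_radd: "m \<in> carrier M \<Longrightarrow> a \<in> carrier X \<Longrightarrow> a' \<in> carrier X \<Longrightarrow>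
  tequiv M X (fdelta R (m, a \<oplus>\<^bsub>X\<^esub> a')) (fadd R (fdelta R (m, a)) (fdelta R (m, a')))"
  unfolding tequiv_def by (intro trel_gens tgens_radd)

lemma tequiv_delta_lsmult: "r \<in> carrier R \<Longrightarrow> m \<in> carrier M \<Longrightarrow> a \<in> carrier X \<Longrightarrow>
  tequiv M X (fdelta R (r \<odot>\<^bsub>M\<^esub> m, a)) (fsmult R r (fdelta R (m, a)))"
  unfolding tequiv_def by (intro trel_gens tgens_lsmult)

lemma tequiv_delta_rsmult: "r \<in> carrier R \<Longrightarrow> m \<in> carrier M \<Longrightarrow> a \<in> carrier X \<Longrightarrow>
  tequiv M X (fdelta R (m, r \<odot>\<^bsub>X\<^esub> a)) (fsmult R r (fdelta R (m, a)))"
  unfolding tequiv_def by (intro trel_gens tgens_rsmult)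

lemma trel_delta_lzero: "a \<in> carrier X \<Longrightarrow> fdelta R (\<zero>\<^bsub>M\<^esub>, a) \<in> trel R M X"
proof -
  assume a: "a \<in> carrier X"
  have "\<zero> \<odot>\<^bsub>M\<^esub> \<zero>\<^bsub>M\<^esub> = \<zero>\<^bsub>M\<^esub>" using mM by (simp add: module.smult_l_null)
  then have "tequiv M X (fdelta R (\<zero>\<^bsub>M\<^esub>, a)) (fzero R)"
    using tequiv_delta_lsmult[of \<zero> "\<zero>\<^bsub>M\<^esub>" a] a mM by simp
  then show ?thesis using tequiv_zero_iff by simp
qed

lemma trel_delta_rzero: "m \<in> carrier M \<Longrightarrow> fdelta R (m, \<zero>\<^bsub>X\<^esub>) \<in> trel R M X"
proof -
  assume m: "m \<in> carrier M"
  have "\<zero> \<odot>\<^bsub>X\<^esub> \<zero>\<^bsub>X\<^esub> = \<zero>\<^bsub>X\<^esub>" using mX by (simp add: module.smult_l_null)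
  then have "tequiv M X (fdelta R (m, \<zero>\<^bsub>X\<^esub>)) (fzero R)"
    using tequiv_delta_rsmult[of \<zero> m "\<zero>\<^bsub>X\<^esub>"] m mX by simp
  then show ?thesis using tequiv_zero_iff by simp
qed

lemma tequiv_delta_lminus: "m \<in> carrier M \<Longrightarrow> m' \<in> carrier M \<Longrightarrow> a \<in> carrier X \<Longrightarrow>
  tequiv M X (fdelta R (m \<ominus>\<^bsub>M\<^esub> m', a)) (fadd R (fdelta R (m, a)) (fneg R (fdelta R (m', a))))"
proof -
  assume h: "m \<in> carrier M" "m' \<in> carrier M" "a \<in> carrier X"
  interpret M: module R M by (rule mM)
  have "(m \<ominus>\<^bsub>M\<^esub> m') \<oplus>\<^bsub>M\<^esub> m' = m" using h
    by (simp add: M.minus_eq M.a_assoc M.l_neg)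
  then have "tequiv M X (fdelta R (m, a)) (fadd R (fdelta R (m \<ominus>\<^bsub>M\<^esub> m', a)) (fdelta R (m', a)))"
    using tequiv_delta_ladd[of "m \<ominus>\<^bsub>M\<^esub> m'" m' a] h by simp
  from tequiv_move[OF _ _ _ this] show ?thesis by simp
qed

end

end

lemma mod_hom_closed: "mod_hom R M N f \<Longrightarrow> x \<in> carrier M \<Longrightarrow> f x \<in> carrier N"
  unfolding mod_hom_def by blast
lemma mod_hom_funcset: "mod_hom R M N f \<Longrightarrow> f \<in> carrier M \<rightarrow> carrier N"
  unfolding mod_hom_def by blast
lemma mod_hom_add: "mod_hom R M N f \<Longrightarrow> x \<in> carrier M \<Longrightarrow> y \<in> carrier M \<Longrightarrow> f (x \<oplus>\<^bsub>M\<^esub> y) = f x \<oplus>\<^bsub>N\<^esub> f y"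
  unfolding mod_hom_def by blast
lemma mod_hom_smult: "mod_hom R M N f \<Longrightarrow> r \<in> carrier R \<Longrightarrow> x \<in> carrier M \<Longrightarrow> f (r \<odot>\<^bsub>M\<^esub> x) = r \<odot>\<^bsub>N\<^esub> f x"
  unfolding mod_hom_def by blast
lemma mod_hom_id: "mod_hom R M M id"
  unfolding mod_hom_def by simp

context tensor_cring begin

lemma mod_hom_zero: "module R M \<Longrightarrow> module R N \<Longrightarrow> mod_hom R M N f \<Longrightarrow> f \<zero>\<^bsub>M\<^esub> = \<zero>\<^bsub>N\<^esub>"
proof -
  assume m: "module R M" "module R N" "mod_hom R M N f"
  have "f (\<zero> \<odot>\<^bsub>M\<^esub> \<zero>\<^bsub>M\<^esub>) = \<zero> \<odot>\<^bsub>N\<^esub> f \<zero>\<^bsub>M\<^esub>" using m by (intro mod_hom_smult) auto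
  moreover have "\<zero> \<odot>\<^bsub>M\<^esub> \<zero>\<^bsub>M\<^esub> = \<zero>\<^bsub>M\<^esub>" using m by (simp add: module.smult_l_null)
  moreover have "\<zero> \<odot>\<^bsub>N\<^esub> f \<zero>\<^bsub>M\<^esub> = \<zero>\<^bsub>N\<^esub>" using m mod_hom_closed[OF m(3)] by (simp add: module.smult_l_null)
  ultimately show ?thesis by simp
qed

lemma mod_hom_minus: "module R M \<Longrightarrow> module R N \<Longrightarrow> mod_hom R M N f \<Longrightarrow> x \<in> carrier M \<Longrightarrow> y \<in> carrier M \<Longrightarrow>
  f (x \<ominus>\<^bsub>M\<^esub> y) = f x \<ominus>\<^bsub>N\<^esub> f y"
proof -
  assume m: "module R M" "module R N" "mod_hom R M N f" and xy: "x \<in> carrier M" "y \<in> carrier M"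
  interpret M: module R M by fact
  interpret N: module R N by fact
  have "f ((x \<ominus>\<^bsub>M\<^esub> y) \<oplus>\<^bsub>M\<^esub> y) = f (x \<ominus>\<^bsub>M\<^esub> y) \<oplus>\<^bsub>N\<^esub> f y" using xy m by (intro mod_hom_add) auto
  moreover have "(x \<ominus>\<^bsub>M\<^esub> y) \<oplus>\<^bsub>M\<^esub> y = x" using xy by (simp add: M.minus_eq M.a_assoc M.l_neg)
  ultimately have e: "f x = f (x \<ominus>\<^bsub>M\<^esub> y) \<oplus>\<^bsub>N\<^esub> f y" by simp
  have c: "f (x \<ominus>\<^bsub>M\<^esub> y) \<in> carrier N" "f y \<in> carrier N" using xy mod_hom_closed[OF m(3)] by auto
  show ?thesis unfolding e using c by (simp add: N.minus_eq N.a_assoc N.r_neg)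
qed

lemma tpush_app: "tpush R M A M' A' f g x q = (if q \<in> carrier M' \<times> carrier A'
   then finsum R x {(m, a). m \<in> carrier M \<and> a \<in> carrier A \<and> f m = fst q \<and> g a = snd q \<and> x (m, a) \<noteq> \<zero>}
   else \<zero>)"
  by (cases q) (simp add: tpush_def)

lemma tpush_alt:
  assumes x: "x \<in> tfree R M A" and D: "finite D" "D \<subseteq> carrier M \<times> carrier A" "{p. x p \<noteq> \<zero>} \<subseteq> D"
  shows "tpush R M A M' A' f g x q = (if q \<in> carrier M' \<times> carrier A'
   then finsum R x {p \<in> D. f (fst p) = fst q \<and> g (snd p) = snd q} else \<zero>)"
proof (cases "q \<in> carrier M' \<times> carrier A'")
  case False
  then show ?thesis by (simp add: tpush_app)
next
  case True
  let ?A0 = "{(m, a). m \<in> carrier M \<and> a \<in> carrier A \<and> f m = fst q \<and> g a = snd q \<and> x (m, a) \<noteq> \<zero>}"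
  let ?B = "{p \<in> D. f (fst p) = fst q \<and> g (snd p) = snd q}"
  have fB: "finite ?B" using D(1) by simp
  have sub: "?A0 \<subseteq> ?B"
  proof
    fix p assume "p \<in> ?A0"
    then show "p \<in> ?B" using D(3) by (cases p) auto
  qed
  have z: "x i = \<zero>" if "i \<in> ?B - ?A0" for i
  proof -
    obtain m a where i: "i = (m, a)" by (cases i)
    have ma: "m \<in> carrier M" "a \<in> carrier A" using that D(2) i by auto
    have fq: "f m = fst q" "g a = snd q" using that i by auto
    show ?thesis
    proof (rule ccontr)
      assume "x i \<noteq> \<zero>"
      then have "i \<in> ?A0" using ma fq i by simp
      then show False using that by blast
    qed
  qed
  have "finsum R x ?A0 = finsum R x ?B"
  proof (rule add.finprod_mono_neutral_cong_left[OF fB sub])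
    show "\<And>i. i \<in> ?B - ?A0 \<Longrightarrow> x i = \<zero>" by (rule z)
    show "x \<in> ?B \<rightarrow> carrier R" by (intro funcsetI) (rule rfunsD[OF tfree_rfuns[OF x]])
  qed simp
  then show ?thesis using True by (simp add: tpush_app)
qed

lemma tpush_fadd:
  assumes x: "x \<in> tfree R M A" and y: "y \<in> tfree R M A"
  shows "tpush R M A M' A' f g (fadd R x y) = fadd R (tpush R M A M' A' f g x) (tpush R M A M' A' f g y)"
proof (rule ext)
  fix q
  let ?D = "{p. x p \<noteq> \<zero>} \<union> {p. y p \<noteq> \<zero>}"
  have fD: "finite ?D" using tfree_fin[OF x] tfree_fin[OF y] by simp
  have sD: "?D \<subseteq> carrier M \<times> carrier A" using tfree_supp[OF x] tfree_supp[OF y] by blast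
  have xy: "fadd R x y \<in> tfree R M A" using x y by simp
  have sxy: "{p. fadd R x y p \<noteq> \<zero>} \<subseteq> ?D" using x y by (auto simp: fapp)
  let ?B = "{p \<in> ?D. f (fst p) = fst q \<and> g (snd p) = snd q}"
  have fe: "finsum R (fadd R x y) ?B = finsum R x ?B \<oplus> finsum R y ?B"
    unfolding fadd_def using x y fD by (intro finsum_addf) auto
  have e1: "tpush R M A M' A' f g (fadd R x y) q = (if q \<in> carrier M' \<times> carrier A' then finsum R (fadd R x y) ?B else \<zero>)"
    by (rule tpush_alt[OF xy fD sD sxy])
  have e2: "tpush R M A M' A' f g x q = (if q \<in> carrier M' \<times> carrier A' then finsum R x ?B else \<zero>)"
    by (rule tpush_alt[OF x fD sD]) auto
  have e3: "tpush R M A M' A' f g y q = (if q \<in> carrier M' \<times> carrier A' then finsum R y ?B else \<zero>)"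
    by (rule tpush_alt[OF y fD sD]) auto
  show "tpush R M A M' A' f g (fadd R x y) q = fadd R (tpush R M A M' A' f g x) (tpush R M A M' A' f g y) q"
    unfolding fadd_app[of R "tpush R M A M' A' f g x"] e1 e2 e3 fe by simp
qed

lemma tpush_fsmult:
  assumes x: "x \<in> tfree R M A" and r: "r \<in> carrier R"
  shows "tpush R M A M' A' f g (fsmult R r x) = fsmult R r (tpush R M A M' A' f g x)"
proof (rule ext)
  fix q
  let ?D = "{p. x p \<noteq> \<zero>}"
  have fD: "finite ?D" using tfree_fin[OF x] by simp
  have sD: "?D \<subseteq> carrier M \<times> carrier A" using tfree_supp[OF x] by blast
  have xy: "fsmult R r x \<in> tfree R M A" using x r by simp
  have sxy: "{p. fsmult R r x p \<noteq> \<zero>} \<subseteq> ?D" using x r by (auto simp: fapp)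
  let ?B = "{p \<in> ?D. f (fst p) = fst q \<and> g (snd p) = snd q}"
  have fe: "finsum R (fsmult R r x) ?B = r \<otimes> finsum R x ?B"
    unfolding fsmult_def using x r fD by (intro finsum_rdistr[symmetric]) auto
  have e1: "tpush R M A M' A' f g (fsmult R r x) q = (if q \<in> carrier M' \<times> carrier A' then finsum R (fsmult R r x) ?B else \<zero>)"
    by (rule tpush_alt[OF xy fD sD sxy])
  have e2: "tpush R M A M' A' f g x q = (if q \<in> carrier M' \<times> carrier A' then finsum R x ?B else \<zero>)"
    by (rule tpush_alt[OF x fD sD]) auto
  show "tpush R M A M' A' f g (fsmult R r x) q = fsmult R r (tpush R M A M' A' f g x) q"
    unfolding fsmult_app[of R r "tpush R M A M' A' f g x"] e1 e2 fe using r by simp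
qed

lemma tpush_fzero: "tpush R M A M' A' f g (fzero R) = fzero R"
proof (rule ext)
  fix q show "tpush R M A M' A' f g (fzero R) q = fzero R q"
    using tpush_alt[OF fzero_tfree, of "{}" M A M' A' f g q] by (simp add: fapp)
qed

lemma tpush_fdelta:
  assumes p: "p \<in> carrier M \<times> carrier A" and fp: "f (fst p) \<in> carrier M'" "g (snd p) \<in> carrier A'"
  shows "tpush R M A M' A' f g (fdelta R p) = fdelta R (f (fst p), g (snd p))"
proof (rule ext)
  fix q
  have d: "fdelta R p \<in> tfree R M A" using p by simp
  have s: "{q. fdelta R p q \<noteq> \<zero>} \<subseteq> {p}" by (auto simp: fdelta_app)
  have e: "{p' \<in> {p}. f (fst p') = fst q \<and> g (snd p') = snd q} =
     (if (f (fst p), g (snd p)) = q then {p} else {})" by (cases q) auto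
  have e1: "tpush R M A M' A' f g (fdelta R p) q = (if q \<in> carrier M' \<times> carrier A'
     then finsum R (fdelta R p) {p' \<in> {p}. f (fst p') = fst q \<and> g (snd p') = snd q} else \<zero>)"
    by (rule tpush_alt[OF d _ _ s]) (use p in auto)
  show "tpush R M A M' A' f g (fdelta R p) q = fdelta R (f (fst p), g (snd p)) q"
  proof (cases "(f (fst p), g (snd p)) = q")
    case True
    then have "q \<in> carrier M' \<times> carrier A'" using fp by auto
    then show ?thesis unfolding e1 e using True by (simp add: fdelta_app)
  next
    case False
    then show ?thesis unfolding e1 e using False by (auto simp: fdelta_app)
  qed
qed

lemma tpush_fneg:
  assumes x: "x \<in> tfree R M A"
  shows "tpush R M A M' A' f g (fneg R x) = fneg R (tpush R M A M' A' f g x)"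
proof -
  have "tpush R M A M' A' f g x \<in> rfuns"
    using x by (auto simp: tpush_app intro!: rfunsI finsum_closed)
  then show ?thesis using x by (simp add: fneg_eq_fsmult tpush_fsmult)
qed

lemma tpush_rfuns[simp]: "x \<in> rfuns \<Longrightarrow> tpush R M A M' A' f g x \<in> rfuns"
  by (auto simp: tpush_app intro!: rfunsI finsum_closed)

lemma tpush_tfree:
  assumes x: "x \<in> tfree R M A"
  shows "tpush R M A M' A' f g x \<in> tfree R M' A'"
proof (rule tfreeI[where F="(\<lambda>p. (f (fst p), g (snd p))) ` {p. x p \<noteq> \<zero>}"])
  show "tpush R M A M' A' f g x \<in> rfuns" using x by simp
  show "tpush R M A M' A' f g x q = \<zero>" if "q \<notin> carrier M' \<times> carrier A'" for q
    using that by (simp add: tpush_app)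
  show "finite ((\<lambda>p. (f (fst p), g (snd p))) ` {p. x p \<noteq> \<zero>})" using tfree_fin[OF x] by simp
  show "{p. tpush R M A M' A' f g x p \<noteq> \<zero>} \<subseteq> (\<lambda>p. (f (fst p), g (snd p))) ` {p. x p \<noteq> \<zero>}"
  proof
    fix q assume q: "q \<in> {p. tpush R M A M' A' f g x p \<noteq> \<zero>}"
    let ?A0 = "{(m, a). m \<in> carrier M \<and> a \<in> carrier A \<and> f m = fst q \<and> g a = snd q \<and> x (m, a) \<noteq> \<zero>}"
    have "?A0 \<noteq> {}"
    proof
      assume e0: "?A0 = {}"
      have "tpush R M A M' A' f g x q = \<zero>" by (subst tpush_app, subst e0, simp)
      then show False using q by simp
    qed
    then obtain m a where "m \<in> carrier M" "a \<in> carrier A" "f m = fst q" "g a = snd q" "x (m, a) \<noteq> \<zero>"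
      by blast
    then show "q \<in> (\<lambda>p. (f (fst p), g (snd p))) ` {p. x p \<noteq> \<zero>}"
      by (intro image_eqI[where x="(m, a)"]) auto
  qed
qed

lemma tpush_step:
  assumes "y \<in> tfree R M A" "r \<in> carrier R" "m \<in> carrier M" "a \<in> carrier A"
    "f m \<in> carrier M'" "g a \<in> carrier A'"
  shows "tpush R M A M' A' f g (fadd R y (fsmult R r (fdelta R (m, a)))) =
    fadd R (tpush R M A M' A' f g y) (fsmult R r (fdelta R (f m, g a)))"
  using assms by (simp add: tpush_fadd tpush_fsmult tpush_fdelta)

lemma tpush_comp:
  assumes x: "x \<in> tfree R M A"
    and f: "f \<in> carrier M \<rightarrow> carrier M'" and g: "g \<in> carrier A \<rightarrow> carrier A'"
    and f': "f' \<in> carrier M' \<rightarrow> carrier M''" and g': "g' \<in> carrier A' \<rightarrow> carrier A''"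
  shows "tpush R M' A' M'' A'' f' g' (tpush R M A M' A' f g x) = tpush R M A M'' A'' (\<lambda>m. f' (f m)) (\<lambda>a. g' (g a)) x"
  using x
proof (induction rule: tfree_induct)
  case zero
  then show ?case by (simp only: tpush_fzero)
next
  case (step y r p)
  obtain m a where p: "p = (m, a)" by (cases p)
  have m: "m \<in> carrier M" "a \<in> carrier A" using step p by auto
  have "tpush R M A M' A' f g (fadd R y (fsmult R r (fdelta R p))) =
    fadd R (tpush R M A M' A' f g y) (fsmult R r (fdelta R (f m, g a)))"
    unfolding p using step m f g by (intro tpush_step) auto
  moreover have "tpush R M' A' M'' A'' f' g' (fadd R (tpush R M A M' A' f g y) (fsmult R r (fdelta R (f m, g a))))
    = fadd R (tpush R M' A' M'' A'' f' g' (tpush R M A M' A' f g y)) (fsmult R r (fdelta R (f' (f m), g' (g a))))"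
    using step m f g f' g' by (intro tpush_step) (auto intro: tpush_tfree)
  moreover have "tpush R M A M'' A'' (\<lambda>m. f' (f m)) (\<lambda>a. g' (g a)) (fadd R y (fsmult R r (fdelta R p))) =
    fadd R (tpush R M A M'' A'' (\<lambda>m. f' (f m)) (\<lambda>a. g' (g a)) y) (fsmult R r (fdelta R (f' (f m), g' (g a))))"
    unfolding p using step m f g f' g' by (intro tpush_step) auto
  ultimately show ?case using step.IH by simp
qed

lemma tpush_commute:
  assumes x: "x \<in> tfree R M1 X1" and f: "f \<in> carrier M1 \<rightarrow> carrier M2" and g: "g \<in> carrier X1 \<rightarrow> carrier X2"
  shows "tpush R M2 X1 M2 X2 id g (tpush R M1 X1 M2 X1 f id x) = tpush R M1 X2 M2 X2 f id (tpush R M1 X1 M1 X2 id g x)"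
proof -
  have "tpush R M2 X1 M2 X2 id g (tpush R M1 X1 M2 X1 f id x) = tpush R M1 X1 M2 X2 (\<lambda>m. id (f m)) (\<lambda>a. g (id a)) x"
    using x f g by (intro tpush_comp) auto
  also have "\<dots> = tpush R M1 X1 M2 X2 (\<lambda>m. f (id m)) (\<lambda>a. id (g a)) x" by simp
  also have "\<dots> = tpush R M1 X2 M2 X2 f id (tpush R M1 X1 M1 X2 id g x)"
    using x f g by (intro tpush_comp[symmetric]) auto
  finally show ?thesis .
qed

lemma tpush_zero_map:
  assumes mM2: "module R M2" and mX2: "module R X2" and x: "x \<in> tfree R M1 X1"
    and f: "\<And>m. m \<in> carrier M1 \<Longrightarrow> f m = \<zero>\<^bsub>M2\<^esub>" and g: "g \<in> carrier X1 \<rightarrow> carrier X2"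
  shows "tpush R M1 X1 M2 X2 f g x \<in> trel R M2 X2"
  using x
proof (induction rule: tfree_induct)
  case zero
  then show ?case by (simp add: tpush_fzero)
next
  case (step y r p)
  obtain m a where p: "p = (m, a)" by (cases p)
  have ma: "m \<in> carrier M1" "a \<in> carrier X1" using step p by auto
  have ga: "g a \<in> carrier X2" using g ma by auto
  have "tpush R M1 X1 M2 X2 f g (fadd R y (fsmult R r (fdelta R p))) =
     fadd R (tpush R M1 X1 M2 X2 f g y) (fsmult R r (fdelta R (f m, g a)))"
    unfolding p using step ma ga f mM2 by (intro tpush_step) auto
  moreover have "fdelta R (f m, g a) \<in> trel R M2 X2" using f[OF ma(1)] trel_delta_lzero[OF mM2 mX2 ga] by simp
  ultimately show ?case using step by simp
qed

context
  fixes M :: "('r,'m) module" and A :: "('r,'a) module" and M' :: "('r,'m2) module" and A' :: "('r,'a2) module"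
    and f g
  assumes mM: "module R M" and mA: "module R A" and mM': "module R M'" and mA': "module R A'"
    and hf: "mod_hom R M M' f" and hg: "mod_hom R A A' g"
begin

lemma tpush_trel:
  assumes x: "x \<in> trel R M A"
  shows "tpush R M A M' A' f g x \<in> trel R M' A'"
proof -
  have fc: "\<And>m. m \<in> carrier M \<Longrightarrow> f m \<in> carrier M'" by (rule mod_hom_closed[OF hf])
  have gc: "\<And>a. a \<in> carrier A \<Longrightarrow> g a \<in> carrier A'" by (rule mod_hom_closed[OF hg])
  show ?thesis using mM mA x
  proof (induction rule: trel_induct)
    case zero
    then show ?case by (simp add: tpush_fzero)
  next
    case (ladd m m' a)
    then have "m \<oplus>\<^bsub>M\<^esub> m' \<in> carrier M" "f (m \<oplus>\<^bsub>M\<^esub> m') \<in> carrier M'" using mM fc by simp_all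
    with ladd have "tpush R M A M' A' f g (fadd R (fdelta R (m \<oplus>\<^bsub>M\<^esub> m', a)) (fneg R (fadd R (fdelta R (m, a)) (fdelta R (m', a)))))
        = fadd R (fdelta R (f m \<oplus>\<^bsub>M'\<^esub> f m', g a)) (fneg R (fadd R (fdelta R (f m, g a)) (fdelta R (f m', g a))))"
      using fc gc by (simp add: tpush_fadd tpush_fneg tpush_fdelta mod_hom_add[OF hf])
    then show ?case using ladd fc gc by (simp add: trel_gens tgens_ladd)
  next
    case (radd m a a')
    then have "a \<oplus>\<^bsub>A\<^esub> a' \<in> carrier A" "g (a \<oplus>\<^bsub>A\<^esub> a') \<in> carrier A'" using mA gc by simp_all
    with radd have "tpush R M A M' A' f g (fadd R (fdelta R (m, a \<oplus>\<^bsub>A\<^esub> a')) (fneg R (fadd R (fdelta R (m, a)) (fdelta R (m, a')))))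
        = fadd R (fdelta R (f m, g a \<oplus>\<^bsub>A'\<^esub> g a')) (fneg R (fadd R (fdelta R (f m, g a)) (fdelta R (f m, g a'))))"
      using fc gc by (simp add: tpush_fadd tpush_fneg tpush_fdelta mod_hom_add[OF hg])
    then show ?case using radd fc gc by (simp add: trel_gens tgens_radd)
  next
    case (lsmult r m a)
    then have "r \<odot>\<^bsub>M\<^esub> m \<in> carrier M" "f (r \<odot>\<^bsub>M\<^esub> m) \<in> carrier M'" using mM fc by simp_all
    with lsmult have "tpush R M A M' A' f g (fadd R (fdelta R (r \<odot>\<^bsub>M\<^esub> m, a)) (fneg R (fsmult R r (fdelta R (m, a)))))
        = fadd R (fdelta R (r \<odot>\<^bsub>M'\<^esub> f m, g a)) (fneg R (fsmult R r (fdelta R (f m, g a))))"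
      using fc gc by (simp add: tpush_fadd tpush_fneg tpush_fsmult tpush_fdelta mod_hom_smult[OF hf])
    then show ?case using lsmult fc gc by (simp add: trel_gens tgens_lsmult)
  next
    case (rsmult r m a)
    then have "r \<odot>\<^bsub>A\<^esub> a \<in> carrier A" "g (r \<odot>\<^bsub>A\<^esub> a) \<in> carrier A'" using mA gc by simp_all
    with rsmult have "tpush R M A M' A' f g (fadd R (fdelta R (m, r \<odot>\<^bsub>A\<^esub> a)) (fneg R (fsmult R r (fdelta R (m, a)))))
        = fadd R (fdelta R (f m, r \<odot>\<^bsub>A'\<^esub> g a)) (fneg R (fsmult R r (fdelta R (f m, g a))))"
      using fc gc by (simp add: tpush_fadd tpush_fneg tpush_fsmult tpush_fdelta mod_hom_smult[OF hg])
    then show ?case using rsmult fc gc by (simp add: trel_gens tgens_rsmult)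
  next
    case (add x y)
    then show ?case using mM mA by (simp add: tpush_fadd)
  next
    case (smult r x)
    then show ?case using mM mA by (simp add: tpush_fsmult)
  qed
qed

lemma tpush_tequiv: "x \<in> tfree R M A \<Longrightarrow> y \<in> tfree R M A \<Longrightarrow> tequiv M A x y \<Longrightarrow>
  tequiv M' A' (tpush R M A M' A' f g x) (tpush R M A M' A' f g y)"
  unfolding tequiv_def by (drule tpush_trel) (simp add: tpush_fadd tpush_fneg)

end

end

section \<open>Symmetry of the tensor product\<close>

definition fswap :: "('a \<times> 'b \<Rightarrow> 'r) \<Rightarrow> ('b \<times> 'a \<Rightarrow> 'r)" where "fswap x = (\<lambda>q. x (snd q, fst q))"

lemma fswap_fswap[simp]: "fswap (fswap x) = x" by (simp add: fswap_def)
lemma fswap_fadd: "fswap (fadd R x y) = fadd R (fswap x) (fswap y)" by (rule ext) (simp add: fswap_def fapp)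
lemma fswap_fsmult: "fswap (fsmult R r x) = fsmult R r (fswap x)" by (rule ext) (simp add: fswap_def fapp)
lemma fswap_fneg: "fswap (fneg R x) = fneg R (fswap x)" by (rule ext) (simp add: fswap_def fapp)
lemma fswap_fzero: "fswap (fzero R) = fzero R" by (rule ext) (simp add: fswap_def fapp)
lemma fswap_fdelta: "fswap (fdelta R (m, a)) = fdelta R (a, m)" by (rule ext) (auto simp: fswap_def fdelta_app)
lemmas fswap_simps = fswap_fadd fswap_fsmult fswap_fneg fswap_fzero fswap_fdelta

context tensor_cring begin

lemma fswap_rfuns[simp]: "x \<in> rfuns \<Longrightarrow> fswap x \<in> rfuns" by (auto simp: fswap_def)

lemma fswap_tfree[simp]: assumes x: "x \<in> tfree R M X" shows "fswap x \<in> tfree R X M"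
proof (rule tfreeI[where F="(\<lambda>q. (snd q, fst q)) ` {p. x p \<noteq> \<zero>}"])
  show "fswap x \<in> rfuns" using x by simp
  show "fswap x p = \<zero>" if "p \<notin> carrier X \<times> carrier M" for p
  proof -
    have "(snd p, fst p) \<notin> carrier M \<times> carrier X" using that by (cases p) auto
    then show ?thesis unfolding fswap_def using tfree_out[OF x] by simp
  qed
  show "{p. fswap x p \<noteq> \<zero>} \<subseteq> (\<lambda>q. (snd q, fst q)) ` {p. x p \<noteq> \<zero>}"
  proof
    fix p assume "p \<in> {p. fswap x p \<noteq> \<zero>}"
    then show "p \<in> (\<lambda>q. (snd q, fst q)) ` {p. x p \<noteq> \<zero>}"
      by (intro image_eqI[where x="(snd p, fst p)"]) (auto simp: fswap_def)
  qed
  show "finite ((\<lambda>q. (snd q, fst q)) ` {p. x p \<noteq> \<zero>})" using tfree_fin[OF x] by simp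
qed

lemma fswap_trel:
  assumes "module R M" "module R X" "x \<in> trel R M X"
  shows "fswap x \<in> trel R X M"
  using assms
proof (induction rule: trel_induct)
  case (add x y)
  then show ?case by (simp add: fswap_fadd)
next
  case (smult r x)
  then show ?case by (simp add: fswap_fsmult)
qed (simp_all add: fswap_simps trel_gens tgens_ladd tgens_radd tgens_lsmult tgens_rsmult)

lemma fswap_tequiv: "module R M \<Longrightarrow> module R X \<Longrightarrow> tequiv M X x y \<Longrightarrow> tequiv X M (fswap x) (fswap y)"
  unfolding tequiv_def by (drule fswap_trel) (auto simp: fswap_simps)

lemma fswap_tequiv_iff: "module R M \<Longrightarrow> module R X \<Longrightarrow> tequiv X M (fswap x) (fswap y) \<longleftrightarrow> tequiv M X x y"
  using fswap_tequiv[of M X x y] fswap_tequiv[of X M "fswap x" "fswap y"] by auto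

lemma fswap_trel_iff: "module R M \<Longrightarrow> module R X \<Longrightarrow> fswap x \<in> trel R X M \<longleftrightarrow> x \<in> trel R M X"
  using fswap_trel[of M X x] fswap_trel[of X M "fswap x"] by auto

lemma fswap_tpush:
  assumes x: "x \<in> tfree R M A" and f: "f \<in> carrier M \<rightarrow> carrier M'" and g: "g \<in> carrier A \<rightarrow> carrier A'"
  shows "fswap (tpush R M A M' A' f g x) = tpush R A M A' M' g f (fswap x)"
  using x
proof (induction rule: tfree_induct)
  case zero
  then show ?case by (simp only: tpush_fzero fswap_fzero)
next
  case (step y r p)
  obtain m a where p: "p = (m, a)" by (cases p)
  have m: "m \<in> carrier M" "a \<in> carrier A" using step p by auto
  have "tpush R M A M' A' f g (fadd R y (fsmult R r (fdelta R p))) =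
    fadd R (tpush R M A M' A' f g y) (fsmult R r (fdelta R (f m, g a)))"
    unfolding p using step m f g by (intro tpush_step) auto
  moreover have "tpush R A M A' M' g f (fadd R (fswap y) (fsmult R r (fdelta R (a, m)))) =
    fadd R (tpush R A M A' M' g f (fswap y)) (fsmult R r (fdelta R (g a, f m)))"
    using step m f g by (intro tpush_step) auto
  ultimately show ?case using step.IH unfolding p by (simp add: fswap_simps)
qed

lemma tpush_inj_swap:
  assumes mM: "module R M" and mM': "module R M'" and mX: "module R X" and f: "f \<in> carrier M \<rightarrow> carrier M'"
    and inj: "\<And>x. x \<in> tfree R X M \<Longrightarrow> tpush R X M X M' id f x \<in> trel R X M' \<Longrightarrow> fsmult R t x \<in> trel R X M"
    and x: "x \<in> tfree R M X" and k: "tpush R M X M' X f id x \<in> trel R M' X"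
  shows "fsmult R t x \<in> trel R M X"
proof -
  have "fswap (tpush R M X M' X f id x) = tpush R X M X M' id f (fswap x)"
    using fswap_tpush[OF x f, of id] by simp
  then have "tpush R X M X M' id f (fswap x) \<in> trel R X M'" using k fswap_trel[OF mM' mX] by metis
  then have "fswap (fsmult R t x) \<in> trel R X M" using inj fswap_tfree[OF x] by (simp add: fswap_fsmult)
  then show ?thesis using fswap_trel_iff[OF mM mX] by blast
qed

context
  fixes M :: "('r,'m) module" and X :: "('r,'x) module"
  assumes mM: "module R M" and mX: "module R X"
begin

lemma tclass_iff: "y \<in> tclass R M X x \<longleftrightarrow> y \<in> tfree R M X \<and> tequiv M X y x"
  by (simp add: tclass_def tequiv_def)

lemma tclass_self: "x \<in> tfree R M X \<Longrightarrow> x \<in> tclass R M X x"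
  by (simp add: tclass_iff tequiv_refl[OF mM mX])

lemma tclass_eq_iff: "x \<in> tfree R M X \<Longrightarrow> y \<in> tfree R M X \<Longrightarrow> tclass R M X x = tclass R M X y \<longleftrightarrow> tequiv M X x y"
proof
  assume x: "x \<in> tfree R M X" "y \<in> tfree R M X" and e: "tclass R M X x = tclass R M X y"
  then have "x \<in> tclass R M X y" using tclass_self by blast
  then show "tequiv M X x y" by (simp add: tclass_iff)
next
  assume x: "x \<in> tfree R M X" "y \<in> tfree R M X" and e: "tequiv M X x y"
  have "z \<in> tclass R M X x \<longleftrightarrow> z \<in> tclass R M X y" for z
      unfolding tclass_iff using x e tequiv_trans[OF mM mX, of z x y] tequiv_trans[OF mM mX, of z y x]
        tequiv_sym[OF mM mX, of x y] by auto
  then show "tclass R M X x = tclass R M X y" by blast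
qed

lemma tclass_some: "x \<in> tfree R M X \<Longrightarrow> (SOME z. z \<in> tclass R M X x) \<in> tfree R M X \<and>
    tequiv M X (SOME z. z \<in> tclass R M X x) x"
proof -
  assume x: "x \<in> tfree R M X"
  have "\<exists>z. z \<in> tclass R M X x" using tclass_self[OF x] by blast
  then have "(SOME z. z \<in> tclass R M X x) \<in> tclass R M X x" by (rule someI_ex)
  then show ?thesis by (simp add: tclass_iff)
qed

lemma tensor_carrier: "carrier (tensor R M X) = tclass R M X ` tfree R M X"
  by (simp add: tensor_def)

lemma tensor_zero: "\<zero>\<^bsub>tensor R M X\<^esub> = tclass R M X (fzero R)"
  by (simp add: tensor_def)

lemma tensor_smult: "r \<in> carrier R \<Longrightarrow> x \<in> tfree R M X \<Longrightarrow>
   r \<odot>\<^bsub>tensor R M X\<^esub> tclass R M X x = tclass R M X (fsmult R r x)"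
proof -
  assume r: "r \<in> carrier R" and x: "x \<in> tfree R M X"
  let ?z = "SOME z. z \<in> tclass R M X x"
  have z: "?z \<in> tfree R M X" "tequiv M X ?z x" using tclass_some[OF x] by auto
  have "r \<odot>\<^bsub>tensor R M X\<^esub> tclass R M X x = tclass R M X (fsmult R r ?z)" by (simp add: tensor_def)
  also have "\<dots> = tclass R M X (fsmult R r x)"
    using z x r by (subst tclass_eq_iff) (auto intro: tequiv_smult[OF mM mX])
  finally show ?thesis .
qed

lemma tclass_zero_iff: "x \<in> tfree R M X \<Longrightarrow> tclass R M X x = \<zero>\<^bsub>tensor R M X\<^esub> \<longleftrightarrow> x \<in> trel R M X"
  unfolding tensor_zero using tclass_eq_iff[of x "fzero R"] tequiv_zero_iff[OF mM mX] by simp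

end

lemma tensor_map_class:
  assumes mM: "module R M" and mA: "module R A" and mM': "module R M'" and mA': "module R A'"
    and hf: "mod_hom R M M' f" and hg: "mod_hom R A A' g" and x: "x \<in> tfree R M A"
  shows "tensor_map R M A M' A' f g (tclass R M A x) = tclass R M' A' (tpush R M A M' A' f g x)"
proof -
  let ?z = "SOME z. z \<in> tclass R M A x"
  have z: "?z \<in> tfree R M A" "tequiv M A ?z x" using tclass_some[OF mM mA x] by auto
  have "tensor_map R M A M' A' f g (tclass R M A x) = tclass R M' A' (tpush R M A M' A' f g ?z)"
    by (simp add: tensor_map_def)
  also have "\<dots> = tclass R M' A' (tpush R M A M' A' f g x)"
    using z x by (subst tclass_eq_iff[OF mM' mA']) (auto intro: tpush_tfree tpush_tequiv[OF mM mA mM' mA' hf hg])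
  finally show ?thesis .
qed

lemma tensor_map_class_zero_iff:
  assumes "module R M" "module R A" "module R M'" "module R A'"
    and "mod_hom R M M' f" "mod_hom R A A' g" and x: "x \<in> tfree R M A"
  shows "tensor_map R M A M' A' f g (tclass R M A x) = \<zero>\<^bsub>tensor R M' A'\<^esub> \<longleftrightarrow> tpush R M A M' A' f g x \<in> trel R M' A'"
  using tensor_map_class[OF assms] tclass_zero_iff[OF assms(3,4) tpush_tfree[OF x]] by simp

lemma tensor_smult_zero_iff:
  "module R M \<Longrightarrow> module R X \<Longrightarrow> r \<in> carrier R \<Longrightarrow> x \<in> tfree R M X \<Longrightarrow>
   r \<odot>\<^bsub>tensor R M X\<^esub> tclass R M X x = \<zero>\<^bsub>tensor R M X\<^esub> \<longleftrightarrow> fsmult R r x \<in> trel R M X"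
  by (simp add: tensor_smult tclass_zero_iff)

lemma u_S_exact_tensorI:
  assumes m1: "module R M1" "module R X1" and m2: "module R M2" "module R X2" and m3: "module R M3" "module R X3"
    and h1: "mod_hom R M1 M2 f1" "mod_hom R X1 X2 g1" and h2: "mod_hom R M2 M3 f2" "mod_hom R X2 X3 g2"
    and s: "s \<in> S" "s \<in> carrier R"
    and c1: "\<And>x. x \<in> tfree R M1 X1 \<Longrightarrow> tpush R M1 X1 M2 X2 f1 g1 x \<in> trel R M2 X2 \<Longrightarrow> fsmult R s x \<in> trel R M1 X1"
    and c2: "\<And>y. y \<in> tfree R M2 X2 \<Longrightarrow> tpush R M2 X2 M3 X3 f2 g2 y \<in> trel R M3 X3 \<Longrightarrow>
        \<exists>x\<in>tfree R M1 X1. tequiv M2 X2 (fsmult R s y) (tpush R M1 X1 M2 X2 f1 g1 x)"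
    and c3: "\<And>x. x \<in> tfree R M1 X1 \<Longrightarrow> tpush R M2 X2 M3 X3 f2 g2 (fsmult R s (tpush R M1 X1 M2 X2 f1 g1 x)) \<in> trel R M3 X3"
    and c4: "\<And>z. z \<in> tfree R M3 X3 \<Longrightarrow> \<exists>y\<in>tfree R M2 X2. tequiv M3 X3 (fsmult R s z) (tpush R M2 X2 M3 X3 f2 g2 y)"
  shows "u_S_exact R S (tensor R M1 X1) (tensor R M2 X2) (tensor R M3 X3)
     (tensor_map R M1 X1 M2 X2 f1 g1) (tensor_map R M2 X2 M3 X3 f2 g2)"
  unfolding u_S_exact_def
proof (intro bexI[OF _ s(1)] conjI ballI impI)
  fix a assume a: "a \<in> carrier (tensor R M1 X1)" and z: "tensor_map R M1 X1 M2 X2 f1 g1 a = \<zero>\<^bsub>tensor R M2 X2\<^esub>"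
  from a obtain x where x: "x \<in> tfree R M1 X1" "a = tclass R M1 X1 x" by (auto simp: tensor_carrier[OF m1])
  then have "tpush R M1 X1 M2 X2 f1 g1 x \<in> trel R M2 X2" using z tensor_map_class_zero_iff[OF m1 m2 h1 x(1)] by simp
  then show "s \<odot>\<^bsub>tensor R M1 X1\<^esub> a = \<zero>\<^bsub>tensor R M1 X1\<^esub>"
    using c1 x tensor_smult_zero_iff[OF m1 s(2) x(1)] by simp
next
  fix b assume b: "b \<in> carrier (tensor R M2 X2)" and z: "tensor_map R M2 X2 M3 X3 f2 g2 b = \<zero>\<^bsub>tensor R M3 X3\<^esub>"
  from b obtain y where y: "y \<in> tfree R M2 X2" "b = tclass R M2 X2 y" by (auto simp: tensor_carrier[OF m2])
  then obtain x where x: "x \<in> tfree R M1 X1" "tequiv M2 X2 (fsmult R s y) (tpush R M1 X1 M2 X2 f1 g1 x)"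
    using c2 z tensor_map_class_zero_iff[OF m2 m3 h2] by blast
  then have "s \<odot>\<^bsub>tensor R M2 X2\<^esub> b = tensor_map R M1 X1 M2 X2 f1 g1 (tclass R M1 X1 x)"
    using y s tensor_smult[OF m2] tclass_eq_iff[OF m2 _ tpush_tfree[OF x(1)]] tensor_map_class[OF m1 m2 h1 x(1)] by simp
  then show "s \<odot>\<^bsub>tensor R M2 X2\<^esub> b \<in> tensor_map R M1 X1 M2 X2 f1 g1 ` carrier (tensor R M1 X1)"
    using x by (auto simp: tensor_carrier[OF m1])
next
  fix a assume "a \<in> carrier (tensor R M1 X1)"
  then obtain x where x: "x \<in> tfree R M1 X1" "a = tclass R M1 X1 x" by (auto simp: tensor_carrier[OF m1])
  have t1: "tpush R M1 X1 M2 X2 f1 g1 x \<in> tfree R M2 X2" using tpush_tfree[OF x(1)] .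
  then have "s \<odot>\<^bsub>tensor R M2 X2\<^esub> tensor_map R M1 X1 M2 X2 f1 g1 a = tclass R M2 X2 (fsmult R s (tpush R M1 X1 M2 X2 f1 g1 x))"
    using x s tensor_map_class[OF m1 m2 h1] tensor_smult[OF m2] by simp
  then show "tensor_map R M2 X2 M3 X3 f2 g2 (s \<odot>\<^bsub>tensor R M2 X2\<^esub> tensor_map R M1 X1 M2 X2 f1 g1 a) = \<zero>\<^bsub>tensor R M3 X3\<^esub>"
    using c3[OF x(1)] t1 s tensor_map_class_zero_iff[OF m2 m3 h2] by simp
next
  fix c assume "c \<in> carrier (tensor R M3 X3)"
  then obtain z where z: "z \<in> tfree R M3 X3" "c = tclass R M3 X3 z" by (auto simp: tensor_carrier[OF m3])
  obtain y where y: "y \<in> tfree R M2 X2" "tequiv M3 X3 (fsmult R s z) (tpush R M2 X2 M3 X3 f2 g2 y)" using c4[OF z(1)] by blast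
  then have "s \<odot>\<^bsub>tensor R M3 X3\<^esub> c = tensor_map R M2 X2 M3 X3 f2 g2 (tclass R M2 X2 y)"
    using z s tensor_smult[OF m3] tclass_eq_iff[OF m3 _ tpush_tfree[OF y(1)]] tensor_map_class[OF m2 m3 h2 y(1)] by simp
  then show "s \<odot>\<^bsub>tensor R M3 X3\<^esub> c \<in> tensor_map R M2 X2 M3 X3 f2 g2 ` carrier (tensor R M2 X2)"
    using y by (auto simp: tensor_carrier[OF m2])
qed

lemma u_S_exact_tensor_injD:
  assumes m1: "module R M1" "module R X1" and m2: "module R M2" "module R X2" and m3: "module R M3" "module R X3"
    and h1: "mod_hom R M1 M2 f1" "mod_hom R X1 X2 g1" and SR: "S \<subseteq> carrier R"
    and u: "u_S_exact R S (tensor R M1 X1) (tensor R M2 X2) (tensor R M3 X3)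
     (tensor_map R M1 X1 M2 X2 f1 g1) h"
  shows "\<exists>s\<in>S. \<forall>x\<in>tfree R M1 X1. tpush R M1 X1 M2 X2 f1 g1 x \<in> trel R M2 X2 \<longrightarrow> fsmult R s x \<in> trel R M1 X1"
proof -
  obtain s where s: "s \<in> S" and k: "\<forall>a\<in>carrier (tensor R M1 X1). tensor_map R M1 X1 M2 X2 f1 g1 a = \<zero>\<^bsub>tensor R M2 X2\<^esub>
       \<longrightarrow> s \<odot>\<^bsub>tensor R M1 X1\<^esub> a = \<zero>\<^bsub>tensor R M1 X1\<^esub>"
    using u unfolding u_S_exact_def by blast
  have sR: "s \<in> carrier R" using s SR by blast
  show ?thesis
  proof (intro bexI[OF _ s] ballI impI)
    fix x assume x: "x \<in> tfree R M1 X1" and p: "tpush R M1 X1 M2 X2 f1 g1 x \<in> trel R M2 X2"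
    have "tclass R M1 X1 x \<in> carrier (tensor R M1 X1)" using x by (simp add: tensor_carrier[OF m1])
    then show "fsmult R s x \<in> trel R M1 X1"
      using k p tensor_map_class_zero_iff[OF m1 m2 h1 x] tensor_smult_zero_iff[OF m1 sR x] by blast
  qed
qed

section \<open>Right exactness up to a scalar\<close>

lemma fsmult_fadd_fsmult: "r \<in> carrier R \<Longrightarrow> s \<in> carrier R \<Longrightarrow> x \<in> rfuns \<Longrightarrow> y \<in> rfuns \<Longrightarrow>
  fsmult R s (fadd R y (fsmult R r x)) = fadd R (fsmult R s y) (fsmult R r (fsmult R s x))"
proof (rule ext)
  fix p assume "r \<in> carrier R" "s \<in> carrier R" "x \<in> rfuns" "y \<in> rfuns"
  then have "x p \<in> carrier R" "y p \<in> carrier R" "r \<in> carrier R" "s \<in> carrier R" by auto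
  then show "fsmult R s (fadd R y (fsmult R r x)) p = fadd R (fsmult R s y) (fsmult R r (fsmult R s x)) p"
    by (simp add: fapp) algebra
qed

lemma fdiff_lift_step: "r \<in> carrier R \<Longrightarrow> s \<in> carrier R \<Longrightarrow> y \<in> rfuns \<Longrightarrow> d1 \<in> rfuns \<Longrightarrow> Q \<in> rfuns \<Longrightarrow> d2 \<in> rfuns \<Longrightarrow>
  fadd R (fsmult R (s \<otimes> s) (fadd R y (fsmult R r d1))) (fneg R (fsmult R s (fadd R Q (fsmult R r d2))))
  = fadd R (fadd R (fsmult R (s \<otimes> s) y) (fneg R (fsmult R s Q))) (fsmult R r (fsmult R s (fadd R (fsmult R s d1) (fneg R d2))))"
proof (rule ext)
  fix p assume "r \<in> carrier R" "s \<in> carrier R" "y \<in> rfuns" "d1 \<in> rfuns" "Q \<in> rfuns" "d2 \<in> rfuns"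
  then have "y p \<in> carrier R" "d1 p \<in> carrier R" "Q p \<in> carrier R" "d2 p \<in> carrier R" "r \<in> carrier R" "s \<in> carrier R" by auto
  then show "fadd R (fsmult R (s \<otimes> s) (fadd R y (fsmult R r d1))) (fneg R (fsmult R s (fadd R Q (fsmult R r d2)))) p
  = fadd R (fadd R (fsmult R (s \<otimes> s) y) (fneg R (fsmult R s Q))) (fsmult R r (fsmult R s (fadd R (fsmult R s d1) (fneg R d2)))) p"
    by (simp add: fapp) algebra
qed

text \<open>The hypotheses e2, e3, e4 are the last three clauses of u_S_exact_def; right exactness
  does not need the first one.\<close>

context
  fixes A :: "('r,'a) module" and B :: "('r,'b) module" and C :: "('r,'c) module" and X :: "('r,'x) module"
    and f g s
  assumes mA: "module R A" and mB: "module R B" and mC: "module R C" and mX: "module R X"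
    and hf: "mod_hom R A B f" and hg: "mod_hom R B C g" and sR: "s \<in> carrier R"
    and e2: "\<And>b. b \<in> carrier B \<Longrightarrow> g b = \<zero>\<^bsub>C\<^esub> \<Longrightarrow> s \<odot>\<^bsub>B\<^esub> b \<in> f ` carrier A"
    and e3: "\<And>a. a \<in> carrier A \<Longrightarrow> g (s \<odot>\<^bsub>B\<^esub> f a) = \<zero>\<^bsub>C\<^esub>"
    and e4: "\<And>c. c \<in> carrier C \<Longrightarrow> s \<odot>\<^bsub>C\<^esub> c \<in> g ` carrier B"
begin

lemma tensor_right_surj: "w \<in> tfree R C X \<Longrightarrow> \<exists>y\<in>tfree R B X. tequiv C X (fsmult R s w) (tpush R B X C X g id y)"
proof (induction rule: tfree_induct)
  case zero
  show ?case
    by (intro bexI[of _ "fzero R"]) (simp_all add: tpush_fzero sR tequiv_refl[OF mC mX])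
next
  case (step y0 r p)
  obtain c x where p: "p = (c, x)" by (cases p)
  have cx: "c \<in> carrier C" "x \<in> carrier X" using step p by auto
  obtain y1 where y1: "y1 \<in> tfree R B X" "tequiv C X (fsmult R s y0) (tpush R B X C X g id y1)" using step by blast
  obtain b where b: "b \<in> carrier B" "s \<odot>\<^bsub>C\<^esub> c = g b" using e4[OF cx(1)] by blast
  let ?y = "fadd R y1 (fsmult R r (fdelta R (b, x)))"
  have "tpush R B X C X g id ?y = fadd R (tpush R B X C X g id y1) (fsmult R r (fdelta R (g b, x)))"
    using y1 step b cx mod_hom_closed[OF hg] by (subst tpush_step) auto
  moreover have "fsmult R s (fadd R y0 (fsmult R r (fdelta R p))) =
      fadd R (fsmult R s y0) (fsmult R r (fsmult R s (fdelta R (c, x))))"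
    unfolding p using step sR by (intro fsmult_fadd_fsmult) auto
  moreover have "tequiv C X (fsmult R r (fsmult R s (fdelta R (c, x)))) (fsmult R r (fdelta R (g b, x)))"
  proof -
    have "tequiv C X (fdelta R (s \<odot>\<^bsub>C\<^esub> c, x)) (fsmult R s (fdelta R (c, x)))"
      using tequiv_delta_lsmult[OF mC mX sR cx] .
    then have "tequiv C X (fsmult R s (fdelta R (c, x))) (fdelta R (g b, x))"
      using tequiv_sym[OF mC mX] sR b by simp
    then show ?thesis using tequiv_smult[OF mC mX] step sR by simp
  qed
  ultimately have "tequiv C X (fsmult R s (fadd R y0 (fsmult R r (fdelta R p)))) (tpush R B X C X g id ?y)"
    using tequiv_add[OF mC mX _ _ _ _ y1(2)] step sR y1 by (simp add: tpush_rfuns)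
  moreover have "?y \<in> tfree R B X" using y1 step b cx by simp
  ultimately show ?case by blast
qed

lemma tensor_right_complex: "z \<in> tfree R A X \<Longrightarrow> tpush R B X C X g id (fsmult R s (tpush R A X B X f id z)) \<in> trel R C X"
proof -
  assume z: "z \<in> tfree R A X"
  have "fsmult R s (tpush R B X C X g id (tpush R A X B X f id z)) \<in> trel R C X"
    using z
  proof (induction rule: tfree_induct)
    case zero
    then show ?case by (simp add: tpush_fzero sR)
  next
    case (step y r p)
    obtain a x where p: "p = (a, x)" by (cases p)
    have ax: "a \<in> carrier A" "x \<in> carrier X" using step p by auto
    have t1: "tpush R A X B X f id y \<in> tfree R B X" using step by (intro tpush_tfree) auto
    have "tpush R B X C X g id (tpush R A X B X f id (fadd R y (fsmult R r (fdelta R p)))) =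
      fadd R (tpush R B X C X g id (tpush R A X B X f id y)) (fsmult R r (fdelta R (g (f a), x)))"
      unfolding p using step ax t1 mod_hom_closed[OF hf] mod_hom_closed[OF hg] by (simp add: tpush_step)
    then have e: "fsmult R s (tpush R B X C X g id (tpush R A X B X f id (fadd R y (fsmult R r (fdelta R p))))) =
      fadd R (fsmult R s (tpush R B X C X g id (tpush R A X B X f id y))) (fsmult R r (fsmult R s (fdelta R (g (f a), x))))"
      using step sR by (simp add: fsmult_fadd_fsmult tpush_rfuns)
    have "tequiv C X (fsmult R s (fdelta R (g (f a), x))) (fdelta R (s \<odot>\<^bsub>C\<^esub> g (f a), x))"
      using tequiv_delta_lsmult[OF mC mX sR mod_hom_closed[OF hg mod_hom_closed[OF hf ax(1)]] ax(2)] tequiv_sym[OF mC mX] sR by simp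
    moreover have "s \<odot>\<^bsub>C\<^esub> g (f a) = \<zero>\<^bsub>C\<^esub>"
      using e3[OF ax(1)] mod_hom_smult[OF hg sR mod_hom_closed[OF hf ax(1)]] by simp
    ultimately have t: "tequiv C X (fsmult R s (fdelta R (g (f a), x))) (fdelta R (\<zero>\<^bsub>C\<^esub>, x))" by simp
    have h: "fsmult R s (fdelta R (g (f a), x)) \<in> trel R C X"
      using tequiv_rel[OF mC mX _ _ t trel_delta_lzero[OF mC mX ax(2)]] sR by simp
    show ?case unfolding e
      by (rule trel_fadd[OF step.IH trel_fsmult[OF \<open>r \<in> carrier R\<close> h]])
  qed
  then show ?thesis using z sR by (simp add: tpush_fsmult tpush_tfree)
qed

definition "tensor_image = {y \<in> tfree R B X. \<exists>z\<in>tfree R A X. tequiv B X y (tpush R A X B X f id z)}"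

lemma tensor_image_add: "u \<in> tensor_image \<Longrightarrow> v \<in> tensor_image \<Longrightarrow> fadd R u v \<in> tensor_image"
proof -
  assume "u \<in> tensor_image" "v \<in> tensor_image"
  then obtain z1 z2 where z: "u \<in> tfree R B X" "v \<in> tfree R B X" "z1 \<in> tfree R A X" "z2 \<in> tfree R A X"
    "tequiv B X u (tpush R A X B X f id z1)" "tequiv B X v (tpush R A X B X f id z2)" unfolding tensor_image_def by blast
  have "tequiv B X (fadd R u v) (tpush R A X B X f id (fadd R z1 z2))"
    using tequiv_add[OF mB mX _ _ _ _ z(5,6)] z by (simp add: tpush_fadd tpush_rfuns)
  then show ?thesis unfolding tensor_image_def using z by (intro CollectI conjI bexI[of _ "fadd R z1 z2"]) auto
qed

lemma tensor_image_smult: "r \<in> carrier R \<Longrightarrow> u \<in> tensor_image \<Longrightarrow> fsmult R r u \<in> tensor_image"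
proof -
  assume r: "r \<in> carrier R" and "u \<in> tensor_image"
  then obtain z1 where z: "u \<in> tfree R B X" "z1 \<in> tfree R A X"
    "tequiv B X u (tpush R A X B X f id z1)" unfolding tensor_image_def by blast
  have "tequiv B X (fsmult R r u) (tpush R A X B X f id (fsmult R r z1))"
    using tequiv_smult[OF mB mX r _ _ z(3)] z r by (simp add: tpush_fsmult tpush_rfuns)
  then show ?thesis unfolding tensor_image_def using z r by (intro CollectI conjI bexI[of _ "fsmult R r z1"]) auto
qed

lemma tensor_image_tequiv: "u \<in> tfree R B X \<Longrightarrow> v \<in> tensor_image \<Longrightarrow> tequiv B X u v \<Longrightarrow> u \<in> tensor_image"
proof -
  assume u: "u \<in> tfree R B X" and "v \<in> tensor_image" and uv: "tequiv B X u v"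
  then obtain z1 where z: "v \<in> tfree R B X" "z1 \<in> tfree R A X"
    "tequiv B X v (tpush R A X B X f id z1)" unfolding tensor_image_def by blast
  have "tequiv B X u (tpush R A X B X f id z1)"
    using tequiv_trans[OF mB mX _ _ _ uv z(3)] u z by (simp add: tpush_rfuns)
  then show ?thesis unfolding tensor_image_def using z u by blast
qed

lemma tensor_image_trel: "u \<in> trel R B X \<Longrightarrow> u \<in> tensor_image"
proof -
  assume u: "u \<in> trel R B X"
  have "tequiv B X u (tpush R A X B X f id (fzero R))"
    using u tequiv_zero_iff[OF mB mX] mB mX by (simp add: tpush_fzero)
  then show ?thesis unfolding tensor_image_def using u mB mX by (intro CollectI conjI bexI[of _ "fzero R"]) auto
qed

lemma tensor_image_ker: "b \<in> carrier B \<Longrightarrow> x \<in> carrier X \<Longrightarrow> g b = \<zero>\<^bsub>C\<^esub> \<Longrightarrow> fsmult R s (fdelta R (b, x)) \<in> tensor_image"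
proof -
  assume b: "b \<in> carrier B" "x \<in> carrier X" "g b = \<zero>\<^bsub>C\<^esub>"
  obtain a where a: "a \<in> carrier A" "s \<odot>\<^bsub>B\<^esub> b = f a" using e2[OF b(1,3)] by blast
  have "tequiv B X (fsmult R s (fdelta R (b, x))) (fdelta R (s \<odot>\<^bsub>B\<^esub> b, x))"
    using tequiv_delta_lsmult[OF mB mX sR b(1,2)] tequiv_sym[OF mB mX] sR by simp
  then have "tequiv B X (fsmult R s (fdelta R (b, x))) (tpush R A X B X f id (fdelta R (a, x)))"
    using a b mod_hom_closed[OF hf] by (simp add: tpush_fdelta)
  then show ?thesis unfolding tensor_image_def using a b sR by (intro CollectI conjI bexI[of _ "fdelta R (a, x)"]) auto
qed

lemma tensor_image_fibre: "b \<in> carrier B \<Longrightarrow> b' \<in> carrier B \<Longrightarrow> x \<in> carrier X \<Longrightarrow> v \<in> tfree R B X \<Longrightarrow> u \<in> tfree R B X \<Longrightarrow>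
  tequiv B X (fdelta R (b, x)) v \<Longrightarrow> tequiv B X (fdelta R (b', x)) u \<Longrightarrow> g b = g b' \<Longrightarrow>
  fsmult R s (fadd R v (fneg R u)) \<in> tensor_image"
proof -
  assume h: "b \<in> carrier B" "b' \<in> carrier B" "x \<in> carrier X" "v \<in> tfree R B X" "u \<in> tfree R B X"
    "tequiv B X (fdelta R (b, x)) v" "tequiv B X (fdelta R (b', x)) u" "g b = g b'"
  interpret C: module R C by (rule mC)
  have k: "g (b \<ominus>\<^bsub>B\<^esub> b') = \<zero>\<^bsub>C\<^esub>"
    using mod_hom_minus[OF mB mC hg h(1,2)] h(8) mod_hom_closed[OF hg h(2)] by (simp add: C.r_neg C.minus_eq)
  have kB: "b \<ominus>\<^bsub>B\<^esub> b' \<in> carrier B" using h mB by simp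
  have t1: "tequiv B X (fdelta R (b \<ominus>\<^bsub>B\<^esub> b', x)) (fadd R (fdelta R (b, x)) (fneg R (fdelta R (b', x))))"
    using tequiv_delta_lminus[OF mB mX h(1,2,3)] .
  have t2: "tequiv B X (fadd R (fdelta R (b, x)) (fneg R (fdelta R (b', x)))) (fadd R v (fneg R u))"
    using tequiv_add[OF mB mX _ _ _ _ h(6) tequiv_neg[OF mB mX _ _ h(7)]] h by simp
  have "tequiv B X (fdelta R (b \<ominus>\<^bsub>B\<^esub> b', x)) (fadd R v (fneg R u))"
    using tequiv_trans[OF mB mX _ _ _ t1 t2] h by simp
  then have "tequiv B X (fsmult R s (fadd R v (fneg R u))) (fsmult R s (fdelta R (b \<ominus>\<^bsub>B\<^esub> b', x)))"
    using tequiv_smult[OF mB mX sR] tequiv_sym[OF mB mX] h kB by simp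
  from tensor_image_tequiv[OF _ tensor_image_ker[OF kB h(3) k] this] show ?thesis using h sR by simp
qed

lemma tensor_image_fibre_delta:
  "b \<in> carrier B \<Longrightarrow> b' \<in> carrier B \<Longrightarrow> x \<in> carrier X \<Longrightarrow> u \<in> tfree R B X \<Longrightarrow>
   tequiv B X (fdelta R (b', x)) u \<Longrightarrow> g b = g b' \<Longrightarrow> fsmult R s (fadd R (fdelta R (b, x)) (fneg R u)) \<in> tensor_image"
  by (rule tensor_image_fibre[of b b' x]) (simp_all add: tequiv_refl[OF mB mX])

lemma tensor_image_lift_defect:
  assumes bC: "\<And>c. c \<in> carrier C \<Longrightarrow> \<beta> c \<in> carrier B" and bg: "\<And>c. c \<in> carrier C \<Longrightarrow> g (\<beta> c) = s \<odot>\<^bsub>C\<^esub> c"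
    and y: "y \<in> tfree R B X"
  shows "fadd R (fsmult R (s \<otimes> s) y) (fneg R (fsmult R s (tpush R C X B X \<beta> id (tpush R B X C X g id y)))) \<in> tensor_image"
  using y
proof (induction rule: tfree_induct)
  case zero
  then show ?case using tensor_image_trel by (simp add: tpush_fzero sR)
next
  case (step y0 r p)
  obtain b x where p: "p = (b, x)" by (cases p)
  have bx: "b \<in> carrier B" "x \<in> carrier X" using step p by auto
  have t1: "tpush R B X C X g id y0 \<in> tfree R C X" using step by (intro tpush_tfree) auto
  have gb: "g b \<in> carrier C" using mod_hom_closed[OF hg] bx by simp
  have e1: "tpush R C X B X \<beta> id (tpush R B X C X g id (fadd R y0 (fsmult R r (fdelta R p)))) =
     fadd R (tpush R C X B X \<beta> id (tpush R B X C X g id y0)) (fsmult R r (fdelta R (\<beta> (g b), x)))"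
    unfolding p using step bx t1 gb bC by (simp add: tpush_step)
  let ?Q = "tpush R C X B X \<beta> id (tpush R B X C X g id y0)"
  have QF: "?Q \<in> rfuns" using t1 by (simp add: tpush_rfuns)
  have e: "fadd R (fsmult R (s \<otimes> s) (fadd R y0 (fsmult R r (fdelta R p))))
       (fneg R (fsmult R s (tpush R C X B X \<beta> id (tpush R B X C X g id (fadd R y0 (fsmult R r (fdelta R p)))))))
     = fadd R (fadd R (fsmult R (s \<otimes> s) y0) (fneg R (fsmult R s ?Q)))
        (fsmult R r (fsmult R s (fadd R (fsmult R s (fdelta R (b, x))) (fneg R (fdelta R (\<beta> (g b), x))))))"
    unfolding e1 unfolding p using step sR QF by (intro fdiff_lift_step) auto
  have bb: "\<beta> (g b) \<in> carrier B" using bC gb by simp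
  have sb: "s \<odot>\<^bsub>B\<^esub> b \<in> carrier B" using mB sR bx by simp
  have k: "fsmult R s (fadd R (fsmult R s (fdelta R (b, x))) (fneg R (fdelta R (\<beta> (g b), x)))) \<in> tensor_image"
  proof (rule tensor_image_fibre[OF sb bb bx(2)])
    show "fsmult R s (fdelta R (b, x)) \<in> tfree R B X" using bx sR by simp
    show "fdelta R (\<beta> (g b), x) \<in> tfree R B X" using bb bx by simp
    show "tequiv B X (fdelta R (s \<odot>\<^bsub>B\<^esub> b, x)) (fsmult R s (fdelta R (b, x)))" by (rule tequiv_delta_lsmult[OF mB mX sR bx])
    show "tequiv B X (fdelta R (\<beta> (g b), x)) (fdelta R (\<beta> (g b), x))" using tequiv_refl[OF mB mX] by simp
    show "g (s \<odot>\<^bsub>B\<^esub> b) = g (\<beta> (g b))" using mod_hom_smult[OF hg sR bx(1)] bg[OF gb] by simp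
  qed
  show ?case unfolding e by (rule tensor_image_add[OF step.IH tensor_image_smult[OF \<open>r \<in> carrier R\<close> k]])
qed

lemma tensor_image_lift_rel:
  assumes bC: "\<And>c. c \<in> carrier C \<Longrightarrow> \<beta> c \<in> carrier B" and bg: "\<And>c. c \<in> carrier C \<Longrightarrow> g (\<beta> c) = s \<odot>\<^bsub>C\<^esub> c"
    and w: "w \<in> trel R C X"
  shows "fsmult R s (tpush R C X B X \<beta> id w) \<in> tensor_image"
  using mC mX w
proof (induction rule: trel_induct)
  case zero
  then show ?case using tensor_image_trel by (simp add: tpush_fzero sR)
next
  case (ladd c c' x)
  have cc: "c \<oplus>\<^bsub>C\<^esub> c' \<in> carrier C" using mC ladd by simp
  have "tpush R C X B X \<beta> id (fadd R (fdelta R (c \<oplus>\<^bsub>C\<^esub> c', x)) (fneg R (fadd R (fdelta R (c, x)) (fdelta R (c', x)))))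
      = fadd R (fdelta R (\<beta> (c \<oplus>\<^bsub>C\<^esub> c'), x)) (fneg R (fadd R (fdelta R (\<beta> c, x)) (fdelta R (\<beta> c', x))))"
    using ladd cc bC by (simp add: tpush_fadd tpush_fneg tpush_fdelta)
  moreover have "g (\<beta> (c \<oplus>\<^bsub>C\<^esub> c')) = g (\<beta> c \<oplus>\<^bsub>B\<^esub> \<beta> c')"
    using bg[OF cc] bg[OF ladd(1)] bg[OF ladd(2)] mod_hom_add[OF hg] bC ladd module.smult_r_distr[OF mC sR] by simp
  then have "fsmult R s (fadd R (fdelta R (\<beta> (c \<oplus>\<^bsub>C\<^esub> c'), x)) (fneg R (fadd R (fdelta R (\<beta> c, x)) (fdelta R (\<beta> c', x))))) \<in> tensor_image"
    by (intro tensor_image_fibre_delta[OF bC[OF cc] _ ladd(3) _ tequiv_delta_ladd[OF mB mX bC[OF ladd(1)] bC[OF ladd(2)] ladd(3)]])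
      (use bC ladd mB in simp_all)
  ultimately show ?case by (simp add: id_def)
next
  case (radd c x x')
  have xx: "x \<oplus>\<^bsub>X\<^esub> x' \<in> carrier X" using mX radd by simp
  have "tpush R C X B X \<beta> id (fadd R (fdelta R (c, x \<oplus>\<^bsub>X\<^esub> x')) (fneg R (fadd R (fdelta R (c, x)) (fdelta R (c, x')))))
      = fadd R (fdelta R (\<beta> c, x \<oplus>\<^bsub>X\<^esub> x')) (fneg R (fadd R (fdelta R (\<beta> c, x)) (fdelta R (\<beta> c, x'))))"
    using radd xx bC by (simp add: tpush_fadd tpush_fneg tpush_fdelta)
  moreover have "fadd R (fdelta R (\<beta> c, x \<oplus>\<^bsub>X\<^esub> x')) (fneg R (fadd R (fdelta R (\<beta> c, x)) (fdelta R (\<beta> c, x')))) \<in> trel R B X"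
    using bC radd by (intro trel_gens tgens_radd) simp_all
  ultimately show ?case using tensor_image_trel sR mB mX by (simp add: id_def)
next
  case (lsmult r c x)
  have cc: "r \<odot>\<^bsub>C\<^esub> c \<in> carrier C" using mC lsmult by simp
  have "tpush R C X B X \<beta> id (fadd R (fdelta R (r \<odot>\<^bsub>C\<^esub> c, x)) (fneg R (fsmult R r (fdelta R (c, x)))))
      = fadd R (fdelta R (\<beta> (r \<odot>\<^bsub>C\<^esub> c), x)) (fneg R (fsmult R r (fdelta R (\<beta> c, x))))"
    using lsmult cc bC by (simp add: tpush_fadd tpush_fneg tpush_fsmult tpush_fdelta)
  moreover have "s \<odot>\<^bsub>C\<^esub> (r \<odot>\<^bsub>C\<^esub> c) = r \<odot>\<^bsub>C\<^esub> (s \<odot>\<^bsub>C\<^esub> c)"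
    using module.smult_assoc1[OF mC sR lsmult(1) lsmult(2)] module.smult_assoc1[OF mC lsmult(1) sR lsmult(2)] sR lsmult(1)
    by (simp add: m_comm)
  then have "g (\<beta> (r \<odot>\<^bsub>C\<^esub> c)) = g (r \<odot>\<^bsub>B\<^esub> \<beta> c)"
    using bg[OF cc] bg[OF lsmult(2)] mod_hom_smult[OF hg lsmult(1) bC[OF lsmult(2)]] by simp
  then have "fsmult R s (fadd R (fdelta R (\<beta> (r \<odot>\<^bsub>C\<^esub> c), x)) (fneg R (fsmult R r (fdelta R (\<beta> c, x))))) \<in> tensor_image"
    by (intro tensor_image_fibre_delta[OF bC[OF cc] _ lsmult(3) _ tequiv_delta_lsmult[OF mB mX lsmult(1) bC[OF lsmult(2)] lsmult(3)]])
      (use bC lsmult mB in simp_all)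
  ultimately show ?case by (simp add: id_def)
next
  case (rsmult r c x)
  have xx: "r \<odot>\<^bsub>X\<^esub> x \<in> carrier X" using mX rsmult by simp
  have "tpush R C X B X \<beta> id (fadd R (fdelta R (c, r \<odot>\<^bsub>X\<^esub> x)) (fneg R (fsmult R r (fdelta R (c, x)))))
      = fadd R (fdelta R (\<beta> c, r \<odot>\<^bsub>X\<^esub> x)) (fneg R (fsmult R r (fdelta R (\<beta> c, x))))"
    using rsmult xx bC by (simp add: tpush_fadd tpush_fneg tpush_fsmult tpush_fdelta)
  moreover have "fadd R (fdelta R (\<beta> c, r \<odot>\<^bsub>X\<^esub> x)) (fneg R (fsmult R r (fdelta R (\<beta> c, x)))) \<in> trel R B X"
    using bC rsmult by (intro trel_gens tgens_rsmult) simp_all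
  ultimately show ?case using tensor_image_trel sR mB mX by (simp add: id_def)
next
  case (add x y)
  then have "fsmult R s (tpush R C X B X \<beta> id (fadd R x y))
      = fadd R (fsmult R s (tpush R C X B X \<beta> id x)) (fsmult R s (tpush R C X B X \<beta> id y))"
    using sR mC mX by (simp add: tpush_fadd fsmult_fadd)
  then show ?case using tensor_image_add add by (simp add: id_def)
next
  case (smult r x)
  then have "fsmult R s (tpush R C X B X \<beta> id (fsmult R r x)) = fsmult R r (fsmult R s (tpush R C X B X \<beta> id x))"
    using sR mC mX by (simp add: tpush_fsmult fsmult_commute)
  then show ?case using tensor_image_smult smult by (simp add: id_def)
qed

lemma tensor_right_middle: "y \<in> tfree R B X \<Longrightarrow> tpush R B X C X g id y \<in> trel R C X \<Longrightarrow>
  \<exists>z\<in>tfree R A X. tequiv B X (fsmult R (s \<otimes> s) y) (tpush R A X B X f id z)"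
proof -
  assume y: "y \<in> tfree R B X" and yk: "tpush R B X C X g id y \<in> trel R C X"
  define \<beta> where "\<beta> c = (SOME b. b \<in> carrier B \<and> g b = s \<odot>\<^bsub>C\<^esub> c)" for c
  have bb: "\<beta> c \<in> carrier B \<and> g (\<beta> c) = s \<odot>\<^bsub>C\<^esub> c" if "c \<in> carrier C" for c
  proof -
    have "\<exists>b. b \<in> carrier B \<and> g b = s \<odot>\<^bsub>C\<^esub> c" using e4[OF that] by force
    then show ?thesis unfolding \<beta>_def by (rule someI_ex)
  qed
  have bC: "\<And>c. c \<in> carrier C \<Longrightarrow> \<beta> c \<in> carrier B" using bb by blast
  have bg: "\<And>c. c \<in> carrier C \<Longrightarrow> g (\<beta> c) = s \<odot>\<^bsub>C\<^esub> c" using bb by blast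
  \<comment> \<open>\<beta> is only a map of sets, so pushing along it respects the relations only up to s.\<close>
  let ?Q = "tpush R C X B X \<beta> id (tpush R B X C X g id y)"
  have QF: "?Q \<in> rfuns" using y by (simp add: tpush_rfuns)
  have n1: "fadd R (fsmult R (s \<otimes> s) y) (fneg R (fsmult R s ?Q)) \<in> tensor_image" by (rule tensor_image_lift_defect[OF bC bg y])
  have n2: "fsmult R s ?Q \<in> tensor_image" by (rule tensor_image_lift_rel[OF bC bg yk])
  have "fsmult R (s \<otimes> s) y = fadd R (fadd R (fsmult R (s \<otimes> s) y) (fneg R (fsmult R s ?Q))) (fsmult R s ?Q)"
    using y sR QF by (simp add: fdiff_fadd_cancel)
  then have "fsmult R (s \<otimes> s) y \<in> tensor_image" using tensor_image_add[OF n1 n2] by simp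
  then show ?thesis unfolding tensor_image_def by blast
qed

end

context
  fixes M :: "('r,'m) module" and A :: "('r,'a) module" and B :: "('r,'b) module" and C :: "('r,'c) module"
    and f g s
  assumes mM: "module R M" and mA: "module R A" and mB: "module R B" and mC: "module R C"
    and hf: "mod_hom R A B f" and hg: "mod_hom R B C g" and sR: "s \<in> carrier R"
    and e2: "\<And>b. b \<in> carrier B \<Longrightarrow> g b = \<zero>\<^bsub>C\<^esub> \<Longrightarrow> s \<odot>\<^bsub>B\<^esub> b \<in> f ` carrier A"
    and e3: "\<And>a. a \<in> carrier A \<Longrightarrow> g (s \<odot>\<^bsub>B\<^esub> f a) = \<zero>\<^bsub>C\<^esub>"
    and e4: "\<And>c. c \<in> carrier C \<Longrightarrow> s \<odot>\<^bsub>C\<^esub> c \<in> g ` carrier B"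
begin

lemma tensor_left_surj: "w \<in> tfree R M C \<Longrightarrow> \<exists>y\<in>tfree R M B. tequiv M C (fsmult R s w) (tpush R M B M C id g y)"
proof -
  assume w: "w \<in> tfree R M C"
  obtain y' where y': "y' \<in> tfree R B M" "tequiv C M (fsmult R s (fswap w)) (tpush R B M C M g id y')"
    using tensor_right_surj[OF mA mB mC mM hf hg sR e2 e3 e4 fswap_tfree[OF w]] by blast
  have e: "fswap (tpush R M B M C id g (fswap y')) = tpush R B M C M g id y'"
    using fswap_tpush[OF fswap_tfree[OF y'(1)] mod_hom_funcset[OF mod_hom_id] mod_hom_funcset[OF hg]] by simp
  have "tequiv C M (fswap (fsmult R s w)) (fswap (tpush R M B M C id g (fswap y')))"
    using y'(2) e by (simp add: fswap_fsmult)
  then have "tequiv M C (fsmult R s w) (tpush R M B M C id g (fswap y'))" using fswap_tequiv_iff[OF mM mC] by blast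
  then show ?thesis using fswap_tfree[OF y'(1)] by blast
qed

lemma tensor_left_complex: "z \<in> tfree R M A \<Longrightarrow> tpush R M B M C id g (fsmult R s (tpush R M A M B id f z)) \<in> trel R M C"
proof -
  assume z: "z \<in> tfree R M A"
  have t1: "tpush R M A M B id f z \<in> tfree R M B" by (rule tpush_tfree[OF z])
  have "fswap (tpush R M B M C id g (fsmult R s (tpush R M A M B id f z))) =
     tpush R B M C M g id (fsmult R s (tpush R A M B M f id (fswap z)))"
    using fswap_tpush[OF fsmult_tfree[OF sR t1] mod_hom_funcset[OF mod_hom_id] mod_hom_funcset[OF hg]] fswap_tpush[OF z mod_hom_funcset[OF mod_hom_id] mod_hom_funcset[OF hf]] by (simp add: fswap_fsmult)
  moreover have "tpush R B M C M g id (fsmult R s (tpush R A M B M f id (fswap z))) \<in> trel R C M"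
    by (rule tensor_right_complex[OF mA mB mC mM hf hg sR e2 e3 e4 fswap_tfree[OF z]])
  ultimately show ?thesis using fswap_trel_iff[OF mM mC] by metis
qed

lemma tensor_left_middle: "y \<in> tfree R M B \<Longrightarrow> tpush R M B M C id g y \<in> trel R M C \<Longrightarrow>
  \<exists>z\<in>tfree R M A. tequiv M B (fsmult R (s \<otimes> s) y) (tpush R M A M B id f z)"
proof -
  assume y: "y \<in> tfree R M B" and k: "tpush R M B M C id g y \<in> trel R M C"
  have "fswap (tpush R M B M C id g y) = tpush R B M C M g id (fswap y)" using fswap_tpush[OF y mod_hom_funcset[OF mod_hom_id] mod_hom_funcset[OF hg]] .
  then have k': "tpush R B M C M g id (fswap y) \<in> trel R C M" using k fswap_trel[OF mM mC] by metis
  obtain z' where z': "z' \<in> tfree R A M" "tequiv B M (fsmult R (s \<otimes> s) (fswap y)) (tpush R A M B M f id z')"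
    using tensor_right_middle[OF mA mB mC mM hf hg sR e2 e3 e4 fswap_tfree[OF y] k'] by blast
  have e: "fswap (tpush R M A M B id f (fswap z')) = tpush R A M B M f id z'"
    using fswap_tpush[OF fswap_tfree[OF z'(1)] mod_hom_funcset[OF mod_hom_id] mod_hom_funcset[OF hf]] by simp
  have "tequiv B M (fswap (fsmult R (s \<otimes> s) y)) (fswap (tpush R M A M B id f (fswap z')))"
    using z'(2) e by (simp add: fswap_fsmult)
  then have "tequiv M B (fsmult R (s \<otimes> s) y) (tpush R M A M B id f (fswap z'))" using fswap_tequiv_iff[OF mM mB] by blast
  then show ?thesis using fswap_tfree[OF z'(1)] by blast
qed

end

end

section \<open>Free modules and free presentations\<close>

definition free_mod :: "'r ring \<Rightarrow> 'i set \<Rightarrow> ('r, 'i \<Rightarrow> 'r) module" where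
  "free_mod R I = \<lparr>carrier = {p. (\<forall>i. p i \<in> carrier R) \<and> (\<forall>i. i \<notin> I \<longrightarrow> p i = \<zero>\<^bsub>R\<^esub>) \<and> finite {i. p i \<noteq> \<zero>\<^bsub>R\<^esub>}},
     mult = (\<lambda>x y. fzero R), one = fzero R, zero = fzero R, add = fadd R, smult = fsmult R\<rparr>"

context tensor_cring begin

lemma free_mod_carrier: "p \<in> carrier (free_mod R I) \<longleftrightarrow> p \<in> rfuns \<and> (\<forall>i. i \<notin> I \<longrightarrow> p i = \<zero>) \<and> finite {i. p i \<noteq> \<zero>}"
  unfolding free_mod_def rfuns_def by simp

lemma free_mod_simps[simp]: "\<zero>\<^bsub>free_mod R I\<^esub> = fzero R" "x \<oplus>\<^bsub>free_mod R I\<^esub> y = fadd R x y"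
  "r \<odot>\<^bsub>free_mod R I\<^esub> x = fsmult R r x"
  by (simp_all add: free_mod_def)

lemma free_modI: "p \<in> rfuns \<Longrightarrow> (\<And>i. i \<notin> I \<Longrightarrow> p i = \<zero>) \<Longrightarrow> {i. p i \<noteq> \<zero>} \<subseteq> F \<Longrightarrow> finite F \<Longrightarrow>
   p \<in> carrier (free_mod R I)"
  unfolding free_mod_carrier by (blast intro: finite_subset)

lemma free_mod_rfuns: "p \<in> carrier (free_mod R I) \<Longrightarrow> p \<in> rfuns" by (simp add: free_mod_carrier)
lemma free_mod_out: "p \<in> carrier (free_mod R I) \<Longrightarrow> i \<notin> I \<Longrightarrow> p i = \<zero>" by (simp add: free_mod_carrier)
lemma free_mod_fin: "p \<in> carrier (free_mod R I) \<Longrightarrow> finite {i. p i \<noteq> \<zero>}" by (simp add: free_mod_carrier)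

lemma free_mod_fadd: "p \<in> carrier (free_mod R I) \<Longrightarrow> q \<in> carrier (free_mod R I) \<Longrightarrow> fadd R p q \<in> carrier (free_mod R I)"
  apply (rule free_modI[where F="{i. p i \<noteq> \<zero>} \<union> {i. q i \<noteq> \<zero>}"])
  apply (simp add: free_mod_rfuns)
  apply (simp add: free_mod_out fapp)
  apply (auto simp: fapp)[1]
  by (simp add: free_mod_fin)

lemma free_mod_fsmult: "r \<in> carrier R \<Longrightarrow> p \<in> carrier (free_mod R I) \<Longrightarrow> fsmult R r p \<in> carrier (free_mod R I)"
  apply (rule free_modI[where F="{i. p i \<noteq> \<zero>}"])
  apply (simp add: free_mod_rfuns)
  apply (simp add: free_mod_out fapp)
  apply (auto simp: fapp)[1]
  by (simp add: free_mod_fin)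

lemma free_mod_fneg: "p \<in> carrier (free_mod R I) \<Longrightarrow> fneg R p \<in> carrier (free_mod R I)"
  apply (rule free_modI[where F="{i. p i \<noteq> \<zero>}"])
  apply (simp add: free_mod_rfuns)
  apply (simp add: free_mod_out fapp)
  apply (auto simp: fapp)[1]
  by (simp add: free_mod_fin)

lemma free_mod_fzero: "fzero R \<in> carrier (free_mod R I)"
  by (rule free_modI[where F="{}"]) (auto simp: fapp)

lemma free_mod_fdelta: "i \<in> I \<Longrightarrow> fdelta R i \<in> carrier (free_mod R I)"
  by (rule free_modI[where F="{i}"]) (auto simp: fdelta_app)

lemma free_mod_module: "module R (free_mod R I)"
proof (rule moduleI)
  show "cring R" by (rule is_cring)
  show "abelian_group (free_mod R I)"
  proof (rule abelian_groupI)
    fix x y z assume x: "x \<in> carrier (free_mod R I)" and y: "y \<in> carrier (free_mod R I)" and z: "z \<in> carrier (free_mod R I)"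
    show "x \<oplus>\<^bsub>free_mod R I\<^esub> y \<in> carrier (free_mod R I)" using x y by (simp add: free_mod_fadd)
    show "x \<oplus>\<^bsub>free_mod R I\<^esub> y \<oplus>\<^bsub>free_mod R I\<^esub> z = x \<oplus>\<^bsub>free_mod R I\<^esub> (y \<oplus>\<^bsub>free_mod R I\<^esub> z)"
      using x y z by (simp add: fadd_assoc free_mod_rfuns)
    show "x \<oplus>\<^bsub>free_mod R I\<^esub> y = y \<oplus>\<^bsub>free_mod R I\<^esub> x" using x y by (simp add: fadd_comm free_mod_rfuns)
    show "\<zero>\<^bsub>free_mod R I\<^esub> \<oplus>\<^bsub>free_mod R I\<^esub> x = x" using x by (simp add: free_mod_rfuns)
    show "\<exists>y\<in>carrier (free_mod R I). y \<oplus>\<^bsub>free_mod R I\<^esub> x = \<zero>\<^bsub>free_mod R I\<^esub>"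
      using x free_mod_fneg[OF x] by (intro bexI[of _ "fneg R x"]) (simp_all add: fadd_comm free_mod_rfuns)
  next
    show "\<zero>\<^bsub>free_mod R I\<^esub> \<in> carrier (free_mod R I)" by (simp add: free_mod_fzero)
  qed
next
  fix a b x y assume a: "a \<in> carrier R" and b: "b \<in> carrier R" and x: "x \<in> carrier (free_mod R I)" and y: "y \<in> carrier (free_mod R I)"
  show "a \<odot>\<^bsub>free_mod R I\<^esub> x \<in> carrier (free_mod R I)" using a x by (simp add: free_mod_fsmult)
  show "(a \<oplus> b) \<odot>\<^bsub>free_mod R I\<^esub> x = a \<odot>\<^bsub>free_mod R I\<^esub> x \<oplus>\<^bsub>free_mod R I\<^esub> b \<odot>\<^bsub>free_mod R I\<^esub> x"
    using a b x by (simp add: fadd_fsmult_distr free_mod_rfuns)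
  show "a \<odot>\<^bsub>free_mod R I\<^esub> (x \<oplus>\<^bsub>free_mod R I\<^esub> y) = a \<odot>\<^bsub>free_mod R I\<^esub> x \<oplus>\<^bsub>free_mod R I\<^esub> a \<odot>\<^bsub>free_mod R I\<^esub> y"
    using a x y by (simp add: fsmult_fadd free_mod_rfuns)
  show "(a \<otimes> b) \<odot>\<^bsub>free_mod R I\<^esub> x = a \<odot>\<^bsub>free_mod R I\<^esub> (b \<odot>\<^bsub>free_mod R I\<^esub> x)"
    using a b x by (simp add: fsmult_assoc free_mod_rfuns)
next
  fix x assume x: "x \<in> carrier (free_mod R I)"
  show "\<one> \<odot>\<^bsub>free_mod R I\<^esub> x = x" using x by (simp add: free_mod_rfuns)
qed

lemma free_mod_finsum_app:
  assumes J: "finite J" and h: "h \<in> J \<rightarrow> carrier (free_mod R I)"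
  shows "finsum (free_mod R I) h J j = finsum R (\<lambda>i. h i j) J"
  using J h
proof (induction J rule: finite_induct)
  case empty
  have "finsum (free_mod R I) h {} = fzero R"
    using abelian_monoid.finsum_empty[OF abelian_group.axioms(1)[OF module.axioms(2)[OF free_mod_module]]] by simp
  then show ?case by (simp add: fzero_app)
next
  case (insert i J)
  interpret P: module R "free_mod R I" by (rule free_mod_module)
  have hJ: "h \<in> J \<rightarrow> carrier (free_mod R I)" using insert by auto
  have hc: "h k j \<in> carrier R" if "k \<in> insert i J" for k
  proof -
    have "h k \<in> carrier (free_mod R I)" using insert(4) that by blast
    then show ?thesis by (rule rfunsD[OF free_mod_rfuns])
  qed
  have "finsum (free_mod R I) h (insert i J) = h i \<oplus>\<^bsub>free_mod R I\<^esub> finsum (free_mod R I) h J"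
    using insert by (intro P.finsum_insert) auto
  then have "finsum (free_mod R I) h (insert i J) j = h i j \<oplus> finsum (free_mod R I) h J j" by (simp add: fapp)
  also have "\<dots> = h i j \<oplus> finsum R (\<lambda>i. h i j) J" using insert hJ by simp
  also have "\<dots> = finsum R (\<lambda>i. h i j) (insert i J)"
    using insert hc by (subst finsum_insert) (auto simp: Pi_def)
  finally show ?case .
qed

lemma free_mod_expand:
  assumes p: "p \<in> carrier (free_mod R I)" and J: "finite J" "J \<subseteq> I" "{i. p i \<noteq> \<zero>} \<subseteq> J"
  shows "finsum (free_mod R I) (\<lambda>i. fsmult R (p i) (fdelta R i)) J = p"
proof (rule ext)
  fix j
  have pF: "\<And>i. p i \<in> carrier R" using free_mod_rfuns[OF p] by simp
  have h: "(\<lambda>i. fsmult R (p i) (fdelta R i)) \<in> J \<rightarrow> carrier (free_mod R I)"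
    using J pF by (auto intro!: free_mod_fsmult free_mod_fdelta)
  have "finsum (free_mod R I) (\<lambda>i. fsmult R (p i) (fdelta R i)) J j = finsum R (\<lambda>i. p i \<otimes> fdelta R i j) J"
    using free_mod_finsum_app[OF J(1) h] by (simp add: fapp)
  also have "\<dots> = finsum R (\<lambda>i. if j = i then p i else \<zero>) J"
    using pF by (intro finsum_cong') (auto simp: fdelta_app)
  also have "\<dots> = p j"
  proof (cases "j \<in> J")
    case True
    then show ?thesis using finsum_singleton[OF True J(1), of p] pF by auto
  next
    case False
    then have "p j = \<zero>" using J(3) by blast
    moreover have "finsum R (\<lambda>i. if j = i then p i else \<zero>) J = finsum R (\<lambda>i. \<zero>) J"
      using False pF by (intro finsum_cong') auto
    ultimately show ?thesis by simp
  qed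
  finally show "finsum (free_mod R I) (\<lambda>i. fsmult R (p i) (fdelta R i)) J j = p j" .
qed

end

definition free_cover :: "'r ring \<Rightarrow> ('r,'m) module \<Rightarrow> ('m \<Rightarrow> 'r) \<Rightarrow> 'm" where
  "free_cover R M p = finsum M (\<lambda>m. p m \<odot>\<^bsub>M\<^esub> m) {m \<in> carrier M. p m \<noteq> \<zero>\<^bsub>R\<^esub>}"

definition cover_kernel :: "'r ring \<Rightarrow> ('r,'m) module \<Rightarrow> ('r, 'm \<Rightarrow> 'r) module" where
  "cover_kernel R M = (free_mod R (carrier M))\<lparr>carrier := {p \<in> carrier (free_mod R (carrier M)). free_cover R M p = \<zero>\<^bsub>M\<^esub>}\<rparr>"

context tensor_cring begin

context
  fixes M :: "('r,'m) module"
  assumes mM: "module R M"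
begin

lemma free_cover_alt:
  assumes p: "p \<in> carrier (free_mod R (carrier M))" and D: "finite D" "D \<subseteq> carrier M" "{m. p m \<noteq> \<zero>} \<subseteq> D"
  shows "free_cover R M p = finsum M (\<lambda>m. p m \<odot>\<^bsub>M\<^esub> m) D"
proof -
  interpret M: module R M by (rule mM)
  have pF: "\<And>i. p i \<in> carrier R" using free_mod_rfuns[OF p] by simp
  have sub: "{m \<in> carrier M. p m \<noteq> \<zero>} \<subseteq> D" using D by blast
  show ?thesis unfolding free_cover_def
  proof (rule M.add.finprod_mono_neutral_cong_left[OF D(1) sub])
    show "\<And>i. i \<in> D - {m \<in> carrier M. p m \<noteq> \<zero>} \<Longrightarrow> p i \<odot>\<^bsub>M\<^esub> i = \<zero>\<^bsub>M\<^esub>"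
      using D(2) by auto
    show "(\<lambda>m. p m \<odot>\<^bsub>M\<^esub> m) \<in> D \<rightarrow> carrier M" using D(2) pF by auto
  qed simp
qed

lemma free_cover_closed: "p \<in> carrier (free_mod R (carrier M)) \<Longrightarrow> free_cover R M p \<in> carrier M"
proof -
  assume p: "p \<in> carrier (free_mod R (carrier M))"
  interpret M: module R M by (rule mM)
  have pF: "\<And>i. p i \<in> carrier R" using free_mod_rfuns[OF p] by simp
  show ?thesis unfolding free_cover_def using pF by (intro M.finsum_closed) auto
qed

lemma free_cover_hom: "mod_hom R (free_mod R (carrier M)) M (free_cover R M)"
  unfolding mod_hom_def
proof (intro conjI ballI funcsetI)
  interpret M: module R M by (rule mM)
  fix x assume "x \<in> carrier (free_mod R (carrier M))"
  then show "free_cover R M x \<in> carrier M" by (rule free_cover_closed)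
next
  interpret M: module R M by (rule mM)
  fix x y assume x: "x \<in> carrier (free_mod R (carrier M))" and y: "y \<in> carrier (free_mod R (carrier M))"
  let ?D = "{m. x m \<noteq> \<zero>} \<union> {m. y m \<noteq> \<zero>}"
  have fD: "finite ?D" using free_mod_fin[OF x] free_mod_fin[OF y] by simp
  have sD: "?D \<subseteq> carrier M" using free_mod_out[OF x] free_mod_out[OF y] by blast
  have xy: "fadd R x y \<in> carrier (free_mod R (carrier M))" using x y by (rule free_mod_fadd)
  have sxy: "{m. fadd R x y m \<noteq> \<zero>} \<subseteq> ?D" by (auto simp: fapp)
  have xF: "\<And>i. x i \<in> carrier R" using free_mod_rfuns[OF x] by simp
  have yF: "\<And>i. y i \<in> carrier R" using free_mod_rfuns[OF y] by simp
  have "free_cover R M (fadd R x y) = finsum M (\<lambda>m. fadd R x y m \<odot>\<^bsub>M\<^esub> m) ?D" by (rule free_cover_alt[OF xy fD sD sxy])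
  also have "\<dots> = finsum M (\<lambda>m. x m \<odot>\<^bsub>M\<^esub> m \<oplus>\<^bsub>M\<^esub> y m \<odot>\<^bsub>M\<^esub> m) ?D"
    using sD xF yF by (intro M.finsum_cong') (auto simp: fapp M.smult_l_distr)
  also have "\<dots> = finsum M (\<lambda>m. x m \<odot>\<^bsub>M\<^esub> m) ?D \<oplus>\<^bsub>M\<^esub> finsum M (\<lambda>m. y m \<odot>\<^bsub>M\<^esub> m) ?D"
    using sD xF yF by (intro M.finsum_addf) auto
  also have "\<dots> = free_cover R M x \<oplus>\<^bsub>M\<^esub> free_cover R M y"
    using free_cover_alt[OF x fD sD] free_cover_alt[OF y fD sD] by auto
  finally show "free_cover R M (x \<oplus>\<^bsub>free_mod R (carrier M)\<^esub> y) = free_cover R M x \<oplus>\<^bsub>M\<^esub> free_cover R M y" by simp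
next
  interpret M: module R M by (rule mM)
  fix r x assume r: "r \<in> carrier R" and x: "x \<in> carrier (free_mod R (carrier M))"
  let ?D = "{m. x m \<noteq> \<zero>}"
  have fD: "finite ?D" using free_mod_fin[OF x] by simp
  have sD: "?D \<subseteq> carrier M" using free_mod_out[OF x] by blast
  have xy: "fsmult R r x \<in> carrier (free_mod R (carrier M))" using r x by (rule free_mod_fsmult)
  have xF: "\<And>i. x i \<in> carrier R" using free_mod_rfuns[OF x] by simp
  have sxy: "{m. fsmult R r x m \<noteq> \<zero>} \<subseteq> ?D" using r xF by (auto simp: fapp)
  have "free_cover R M (fsmult R r x) = finsum M (\<lambda>m. fsmult R r x m \<odot>\<^bsub>M\<^esub> m) ?D" by (rule free_cover_alt[OF xy fD sD sxy])
  also have "\<dots> = finsum M (\<lambda>m. r \<odot>\<^bsub>M\<^esub> (x m \<odot>\<^bsub>M\<^esub> m)) ?D"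
    using sD xF r by (intro M.finsum_cong') (auto simp: fapp M.smult_assoc1)
  also have "\<dots> = r \<odot>\<^bsub>M\<^esub> finsum M (\<lambda>m. x m \<odot>\<^bsub>M\<^esub> m) ?D"
    using sD xF r fD by (intro M.finsum_smult_ldistr[symmetric]) auto
  also have "\<dots> = r \<odot>\<^bsub>M\<^esub> free_cover R M x" using free_cover_alt[OF x fD sD] by simp
  finally show "free_cover R M (r \<odot>\<^bsub>free_mod R (carrier M)\<^esub> x) = r \<odot>\<^bsub>M\<^esub> free_cover R M x" by simp
qed

lemma free_cover_delta: "m \<in> carrier M \<Longrightarrow> free_cover R M (fdelta R m) = m"
proof -
  assume m: "m \<in> carrier M"
  interpret M: module R M by (rule mM)
  have "free_cover R M (fdelta R m) = finsum M (\<lambda>m'. fdelta R m m' \<odot>\<^bsub>M\<^esub> m') {m}"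
    using m by (intro free_cover_alt free_mod_fdelta) (auto simp: fdelta_app)
  then show ?thesis using m by (simp add: fdelta_app)
qed

lemma cover_kernel_carrier: "carrier (cover_kernel R M) = {p \<in> carrier (free_mod R (carrier M)). free_cover R M p = \<zero>\<^bsub>M\<^esub>}"
  by (simp add: cover_kernel_def)

lemma cover_kernel_submodule: "submodule {p \<in> carrier (free_mod R (carrier M)). free_cover R M p = \<zero>\<^bsub>M\<^esub>} R (free_mod R (carrier M))"
proof -
  interpret P: module R "free_mod R (carrier M)" by (rule free_mod_module)
  interpret M: module R M by (rule mM)
  have z: "free_cover R M (fzero R) = \<zero>\<^bsub>M\<^esub>" using mod_hom_zero[OF free_mod_module mM free_cover_hom] by simp
  show ?thesis
  proof (rule P.submoduleI)
    show "{p \<in> carrier (free_mod R (carrier M)). free_cover R M p = \<zero>\<^bsub>M\<^esub>} \<subseteq> carrier (free_mod R (carrier M))" by blast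
    show "\<zero>\<^bsub>free_mod R (carrier M)\<^esub> \<in> {p \<in> carrier (free_mod R (carrier M)). free_cover R M p = \<zero>\<^bsub>M\<^esub>}"
      using z free_mod_fzero by simp
  next
    fix a assume a: "a \<in> {p \<in> carrier (free_mod R (carrier M)). free_cover R M p = \<zero>\<^bsub>M\<^esub>}"
    then have "\<ominus>\<^bsub>free_mod R (carrier M)\<^esub> a = (\<ominus> \<one>) \<odot>\<^bsub>free_mod R (carrier M)\<^esub> a"
      using P.smult_l_minus[of \<one> a] P.smult_one[of a] by (simp del: free_mod_simps)
    moreover have "free_cover R M ((\<ominus> \<one>) \<odot>\<^bsub>free_mod R (carrier M)\<^esub> a) = \<zero>\<^bsub>M\<^esub>"
      using a mod_hom_smult[OF free_cover_hom, of "\<ominus> \<one>" a] by simp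
    ultimately show "\<ominus>\<^bsub>free_mod R (carrier M)\<^esub> a \<in> {p \<in> carrier (free_mod R (carrier M)). free_cover R M p = \<zero>\<^bsub>M\<^esub>}"
      using a free_mod_fsmult[of "\<ominus> \<one>" a] by simp
  next
    fix a b assume a: "a \<in> {p \<in> carrier (free_mod R (carrier M)). free_cover R M p = \<zero>\<^bsub>M\<^esub>}"
      and b: "b \<in> {p \<in> carrier (free_mod R (carrier M)). free_cover R M p = \<zero>\<^bsub>M\<^esub>}"
    then show "a \<oplus>\<^bsub>free_mod R (carrier M)\<^esub> b \<in> {p \<in> carrier (free_mod R (carrier M)). free_cover R M p = \<zero>\<^bsub>M\<^esub>}"
      using mod_hom_add[OF free_cover_hom, of a b] free_mod_fadd[of a _ b] by auto
  next
    fix r x assume r: "r \<in> carrier R" and x: "x \<in> {p \<in> carrier (free_mod R (carrier M)). free_cover R M p = \<zero>\<^bsub>M\<^esub>}"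
    then show "r \<odot>\<^bsub>free_mod R (carrier M)\<^esub> x \<in> {p \<in> carrier (free_mod R (carrier M)). free_cover R M p = \<zero>\<^bsub>M\<^esub>}"
      using mod_hom_smult[OF free_cover_hom r, of x] free_mod_fsmult[OF r, of x] by auto
  qed
qed

lemma cover_kernel_module: "module R (cover_kernel R M)"
  unfolding cover_kernel_def by (rule submodule.submodule_is_module[OF cover_kernel_submodule free_mod_module])

lemma cover_kernel_hom: "mod_hom R (cover_kernel R M) (free_mod R (carrier M)) id"
  unfolding mod_hom_def by (auto simp: cover_kernel_def)

lemma cover_kernel_exact: "short_exact (cover_kernel R M) (free_mod R (carrier M)) M id (free_cover R M)"
  unfolding short_exact_def
proof (intro conjI)
  have z: "free_cover R M (fzero R) = \<zero>\<^bsub>M\<^esub>" using mod_hom_zero[OF free_mod_module mM free_cover_hom] by simp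
  show "{a \<in> carrier (cover_kernel R M). id a = \<zero>\<^bsub>free_mod R (carrier M)\<^esub>} = {\<zero>\<^bsub>cover_kernel R M\<^esub>}"
    using z free_mod_fzero by (auto simp: cover_kernel_def free_mod_def)
  show "{b \<in> carrier (free_mod R (carrier M)). free_cover R M b = \<zero>\<^bsub>M\<^esub>} = id ` carrier (cover_kernel R M)"
    by (simp add: cover_kernel_def)
  show "free_cover R M ` carrier (free_mod R (carrier M)) = carrier M"
  proof
    show "free_cover R M ` carrier (free_mod R (carrier M)) \<subseteq> carrier M" using free_cover_closed by blast
    show "carrier M \<subseteq> free_cover R M ` carrier (free_mod R (carrier M))"
    proof
      fix m assume m: "m \<in> carrier M"
      then show "m \<in> free_cover R M ` carrier (free_mod R (carrier M))"
        using free_cover_delta[OF m] free_mod_fdelta[OF m] by (intro image_eqI[of _ _ "fdelta R m"]) auto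
    qed
  qed
qed

end
end

section \<open>Tensoring with a free module\<close>

definition fsum :: "'r ring \<Rightarrow> ('i \<Rightarrow> 'p \<Rightarrow> 'r) \<Rightarrow> 'i set \<Rightarrow> 'p \<Rightarrow> 'r" where
  "fsum R h J = (\<lambda>q. finsum R (\<lambda>i. h i q) J)"

definition idx_support :: "'r ring \<Rightarrow> ('a \<times> ('i \<Rightarrow> 'r) \<Rightarrow> 'r) \<Rightarrow> 'i set" where
  "idx_support R y = (\<Union>q\<in>{q. y q \<noteq> \<zero>\<^bsub>R\<^esub>}. {i. snd q i \<noteq> \<zero>\<^bsub>R\<^esub>})"

text \<open>The j-th coordinate of the isomorphism Y \<otimes> R^(I) \<cong> Y^(I), which sends y \<otimes> p to the family of the p j \<cdot> y.\<close>
definition tcoord :: "'r ring \<Rightarrow> ('r,'y) module \<Rightarrow> ('y \<times> ('i \<Rightarrow> 'r) \<Rightarrow> 'r) \<Rightarrow> 'i \<Rightarrow> 'y" where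
  "tcoord R Y x j = finsum Y (\<lambda>q. (x q \<otimes>\<^bsub>R\<^esub> snd q j) \<odot>\<^bsub>Y\<^esub> fst q) {q. x q \<noteq> \<zero>\<^bsub>R\<^esub>}"

context tensor_cring begin

lemma fsum_empty: "fsum R h {} = fzero R"
  by (rule ext) (simp add: fsum_def fapp)

lemma fsum_insert: "finite J \<Longrightarrow> i \<notin> J \<Longrightarrow> (\<And>k. k \<in> insert i J \<Longrightarrow> h k \<in> rfuns) \<Longrightarrow>
  fsum R h (insert i J) = fadd R (h i) (fsum R h J)"
proof (rule ext)
  fix q assume h: "finite J" "i \<notin> J" "\<And>k. k \<in> insert i J \<Longrightarrow> h k \<in> rfuns"
  have "\<And>k. k \<in> insert i J \<Longrightarrow> h k q \<in> carrier R" using h(3) by simp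
  then show "fsum R h (insert i J) q = fadd R (h i) (fsum R h J) q"
    unfolding fsum_def fadd_app using h by (subst finsum_insert) (auto simp: Pi_def)
qed

lemma fsum_rfuns: "(\<And>k. k \<in> J \<Longrightarrow> h k \<in> rfuns) \<Longrightarrow> fsum R h J \<in> rfuns"
  unfolding fsum_def by (intro rfunsI finsum_closed) (auto simp: Pi_def)

lemma fsum_tfree: "finite J \<Longrightarrow> (\<And>k. k \<in> J \<Longrightarrow> h k \<in> tfree R M X) \<Longrightarrow> fsum R h J \<in> tfree R M X"
proof (induction J rule: finite_induct)
  case empty
  then show ?case by (simp add: fsum_empty)
next
  case (insert i J)
  have "\<And>k. k \<in> insert i J \<Longrightarrow> h k \<in> rfuns" using insert.prems by (blast intro: tfree_rfuns)
  then show ?case using insert by (subst fsum_insert) auto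
qed

lemma fsum_trel: assumes mM: "module R M" and mX: "module R X" shows "finite J \<Longrightarrow> (\<And>k. k \<in> J \<Longrightarrow> h k \<in> trel R M X) \<Longrightarrow> fsum R h J \<in> trel R M X"
proof (induction J rule: finite_induct)
  case empty
  then show ?case by (simp add: fsum_empty)
next
  case (insert i J)
  have "\<And>k. k \<in> insert i J \<Longrightarrow> h k \<in> rfuns" using insert.prems trel_rfuns[OF mM mX] by blast
  then show ?case using insert mM mX by (subst fsum_insert) auto
qed

lemma fsum_fadd: "finite J \<Longrightarrow> (\<And>k. k \<in> J \<Longrightarrow> h k \<in> rfuns) \<Longrightarrow> (\<And>k. k \<in> J \<Longrightarrow> h' k \<in> rfuns) \<Longrightarrow>
  fsum R (\<lambda>i. fadd R (h i) (h' i)) J = fadd R (fsum R h J) (fsum R h' J)"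
proof (rule ext)
  fix q assume h: "finite J" "\<And>k. k \<in> J \<Longrightarrow> h k \<in> rfuns" "\<And>k. k \<in> J \<Longrightarrow> h' k \<in> rfuns"
  show "fsum R (\<lambda>i. fadd R (h i) (h' i)) J q = fadd R (fsum R h J) (fsum R h' J) q"
    unfolding fsum_def fadd_app using h by (intro finsum_addf) (auto simp: Pi_def)
qed

lemma fsum_fsmult: "finite J \<Longrightarrow> r \<in> carrier R \<Longrightarrow> (\<And>k. k \<in> J \<Longrightarrow> h k \<in> rfuns) \<Longrightarrow>
  fsum R (\<lambda>i. fsmult R r (h i)) J = fsmult R r (fsum R h J)"
proof (rule ext)
  fix q assume h: "finite J" "r \<in> carrier R" "\<And>k. k \<in> J \<Longrightarrow> h k \<in> rfuns"
  show "fsum R (\<lambda>i. fsmult R r (h i)) J q = fsmult R r (fsum R h J) q"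
    unfolding fsum_def fsmult_app using h by (intro finsum_rdistr[symmetric]) (auto simp: Pi_def)
qed

lemma fsum_tequiv: assumes mM: "module R M" and mX: "module R X" shows "finite J \<Longrightarrow> (\<And>k. k \<in> J \<Longrightarrow> h k \<in> tfree R M X) \<Longrightarrow>
   (\<And>k. k \<in> J \<Longrightarrow> h' k \<in> tfree R M X) \<Longrightarrow> (\<And>k. k \<in> J \<Longrightarrow> tequiv M X (h k) (h' k)) \<Longrightarrow>
   tequiv M X (fsum R h J) (fsum R h' J)"
proof (induction J rule: finite_induct)
  case empty
  then show ?case by (simp add: fsum_empty tequiv_refl[OF mM mX])
next
  case (insert i J)
  have "\<And>k. k \<in> insert i J \<Longrightarrow> h k \<in> rfuns" "\<And>k. k \<in> insert i J \<Longrightarrow> h' k \<in> rfuns"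
    using insert.prems by (blast intro: tfree_rfuns)+
  then have e1: "fsum R h (insert i J) = fadd R (h i) (fsum R h J)"
    and e2: "fsum R h' (insert i J) = fadd R (h' i) (fsum R h' J)" using insert by (auto intro: fsum_insert)
  have t: "fsum R h J \<in> tfree R M X" "fsum R h' J \<in> tfree R M X" using insert by (auto intro: fsum_tfree)
  have hi: "h i \<in> tfree R M X" "h' i \<in> tfree R M X" using insert.prems by auto
  show ?case unfolding e1 e2
    by (rule tequiv_add[OF mM mX tfree_rfuns[OF hi(1)] tfree_rfuns[OF t(1)] tfree_rfuns[OF hi(2)] tfree_rfuns[OF t(2)]])
       (use insert in auto)
qed

lemma free_mod_val[simp]: "p \<in> carrier (free_mod R I) \<Longrightarrow> p j \<in> carrier R"
  by (rule rfunsD[OF free_mod_rfuns])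

context
  fixes Y :: "('r,'y) module" and I :: "'i set"
  assumes mY: "module R Y"
begin

lemma tcoord_alt:
  assumes x: "x \<in> tfree R Y (free_mod R I)" and D: "finite D" "D \<subseteq> carrier Y \<times> carrier (free_mod R I)"
    "{q. x q \<noteq> \<zero>} \<subseteq> D"
  shows "tcoord R Y x j = finsum Y (\<lambda>q. (x q \<otimes> snd q j) \<odot>\<^bsub>Y\<^esub> fst q) D"
proof -
  interpret Y: module R Y by (rule mY)
  have c: "(x q \<otimes> snd q j) \<odot>\<^bsub>Y\<^esub> fst q \<in> carrier Y" if "q \<in> D" for q
  proof -
    have "snd q \<in> carrier (free_mod R I)" "fst q \<in> carrier Y" using that D(2) by auto
    then show ?thesis using free_mod_rfuns x by simp
  qed
  show ?thesis unfolding tcoord_def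
  proof (rule Y.add.finprod_mono_neutral_cong_left[OF D(1) D(3)])
    show "\<And>i. i \<in> D - {q. x q \<noteq> \<zero>} \<Longrightarrow> (x i \<otimes> snd i j) \<odot>\<^bsub>Y\<^esub> fst i = \<zero>\<^bsub>Y\<^esub>"
    proof -
      fix i assume i: "i \<in> D - {q. x q \<noteq> \<zero>}"
      have "snd i \<in> carrier (free_mod R I)" "fst i \<in> carrier Y" using i D(2) by auto
      then show "(x i \<otimes> snd i j) \<odot>\<^bsub>Y\<^esub> fst i = \<zero>\<^bsub>Y\<^esub>" using i free_mod_rfuns by simp
    qed
    show "(\<lambda>q. (x q \<otimes> snd q j) \<odot>\<^bsub>Y\<^esub> fst q) \<in> D \<rightarrow> carrier Y" using c by blast
  qed simp
qed

lemma tcoord_closed: "x \<in> tfree R Y (free_mod R I) \<Longrightarrow> tcoord R Y x j \<in> carrier Y"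
proof -
  assume x: "x \<in> tfree R Y (free_mod R I)"
  interpret Y: module R Y by (rule mY)
  have D: "finite {q. x q \<noteq> \<zero>}" "{q. x q \<noteq> \<zero>} \<subseteq> carrier Y \<times> carrier (free_mod R I)"
    using tfree_fin[OF x] tfree_supp[OF x] by auto
  show ?thesis unfolding tcoord_alt[OF x D subset_refl]
  proof (rule Y.finsum_closed, rule funcsetI)
    fix q assume "q \<in> {q. x q \<noteq> \<zero>}"
    then have "snd q \<in> carrier (free_mod R I)" "fst q \<in> carrier Y" using D(2) by auto
    then show "(x q \<otimes> snd q j) \<odot>\<^bsub>Y\<^esub> fst q \<in> carrier Y" using free_mod_rfuns x by simp
  qed
qed

lemma tcoord_fadd: "x \<in> tfree R Y (free_mod R I) \<Longrightarrow> y \<in> tfree R Y (free_mod R I) \<Longrightarrow>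
   tcoord R Y (fadd R x y) j = tcoord R Y x j \<oplus>\<^bsub>Y\<^esub> tcoord R Y y j"
proof -
  assume x: "x \<in> tfree R Y (free_mod R I)" and y: "y \<in> tfree R Y (free_mod R I)"
  interpret Y: module R Y by (rule mY)
  let ?D = "{p. x p \<noteq> \<zero>} \<union> {p. y p \<noteq> \<zero>}"
  have fD: "finite ?D" using tfree_fin[OF x] tfree_fin[OF y] by simp
  have sD: "?D \<subseteq> carrier Y \<times> carrier (free_mod R I)" using tfree_supp[OF x] tfree_supp[OF y] by blast
  have xy: "fadd R x y \<in> tfree R Y (free_mod R I)" using x y by simp
  have sxy: "{p. fadd R x y p \<noteq> \<zero>} \<subseteq> ?D" by (auto simp: fapp)
  have c: "snd q j \<in> carrier R" "fst q \<in> carrier Y" if "q \<in> ?D" for q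
    using that sD free_mod_rfuns by auto
  have "tcoord R Y (fadd R x y) j = finsum Y (\<lambda>q. (fadd R x y q \<otimes> snd q j) \<odot>\<^bsub>Y\<^esub> fst q) ?D"
    by (rule tcoord_alt[OF xy fD sD sxy])
  also have "\<dots> = finsum Y (\<lambda>q. (x q \<otimes> snd q j) \<odot>\<^bsub>Y\<^esub> fst q \<oplus>\<^bsub>Y\<^esub> (y q \<otimes> snd q j) \<odot>\<^bsub>Y\<^esub> fst q) ?D"
    using c x y by (intro Y.finsum_cong') (auto simp: fapp l_distr Y.smult_l_distr)
  also have "\<dots> = finsum Y (\<lambda>q. (x q \<otimes> snd q j) \<odot>\<^bsub>Y\<^esub> fst q) ?D \<oplus>\<^bsub>Y\<^esub> finsum Y (\<lambda>q. (y q \<otimes> snd q j) \<odot>\<^bsub>Y\<^esub> fst q) ?D"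
    using c x y by (intro Y.finsum_addf) auto
  also have "\<dots> = tcoord R Y x j \<oplus>\<^bsub>Y\<^esub> tcoord R Y y j"
    using tcoord_alt[OF x fD sD] tcoord_alt[OF y fD sD] by auto
  finally show ?thesis .
qed

lemma tcoord_fsmult: "r \<in> carrier R \<Longrightarrow> x \<in> tfree R Y (free_mod R I) \<Longrightarrow>
   tcoord R Y (fsmult R r x) j = r \<odot>\<^bsub>Y\<^esub> tcoord R Y x j"
proof -
  assume r: "r \<in> carrier R" and x: "x \<in> tfree R Y (free_mod R I)"
  interpret Y: module R Y by (rule mY)
  let ?D = "{p. x p \<noteq> \<zero>}"
  have fD: "finite ?D" using tfree_fin[OF x] by simp
  have sD: "?D \<subseteq> carrier Y \<times> carrier (free_mod R I)" using tfree_supp[OF x] by blast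
  have xy: "fsmult R r x \<in> tfree R Y (free_mod R I)" using r x by simp
  have sxy: "{p. fsmult R r x p \<noteq> \<zero>} \<subseteq> ?D" using r x by (auto simp: fapp)
  have c: "snd q j \<in> carrier R" "fst q \<in> carrier Y" if "q \<in> ?D" for q
    using that sD free_mod_rfuns by auto
  have "tcoord R Y (fsmult R r x) j = finsum Y (\<lambda>q. (fsmult R r x q \<otimes> snd q j) \<odot>\<^bsub>Y\<^esub> fst q) ?D"
    by (rule tcoord_alt[OF xy fD sD sxy])
  also have "\<dots> = finsum Y (\<lambda>q. r \<odot>\<^bsub>Y\<^esub> ((x q \<otimes> snd q j) \<odot>\<^bsub>Y\<^esub> fst q)) ?D"
    using c x r by (intro Y.finsum_cong') (auto simp: fapp m_assoc Y.smult_assoc1)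
  also have "\<dots> = r \<odot>\<^bsub>Y\<^esub> finsum Y (\<lambda>q. (x q \<otimes> snd q j) \<odot>\<^bsub>Y\<^esub> fst q) ?D"
    using c x r fD by (intro Y.finsum_smult_ldistr[symmetric]) auto
  also have "\<dots> = r \<odot>\<^bsub>Y\<^esub> tcoord R Y x j" using tcoord_alt[OF x fD sD] by simp
  finally show ?thesis .
qed

lemma tcoord_fzero: "tcoord R Y (fzero R) j = \<zero>\<^bsub>Y\<^esub>"
proof -
  interpret Y: module R Y by (rule mY)
  show ?thesis unfolding tcoord_def by (simp add: fapp)
qed

lemma tcoord_fdelta: "b \<in> carrier Y \<Longrightarrow> p \<in> carrier (free_mod R I) \<Longrightarrow> tcoord R Y (fdelta R (b, p)) j = p j \<odot>\<^bsub>Y\<^esub> b"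
proof -
  assume b: "b \<in> carrier Y" and p: "p \<in> carrier (free_mod R I)"
  interpret Y: module R Y by (rule mY)
  have "tcoord R Y (fdelta R (b, p)) j = finsum Y (\<lambda>q. (fdelta R (b, p) q \<otimes> snd q j) \<odot>\<^bsub>Y\<^esub> fst q) {(b, p)}"
    using b p by (intro tcoord_alt) (auto simp: fdelta_app)
  then show ?thesis using b p free_mod_rfuns[OF p] by (simp add: fdelta_app)
qed

lemma tcoord_fneg: "x \<in> tfree R Y (free_mod R I) \<Longrightarrow> tcoord R Y (fneg R x) j = \<ominus>\<^bsub>Y\<^esub> tcoord R Y x j"
proof -
  assume x: "x \<in> tfree R Y (free_mod R I)"
  interpret Y: module R Y by (rule mY)
  have "tcoord R Y (fneg R x) j = (\<ominus> \<one>) \<odot>\<^bsub>Y\<^esub> tcoord R Y x j"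
    using x by (simp add: fneg_eq_fsmult tcoord_fsmult)
  also have "\<dots> = \<ominus>\<^bsub>Y\<^esub> tcoord R Y x j" using tcoord_closed[OF x] by (simp add: Y.smult_l_minus)
  finally show ?thesis .
qed

end

context
  fixes Y :: "('r,'y) module" and I :: "'i set"
  assumes mY: "module R Y"
begin

lemma tcoord_trel:
  assumes x: "x \<in> trel R Y (free_mod R I)"
  shows "tcoord R Y x j = \<zero>\<^bsub>Y\<^esub>"
proof -
  interpret Y: module R Y by (rule mY)
  note tcoord_simps = tcoord_fadd[OF mY, where I=I] tcoord_fneg[OF mY, where I=I]
    tcoord_fdelta[OF mY, where I=I] tcoord_fsmult[OF mY, where I=I]
  show ?thesis using mY free_mod_module x
  proof (induction rule: trel_induct)
    case zero
    then show ?case by (simp add: tcoord_fzero[OF mY])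
  next
    case (ladd m m' a)
    then show ?case by (simp add: tcoord_simps Y.smult_r_distr Y.r_neg)
  next
    case (radd m a a')
    then have "fadd R a a' \<in> carrier (free_mod R I)" using free_mod_fadd by blast
    with radd show ?case by (simp add: tcoord_simps fadd_app[of R a a'] Y.smult_l_distr Y.r_neg)
  next
    case (lsmult r m a)
    then have "a j \<odot>\<^bsub>Y\<^esub> (r \<odot>\<^bsub>Y\<^esub> m) = r \<odot>\<^bsub>Y\<^esub> (a j \<odot>\<^bsub>Y\<^esub> m)"
      using Y.smult_assoc1[of "a j" r m] Y.smult_assoc1[of r "a j" m] by (simp add: m_comm)
    with lsmult show ?case by (simp add: tcoord_simps Y.r_neg)
  next
    case (rsmult r m a)
    then have "fsmult R r a \<in> carrier (free_mod R I)" using free_mod_fsmult by blast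
    with rsmult show ?case by (simp add: tcoord_simps fsmult_app[of R r a] Y.smult_assoc1 Y.r_neg)
  next
    case (add x y)
    then show ?case using mY free_mod_module[of I] by (simp add: tcoord_simps)
  next
    case (smult r x)
    then show ?case using mY free_mod_module[of I] by (simp add: tcoord_simps)
  qed
qed

end

lemma tcoord_push:
  fixes A :: "('r,'a) module" and B :: "('r,'b) module" and I :: "'i set" and j :: 'i
  assumes mA: "module R A" and mB: "module R B" and hf: "mod_hom R A B f" and y: "y \<in> tfree R A (free_mod R I)"
  shows "tcoord R B (tpush R A (free_mod R I) B (free_mod R I) f id y) j = f (tcoord R A y j)"
  using y
proof (induction rule: tfree_induct)
  case zero
  have z1: "tcoord R B (fzero R :: 'b \<times> ('i \<Rightarrow> 'r) \<Rightarrow> 'r) j = \<zero>\<^bsub>B\<^esub>" by (rule tcoord_fzero[OF mB])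
  have z2: "tcoord R A (fzero R :: 'a \<times> ('i \<Rightarrow> 'r) \<Rightarrow> 'r) j = \<zero>\<^bsub>A\<^esub>" by (rule tcoord_fzero[OF mA])
  show ?case unfolding tpush_fzero z1 z2 using mod_hom_zero[OF mA mB hf] by simp
next
  case (step y0 r p)
  obtain a q where p: "p = (a, q)" by (cases p)
  have aq: "a \<in> carrier A" "q \<in> carrier (free_mod R I)" using step p by auto
  have t: "tpush R A (free_mod R I) B (free_mod R I) f id y0 \<in> tfree R B (free_mod R I)"
    using step by (intro tpush_tfree) auto
  have fa: "f a \<in> carrier B" using mod_hom_closed[OF hf aq(1)] .
  have "tpush R A (free_mod R I) B (free_mod R I) f id (fadd R y0 (fsmult R r (fdelta R p))) =
    fadd R (tpush R A (free_mod R I) B (free_mod R I) f id y0) (fsmult R r (fdelta R (f a, q)))"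
    unfolding p using step aq fa by (subst tpush_step) auto
  then have "tcoord R B (tpush R A (free_mod R I) B (free_mod R I) f id (fadd R y0 (fsmult R r (fdelta R p)))) j
     = tcoord R B (tpush R A (free_mod R I) B (free_mod R I) f id y0) j \<oplus>\<^bsub>B\<^esub> r \<odot>\<^bsub>B\<^esub> (q j \<odot>\<^bsub>B\<^esub> f a)"
    using step.hyps t aq fa by (simp add: tcoord_fadd[OF mB, where I=I] tcoord_fsmult[OF mB, where I=I] tcoord_fdelta[OF mB, where I=I])
  also have "\<dots> = f (tcoord R A y0 j) \<oplus>\<^bsub>B\<^esub> r \<odot>\<^bsub>B\<^esub> (q j \<odot>\<^bsub>B\<^esub> f a)"
    by (simp only: step.IH)
  also have "\<dots> = f (tcoord R A y0 j \<oplus>\<^bsub>A\<^esub> r \<odot>\<^bsub>A\<^esub> (q j \<odot>\<^bsub>A\<^esub> a))"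
    using step.hyps aq tcoord_closed[OF mA, where I=I] mod_hom_add[OF hf] mod_hom_smult[OF hf] mA by simp
  also have "\<dots> = f (tcoord R A (fadd R y0 (fsmult R r (fdelta R p))) j)"
    unfolding p using step.hyps aq by (simp add: tcoord_fadd[OF mA, where I=I] tcoord_fsmult[OF mA, where I=I] tcoord_fdelta[OF mA, where I=I])
  finally show ?case .
qed

context
  fixes A :: "('r,'a) module" and I :: "'i set"
  assumes mA: "module R A"
begin

lemma tequiv_fsum_delta_right: "finite J \<Longrightarrow> a \<in> carrier A \<Longrightarrow> h ` J \<subseteq> carrier (free_mod R I) \<Longrightarrow>
  tequiv A (free_mod R I) (fsum R (\<lambda>i. fdelta R (a, h i)) J) (fdelta R (a, finsum (free_mod R I) h J))"
proof (induction J rule: finite_induct)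
  case empty
  interpret P: module R "free_mod R I" by (rule free_mod_module[of I])
  have "fdelta R (a, \<zero>\<^bsub>free_mod R I\<^esub>) \<in> trel R A (free_mod R I)" using trel_delta_rzero[OF mA free_mod_module[of I] empty.prems(1)] .
  then have "tequiv A (free_mod R I) (fdelta R (a, \<zero>\<^bsub>free_mod R I\<^esub>)) (fzero R)" using tequiv_zero_iff[OF mA free_mod_module[of I]] by simp
  then have "tequiv A (free_mod R I) (fzero R) (fdelta R (a, \<zero>\<^bsub>free_mod R I\<^esub>))" using tequiv_sym[OF mA free_mod_module[of I]] by simp
  then show ?case by (simp add: fsum_empty del: free_mod_simps)
next
  case (insert i J)
  interpret P: module R "free_mod R I" by (rule free_mod_module[of I])
  have hi: "h i \<in> carrier (free_mod R I)" and hJ: "h ` J \<subseteq> carrier (free_mod R I)" using insert.prems by auto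
  have S: "finsum (free_mod R I) h J \<in> carrier (free_mod R I)" using hJ by (intro P.finsum_closed) auto
  have e1: "finsum (free_mod R I) h (insert i J) = h i \<oplus>\<^bsub>free_mod R I\<^esub> finsum (free_mod R I) h J"
    using insert hi hJ by (intro P.finsum_insert) auto
  have e2: "fsum R (\<lambda>i. fdelta R (a, h i)) (insert i J) = fadd R (fdelta R (a, h i)) (fsum R (\<lambda>i. fdelta R (a, h i)) J)"
    using insert by (intro fsum_insert) auto
  have IH: "tequiv A (free_mod R I) (fsum R (\<lambda>i. fdelta R (a, h i)) J) (fdelta R (a, finsum (free_mod R I) h J))"
    using insert hJ by simp
  have t1: "tequiv A (free_mod R I) (fadd R (fdelta R (a, h i)) (fsum R (\<lambda>i. fdelta R (a, h i)) J))
       (fadd R (fdelta R (a, h i)) (fdelta R (a, finsum (free_mod R I) h J)))"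
    using tequiv_add[OF mA free_mod_module[of I] _ _ _ _ tequiv_refl[OF mA free_mod_module[of I]] IH] by (simp add: fsum_rfuns)
  have t2: "tequiv A (free_mod R I) (fdelta R (a, h i \<oplus>\<^bsub>free_mod R I\<^esub> finsum (free_mod R I) h J))
      (fadd R (fdelta R (a, h i)) (fdelta R (a, finsum (free_mod R I) h J)))"
    using tequiv_delta_radd[OF mA free_mod_module[of I] insert.prems(1) hi S] .
  show ?case unfolding e1 e2
    using tequiv_trans[OF mA free_mod_module[of I] _ _ _ t1 tequiv_sym[OF mA free_mod_module[of I] _ _ t2]] by (simp add: fsum_rfuns del: free_mod_simps)
qed

lemma tequiv_delta_expand:
  assumes a: "a \<in> carrier A" and p: "p \<in> carrier (free_mod R I)" and J: "finite J" "J \<subseteq> I" "{i. p i \<noteq> \<zero>} \<subseteq> J"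
  shows "tequiv A (free_mod R I) (fsum R (\<lambda>i. fdelta R (p i \<odot>\<^bsub>A\<^esub> a, fdelta R i)) J) (fdelta R (a, p))"
proof -
  have ei: "fdelta R i \<in> carrier (free_mod R I)" if "i \<in> J" for i by (rule free_mod_fdelta) (use that J(2) in blast)
  have pi: "p i \<in> carrier R" for i using p by simp
  have step: "tequiv A (free_mod R I) (fdelta R (p i \<odot>\<^bsub>A\<^esub> a, fdelta R i)) (fdelta R (a, fsmult R (p i) (fdelta R i)))"
    if "i \<in> J" for i
  proof -
    have t1: "tequiv A (free_mod R I) (fdelta R (p i \<odot>\<^bsub>A\<^esub> a, fdelta R i)) (fsmult R (p i) (fdelta R (a, fdelta R i)))"
      using tequiv_delta_lsmult[OF mA free_mod_module[of I] pi a ei[OF that]] .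
    have t2: "tequiv A (free_mod R I) (fdelta R (a, p i \<odot>\<^bsub>free_mod R I\<^esub> fdelta R i)) (fsmult R (p i) (fdelta R (a, fdelta R i)))"
      using tequiv_delta_rsmult[OF mA free_mod_module[of I] pi a ei[OF that]] .
    show ?thesis using tequiv_trans[OF mA free_mod_module[of I] _ _ _ t1 tequiv_sym[OF mA free_mod_module[of I] _ _ t2]] by (simp add: pi)
  qed
  have h1: "tequiv A (free_mod R I) (fsum R (\<lambda>i. fdelta R (p i \<odot>\<^bsub>A\<^esub> a, fdelta R i)) J)
      (fsum R (\<lambda>i. fdelta R (a, fsmult R (p i) (fdelta R i))) J)"
  proof (rule fsum_tequiv[OF mA free_mod_module[of I] J(1)])
    fix k assume k: "k \<in> J"
    show "fdelta R (p k \<odot>\<^bsub>A\<^esub> a, fdelta R k) \<in> tfree R A (free_mod R I)" using k ei a mA pi by simp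
    show "fdelta R (a, fsmult R (p k) (fdelta R k)) \<in> tfree R A (free_mod R I)"
      using a free_mod_fsmult[OF pi ei[OF k]] by simp
    show "tequiv A (free_mod R I) (fdelta R (p k \<odot>\<^bsub>A\<^esub> a, fdelta R k)) (fdelta R (a, fsmult R (p k) (fdelta R k)))"
      by (rule step[OF k])
  qed
  have h2: "tequiv A (free_mod R I) (fsum R (\<lambda>i. fdelta R (a, fsmult R (p i) (fdelta R i))) J)
      (fdelta R (a, finsum (free_mod R I) (\<lambda>i. fsmult R (p i) (fdelta R i)) J))"
    using tequiv_fsum_delta_right[OF J(1) a, of "\<lambda>i. fsmult R (p i) (fdelta R i)"] free_mod_fsmult[OF pi ei] by auto
  have e: "finsum (free_mod R I) (\<lambda>i. fsmult R (p i) (fdelta R i)) J = p" by (rule free_mod_expand[OF p J])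
  show ?thesis using tequiv_trans[OF mA free_mod_module[of I] _ _ _ h1 h2] unfolding e by (simp add: fsum_rfuns)
qed

lemma idx_support_finite: "y \<in> tfree R A (free_mod R I) \<Longrightarrow> finite (idx_support R y) \<and> idx_support R y \<subseteq> I"
proof -
  assume y: "y \<in> tfree R A (free_mod R I)"
  have sq: "snd q \<in> carrier (free_mod R I)" if "y q \<noteq> \<zero>" for q using tfree_supp[OF y] that by auto
  have "finite {i. snd q i \<noteq> \<zero>}" if "q \<in> {q. y q \<noteq> \<zero>}" for q using free_mod_fin[OF sq] that by simp
  then have f: "finite (idx_support R y)" unfolding idx_support_def using tfree_fin[OF y] by blast
  have "idx_support R y \<subseteq> I"
  proof
    fix i assume "i \<in> idx_support R y"
    then obtain q where q: "y q \<noteq> \<zero>" "snd q i \<noteq> \<zero>" unfolding idx_support_def by blast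
    show "i \<in> I"
    proof (rule ccontr)
      assume "i \<notin> I"
      then have "snd q i = \<zero>" using free_mod_out[OF sq[OF q(1)]] by simp
      then show False using q by simp
    qed
  qed
  then show ?thesis using f by simp
qed

lemma idx_support_mono: "{q. y q \<noteq> \<zero>} \<subseteq> {q. y' q \<noteq> \<zero>} \<Longrightarrow> idx_support R y \<subseteq> idx_support R y'"
  unfolding idx_support_def by blast

lemma tequiv_coord_sum_step:
  assumes J: "finite J" "J \<subseteq> I" and y0: "y0 \<in> tfree R A (free_mod R I)" and r: "r \<in> carrier R"
    and aq: "a \<in> carrier A" "q \<in> carrier (free_mod R I)" and qJ: "{i. q i \<noteq> \<zero>} \<subseteq> J"
  shows "tequiv A (free_mod R I)
    (fsum R (\<lambda>i. fdelta R (tcoord R A (fadd R y0 (fsmult R r (fdelta R (a, q)))) i, fdelta R i)) J)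
    (fadd R (fsum R (\<lambda>i. fdelta R (tcoord R A y0 i, fdelta R i)) J) (fsmult R r (fdelta R (a, q))))"
proof -
  note mP = free_mod_module[of I]
  let ?E = "\<lambda>v. fsum R (\<lambda>i. fdelta R (v i, fdelta R i)) J"
  let ?u = "\<lambda>i. q i \<odot>\<^bsub>A\<^esub> a"
  have ei: "fdelta R i \<in> carrier (free_mod R I)" if "i \<in> J" for i by (rule free_mod_fdelta) (use that J(2) in blast)
  have pc: "tcoord R A y0 i \<in> carrier A" for i using tcoord_closed[OF mA y0] .
  have rc: "r \<odot>\<^bsub>A\<^esub> ?u i \<in> carrier A" "?u i \<in> carrier A" for i using r aq mA by auto
  have "tcoord R A (fadd R y0 (fsmult R r (fdelta R (a, q)))) i = tcoord R A y0 i \<oplus>\<^bsub>A\<^esub> r \<odot>\<^bsub>A\<^esub> ?u i" for i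
    using y0 r aq by (simp add: tcoord_fadd[OF mA, where I=I] tcoord_fsmult[OF mA, where I=I] tcoord_fdelta[OF mA, where I=I])
  then have "tequiv A (free_mod R I) (?E (tcoord R A (fadd R y0 (fsmult R r (fdelta R (a, q))))))
      (fsum R (\<lambda>i. fadd R (fdelta R (tcoord R A y0 i, fdelta R i)) (fdelta R (r \<odot>\<^bsub>A\<^esub> ?u i, fdelta R i))) J)"
    by (intro fsum_tequiv[OF mA mP J(1)]) (use ei pc rc mA in \<open>auto intro: tequiv_delta_ladd[OF mA mP]\<close>)
  also have "fsum R (\<lambda>i. fadd R (fdelta R (tcoord R A y0 i, fdelta R i)) (fdelta R (r \<odot>\<^bsub>A\<^esub> ?u i, fdelta R i))) J
      = fadd R (?E (tcoord R A y0)) (fsum R (\<lambda>i. fdelta R (r \<odot>\<^bsub>A\<^esub> ?u i, fdelta R i)) J)"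
    using J(1) by (intro fsum_fadd) auto
  finally have sum: "tequiv A (free_mod R I) (?E (tcoord R A (fadd R y0 (fsmult R r (fdelta R (a, q))))))
      (fadd R (?E (tcoord R A y0)) (fsum R (\<lambda>i. fdelta R (r \<odot>\<^bsub>A\<^esub> ?u i, fdelta R i)) J))" .
  have "tequiv A (free_mod R I) (fsum R (\<lambda>i. fdelta R (r \<odot>\<^bsub>A\<^esub> ?u i, fdelta R i)) J)
      (fsum R (\<lambda>i. fsmult R r (fdelta R (?u i, fdelta R i))) J)"
    by (rule fsum_tequiv[OF mA mP J(1)]) (use ei rc r in \<open>auto intro: tequiv_delta_lsmult[OF mA mP]\<close>)
  also have "fsum R (\<lambda>i. fsmult R r (fdelta R (?u i, fdelta R i))) J = fsmult R r (?E ?u)"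
    using J(1) r by (intro fsum_fsmult) auto
  finally have "tequiv A (free_mod R I) (fsum R (\<lambda>i. fdelta R (r \<odot>\<^bsub>A\<^esub> ?u i, fdelta R i)) J) (fsmult R r (fdelta R (a, q)))"
    using tequiv_trans[OF mA mP _ _ _ _ tequiv_smult[OF mA mP r _ _ tequiv_delta_expand[OF aq J qJ]]] r
    by (simp add: fsum_rfuns)
  then show ?thesis
    using tequiv_trans[OF mA mP _ _ _ sum tequiv_add[OF mA mP _ _ _ _ tequiv_refl[OF mA mP]]] r
    by (simp add: fsum_rfuns)
qed

lemma tequiv_coord_expansion:
  assumes J: "finite J" "J \<subseteq> I" and y: "y \<in> tfree R A (free_mod R I)"
  shows "idx_support R y \<subseteq> J \<longrightarrow> tequiv A (free_mod R I) y (fsum R (\<lambda>i. fdelta R (tcoord R A y i, fdelta R i)) J)"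
  using y
proof (induction rule: tfree_induct)
  case zero
  note mP = free_mod_module[of I]
  have "fsum R (\<lambda>i. fdelta R (tcoord R A (fzero R) i, fdelta R i)) J \<in> trel R A (free_mod R I)"
    using J by (intro fsum_trel[OF mA mP J(1)])
      (auto simp: tcoord_fzero[OF mA] intro!: trel_delta_lzero[OF mA mP] free_mod_fdelta)
  then show ?case using tequiv_sym[OF mA mP] tequiv_zero_iff[OF mA mP] by (simp add: fsum_rfuns)
next
  case (step y0 r p)
  obtain a q where p: "p = (a, q)" by (cases p)
  have aq: "a \<in> carrier A" "q \<in> carrier (free_mod R I)" using step p by auto
  let ?y = "fadd R y0 (fsmult R r (fdelta R p))"
  show ?case
  proof
    assume U: "idx_support R ?y \<subseteq> J"
    show "tequiv A (free_mod R I) ?y (fsum R (\<lambda>i. fdelta R (tcoord R A ?y i, fdelta R i)) J)"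
    proof (cases "r = \<zero>")
      case True
      then show ?thesis using step U by simp
    next
      case False
      then have sub: "{x. y0 x \<noteq> \<zero>} \<subseteq> {x. ?y x \<noteq> \<zero>}" and yp: "?y p \<noteq> \<zero>"
        using step by (auto simp: fapp fdelta_app)
      have IH: "tequiv A (free_mod R I) y0 (fsum R (\<lambda>i. fdelta R (tcoord R A y0 i, fdelta R i)) J)"
        using step.IH idx_support_mono[OF sub] U by blast
      have "{i. snd p i \<noteq> \<zero>} \<subseteq> idx_support R ?y" unfolding idx_support_def using yp by blast
      then have qJ: "{i. q i \<noteq> \<zero>} \<subseteq> J" using U p by simp
      show ?thesis
        using tequiv_trans[OF mA free_mod_module _ _ _ _ tequiv_sym[OF mA free_mod_module _ _
            tequiv_coord_sum_step[OF J step(1) \<open>r \<in> carrier R\<close> aq qJ]]]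
          tequiv_add[OF mA free_mod_module _ _ _ _ IH tequiv_refl[OF mA free_mod_module]] step p
        by (simp add: fsum_rfuns)
    qed
  qed
qed

lemma tensor_free_right_inj:
  assumes mB: "module R B" and hf: "mod_hom R A B f" and sR: "s \<in> carrier R"
    and tor: "\<And>a. a \<in> carrier A \<Longrightarrow> f a = \<zero>\<^bsub>B\<^esub> \<Longrightarrow> s \<odot>\<^bsub>A\<^esub> a = \<zero>\<^bsub>A\<^esub>"
    and y: "y \<in> tfree R A (free_mod R I)"
    and k: "tpush R A (free_mod R I) B (free_mod R I) f id y \<in> trel R B (free_mod R I)"
  shows "fsmult R s y \<in> trel R A (free_mod R I)"
proof -
  let ?J = "idx_support R y"
  have J: "finite ?J" "?J \<subseteq> I" using idx_support_finite[OF y] by auto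
  have z: "s \<odot>\<^bsub>A\<^esub> tcoord R A y i = \<zero>\<^bsub>A\<^esub>" for i
  proof -
    have "tcoord R B (tpush R A (free_mod R I) B (free_mod R I) f id y) i = \<zero>\<^bsub>B\<^esub>"
      by (rule tcoord_trel[OF mB k])
    then have "f (tcoord R A y i) = \<zero>\<^bsub>B\<^esub>" using tcoord_push[OF mA mB hf y] by simp
    then show ?thesis using tor tcoord_closed[OF mA y] by simp
  qed
  have sy: "fsmult R s y \<in> tfree R A (free_mod R I)" using sR y by simp
  have sub: "{q. fsmult R s y q \<noteq> \<zero>} \<subseteq> {q. y q \<noteq> \<zero>}" using sR y by (auto simp: fapp)
  have U: "idx_support R (fsmult R s y) \<subseteq> ?J" by (rule idx_support_mono[OF sub])
  have t: "tequiv A (free_mod R I) (fsmult R s y) (fsum R (\<lambda>i. fdelta R (tcoord R A (fsmult R s y) i, fdelta R i)) ?J)"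
    using tequiv_coord_expansion[OF J sy] U by simp
  have e: "tcoord R A (fsmult R s y) i = \<zero>\<^bsub>A\<^esub>" for i using tcoord_fsmult[OF mA sR y] z by simp
  have "fsum R (\<lambda>i. fdelta R (tcoord R A (fsmult R s y) i, fdelta R i)) ?J \<in> trel R A (free_mod R I)"
    unfolding e using J by (intro fsum_trel[OF mA free_mod_module[of I] J(1)]) (auto intro!: trel_delta_lzero[OF mA free_mod_module[of I]] free_mod_fdelta)
  then show ?thesis using tequiv_rel[OF mA free_mod_module[of I] _ _ t] sy by (simp add: fsum_rfuns)
qed

end

lemma tensor_free_left_inj:
  assumes mA: "module R A" and mB: "module R B" and hf: "mod_hom R A B f" and sR: "s \<in> carrier R"
    and tor: "\<And>a. a \<in> carrier A \<Longrightarrow> f a = \<zero>\<^bsub>B\<^esub> \<Longrightarrow> s \<odot>\<^bsub>A\<^esub> a = \<zero>\<^bsub>A\<^esub>"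
    and y: "y \<in> tfree R (free_mod R I) A"
    and k: "tpush R (free_mod R I) A (free_mod R I) B id f y \<in> trel R (free_mod R I) B"
  shows "fsmult R s y \<in> trel R (free_mod R I) A"
proof -
  note mP = free_mod_module[of I]
  have "fswap (tpush R (free_mod R I) A (free_mod R I) B id f y) = tpush R A (free_mod R I) B (free_mod R I) f id (fswap y)"
    using fswap_tpush[OF y mod_hom_funcset[OF mod_hom_id] mod_hom_funcset[OF hf]] .
  then have k': "tpush R A (free_mod R I) B (free_mod R I) f id (fswap y) \<in> trel R B (free_mod R I)"
    using k fswap_trel[OF mP mB] by metis
  have "fsmult R s (fswap y) \<in> trel R A (free_mod R I)"
    by (rule tensor_free_right_inj[OF mA mB hf sR tor fswap_tfree[OF y] k'])
  then have "fswap (fsmult R s y) \<in> trel R A (free_mod R I)" by (simp add: fswap_fsmult)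
  then show ?thesis using fswap_trel_iff[OF mP mA] by blast
qed

end

section \<open>The diagram chase through a free presentation\<close>

context tensor_cring begin

lemma short_exact_conds:
  assumes mA: "module R A" and mB: "module R B" and mC: "module R C"
    and hf: "mod_hom R A B f" and hg: "mod_hom R B C g" and se: "short_exact A B C f g"
  shows "\<And>a. a \<in> carrier A \<Longrightarrow> f a = \<zero>\<^bsub>B\<^esub> \<Longrightarrow> \<one> \<odot>\<^bsub>A\<^esub> a = \<zero>\<^bsub>A\<^esub>"
    and "\<And>b. b \<in> carrier B \<Longrightarrow> g b = \<zero>\<^bsub>C\<^esub> \<Longrightarrow> \<one> \<odot>\<^bsub>B\<^esub> b \<in> f ` carrier A"
    and "\<And>a. a \<in> carrier A \<Longrightarrow> g (\<one> \<odot>\<^bsub>B\<^esub> f a) = \<zero>\<^bsub>C\<^esub>"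
    and "\<And>c. c \<in> carrier C \<Longrightarrow> \<one> \<odot>\<^bsub>C\<^esub> c \<in> g ` carrier B"
proof -
  have k1: "{a \<in> carrier A. f a = \<zero>\<^bsub>B\<^esub>} = {\<zero>\<^bsub>A\<^esub>}" and k2: "{b \<in> carrier B. g b = \<zero>\<^bsub>C\<^esub>} = f ` carrier A"
    and k3: "g ` carrier B = carrier C" using se unfolding short_exact_def by auto
  show "\<And>a. a \<in> carrier A \<Longrightarrow> f a = \<zero>\<^bsub>B\<^esub> \<Longrightarrow> \<one> \<odot>\<^bsub>A\<^esub> a = \<zero>\<^bsub>A\<^esub>"
    using k1 mA by (auto simp: module.smult_one)
  show "\<And>b. b \<in> carrier B \<Longrightarrow> g b = \<zero>\<^bsub>C\<^esub> \<Longrightarrow> \<one> \<odot>\<^bsub>B\<^esub> b \<in> f ` carrier A"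
    using k2 mB by (auto simp: module.smult_one)
  show "\<And>a. a \<in> carrier A \<Longrightarrow> g (\<one> \<odot>\<^bsub>B\<^esub> f a) = \<zero>\<^bsub>C\<^esub>"
  proof -
    fix a assume a: "a \<in> carrier A"
    have "f a \<in> {b \<in> carrier B. g b = \<zero>\<^bsub>C\<^esub>}" using k2 a by blast
    then show "g (\<one> \<odot>\<^bsub>B\<^esub> f a) = \<zero>\<^bsub>C\<^esub>" using mB by (simp add: module.smult_one)
  qed
  show "\<And>c. c \<in> carrier C \<Longrightarrow> \<one> \<odot>\<^bsub>C\<^esub> c \<in> g ` carrier B"
    using k3 mC by (auto simp: module.smult_one)
qed

lemma short_exact_imp_u_S_exact:
  assumes mA: "module R A" and mB: "module R B" and mC: "module R C"
    and hf: "mod_hom R A B f" and hg: "mod_hom R B C g" and se: "short_exact A B C f g" and S: "\<one> \<in> S"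
  shows "u_S_exact R S A B C f g"
  unfolding u_S_exact_def using short_exact_conds[OF assms(1-6)] S by blast

lemma u_S_exact_tensor_scaledI:
  assumes m1: "module R M1" "module R X1" and m2: "module R M2" "module R X2" and m3: "module R M3" "module R X3"
    and h1: "mod_hom R M1 M2 f1" "mod_hom R X1 X2 g1" and h2: "mod_hom R M2 M3 f2" "mod_hom R X2 X3 g2"
    and sR: "s \<in> carrier R" and tR: "t \<in> carrier R" and s1S: "s \<otimes> ((s \<otimes> s) \<otimes> (t \<otimes> s)) \<in> S"
    and c1: "\<And>x. x \<in> tfree R M1 X1 \<Longrightarrow> tpush R M1 X1 M2 X2 f1 g1 x \<in> trel R M2 X2 \<Longrightarrow>
        fsmult R (s \<otimes> ((s \<otimes> s) \<otimes> (t \<otimes> s))) x \<in> trel R M1 X1"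
    and c2: "\<And>y. y \<in> tfree R M2 X2 \<Longrightarrow> tpush R M2 X2 M3 X3 f2 g2 y \<in> trel R M3 X3 \<Longrightarrow>
        \<exists>x\<in>tfree R M1 X1. tequiv M2 X2 (fsmult R (s \<otimes> s) y) (tpush R M1 X1 M2 X2 f1 g1 x)"
    and c3: "\<And>x. x \<in> tfree R M1 X1 \<Longrightarrow> tpush R M2 X2 M3 X3 f2 g2 (fsmult R s (tpush R M1 X1 M2 X2 f1 g1 x)) \<in> trel R M3 X3"
    and c4: "\<And>z. z \<in> tfree R M3 X3 \<Longrightarrow> \<exists>y\<in>tfree R M2 X2. tequiv M3 X3 (fsmult R s z) (tpush R M2 X2 M3 X3 f2 g2 y)"
  shows "u_S_exact R S (tensor R M1 X1) (tensor R M2 X2) (tensor R M3 X3)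
     (tensor_map R M1 X1 M2 X2 f1 g1) (tensor_map R M2 X2 M3 X3 f2 g2)"
proof -
  let ?s1 = "s \<otimes> ((s \<otimes> s) \<otimes> (t \<otimes> s))"
  let ?v = "s \<otimes> (t \<otimes> s)" and ?v' = "s \<otimes> (s \<otimes> (t \<otimes> s))"
  have vR: "?v \<in> carrier R" "?v' \<in> carrier R" using sR tR by auto
  have ev: "?v \<otimes> (s \<otimes> s) = ?s1" using sR tR by algebra
  have ev': "?v' \<otimes> s = ?s1" using sR tR by algebra
  show ?thesis
  proof (rule u_S_exact_tensorI[OF m1 m2 m3 h1 h2 s1S])
    show "?s1 \<in> carrier R" using sR tR by simp
    show "\<And>x. x \<in> tfree R M1 X1 \<Longrightarrow> tpush R M1 X1 M2 X2 f1 g1 x \<in> trel R M2 X2 \<Longrightarrow> fsmult R ?s1 x \<in> trel R M1 X1"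
      by (rule c1)
  next
    fix y assume y: "y \<in> tfree R M2 X2" and k: "tpush R M2 X2 M3 X3 f2 g2 y \<in> trel R M3 X3"
    obtain x where x: "x \<in> tfree R M1 X1" "tequiv M2 X2 (fsmult R (s \<otimes> s) y) (tpush R M1 X1 M2 X2 f1 g1 x)"
      using c2[OF y k] by blast
    have "tequiv M2 X2 (fsmult R ?v (fsmult R (s \<otimes> s) y)) (fsmult R ?v (tpush R M1 X1 M2 X2 f1 g1 x))"
      by (rule tequiv_smult[OF m2 vR(1) _ _ x(2)]) (use y x sR in \<open>simp_all add: tpush_rfuns\<close>)
    moreover have "fsmult R ?v (fsmult R (s \<otimes> s) y) = fsmult R ?s1 y" using y sR vR ev by (simp add: fsmult_assoc)
    moreover have "fsmult R ?v (tpush R M1 X1 M2 X2 f1 g1 x) = tpush R M1 X1 M2 X2 f1 g1 (fsmult R ?v x)"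
      using x vR by (simp add: tpush_fsmult)
    ultimately show "\<exists>x\<in>tfree R M1 X1. tequiv M2 X2 (fsmult R ?s1 y) (tpush R M1 X1 M2 X2 f1 g1 x)"
      using x vR by (intro bexI[of _ "fsmult R ?v x"]) auto
  next
    fix x assume x: "x \<in> tfree R M1 X1"
    have t1: "tpush R M1 X1 M2 X2 f1 g1 x \<in> tfree R M2 X2" by (rule tpush_tfree[OF x])
    have "tpush R M2 X2 M3 X3 f2 g2 (fsmult R ?s1 (tpush R M1 X1 M2 X2 f1 g1 x)) =
        fsmult R ?v' (tpush R M2 X2 M3 X3 f2 g2 (fsmult R s (tpush R M1 X1 M2 X2 f1 g1 x)))"
      using t1 sR tR vR ev' by (simp add: tpush_fsmult fsmult_assoc tpush_rfuns)
    then show "tpush R M2 X2 M3 X3 f2 g2 (fsmult R ?s1 (tpush R M1 X1 M2 X2 f1 g1 x)) \<in> trel R M3 X3"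
      using c3[OF x] vR by simp
  next
    fix z assume z: "z \<in> tfree R M3 X3"
    obtain y where y: "y \<in> tfree R M2 X2" "tequiv M3 X3 (fsmult R s z) (tpush R M2 X2 M3 X3 f2 g2 y)"
      using c4[OF z] by blast
    have "tequiv M3 X3 (fsmult R ?v' (fsmult R s z)) (fsmult R ?v' (tpush R M2 X2 M3 X3 f2 g2 y))"
      by (rule tequiv_smult[OF m3 vR(2) _ _ y(2)]) (use y z sR in \<open>simp_all add: tpush_rfuns\<close>)
    moreover have "fsmult R ?v' (fsmult R s z) = fsmult R ?s1 z" using z sR vR ev' by (simp add: fsmult_assoc)
    moreover have "fsmult R ?v' (tpush R M2 X2 M3 X3 f2 g2 y) = tpush R M2 X2 M3 X3 f2 g2 (fsmult R ?v' y)"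
      using y vR by (simp add: tpush_fsmult)
    ultimately show "\<exists>y\<in>tfree R M2 X2. tequiv M3 X3 (fsmult R ?s1 z) (tpush R M2 X2 M3 X3 f2 g2 y)"
      using y vR by (intro bexI[of _ "fsmult R ?v' y"]) auto
  qed
qed

context
  fixes M :: "('r,'m) module" and A :: "('r,'a) module" and B :: "('r,'b) module" and C :: "('r,'c) module"
    and f g s t
  assumes mM: "module R M" and mA: "module R A" and mB: "module R B" and mC: "module R C"
    and hf: "mod_hom R A B f" and hg: "mod_hom R B C g" and sR: "s \<in> carrier R" and tR: "t \<in> carrier R"
    and e1: "\<And>a. a \<in> carrier A \<Longrightarrow> f a = \<zero>\<^bsub>B\<^esub> \<Longrightarrow> s \<odot>\<^bsub>A\<^esub> a = \<zero>\<^bsub>A\<^esub>"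
    and e2: "\<And>b. b \<in> carrier B \<Longrightarrow> g b = \<zero>\<^bsub>C\<^esub> \<Longrightarrow> s \<odot>\<^bsub>B\<^esub> b \<in> f ` carrier A"
    and e3: "\<And>a. a \<in> carrier A \<Longrightarrow> g (s \<odot>\<^bsub>B\<^esub> f a) = \<zero>\<^bsub>C\<^esub>"
    and e4: "\<And>c. c \<in> carrier C \<Longrightarrow> s \<odot>\<^bsub>C\<^esub> c \<in> g ` carrier B"
    and kernel_inj: "\<And>x. x \<in> tfree R (cover_kernel R M) C \<Longrightarrow>
       tpush R (cover_kernel R M) C (free_mod R (carrier M)) C id id x \<in> trel R (free_mod R (carrier M)) C \<Longrightarrow>
       fsmult R t x \<in> trel R (cover_kernel R M) C"
begin

abbreviation (input) "PM \<equiv> free_mod R (carrier M)"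
abbreviation (input) "KM \<equiv> cover_kernel R M"
abbreviation (input) "piM \<equiv> free_cover R M"

lemma cover_facts:
  shows PM_module: "module R PM" and KM_module: "module R KM" and KM_incl_hom: "mod_hom R KM PM id" and piM_hom: "mod_hom R PM M piM"
    and KM_incl_funcset: "id \<in> carrier KM \<rightarrow> carrier PM" and piM_funcset: "piM \<in> carrier PM \<rightarrow> carrier M"
  using free_mod_module cover_kernel_module[OF mM] cover_kernel_hom[OF mM] free_cover_hom[OF mM]
    mod_hom_funcset[OF cover_kernel_hom[OF mM]] mod_hom_funcset[OF free_cover_hom[OF mM]]
  by auto

lemma chase_lift:
  assumes x: "x \<in> tfree R M A" and k: "tpush R M A M B id f x \<in> trel R M B"
  obtains y z where "y \<in> tfree R PM A" "z \<in> tfree R KM B"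
    "tequiv M A x (tpush R PM A M A piM id y)"
    "tequiv PM B (tpush R PM A PM B id f y) (tpush R KM B PM B id id z)"
proof -
  note ex = short_exact_conds[OF KM_module PM_module mM KM_incl_hom piM_hom cover_kernel_exact[OF mM]]
  obtain y where y: "y \<in> tfree R PM A" and "tequiv M A (fsmult R \<one> x) (tpush R PM A M A piM id y)"
    using tensor_right_surj[OF KM_module PM_module mM mA KM_incl_hom piM_hom one_closed ex(2-4) x] by blast
  then have xy: "tequiv M A x (tpush R PM A M A piM id y)" using x by simp
  have "tpush R M A M B id f (tpush R PM A M A piM id y) = tpush R PM B M B piM id (tpush R PM A PM B id f y)"
    by (rule tpush_commute[OF y piM_funcset mod_hom_funcset[OF hf]])
  moreover have "tequiv M B (tpush R M A M B id f x) (tpush R M A M B id f (tpush R PM A M A piM id y))"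
    by (rule tpush_tequiv[OF mM mA mM mB mod_hom_id hf x tpush_tfree[OF y] xy])
  ultimately have "tpush R PM B M B piM id (tpush R PM A PM B id f y) \<in> trel R M B"
    using tequiv_rel[OF mM mB _ _ tequiv_sym[OF mM mB] k] x y by (simp add: tpush_tfree)
  then obtain z where z: "z \<in> tfree R KM B"
    and "tequiv PM B (fsmult R (\<one> \<otimes> \<one>) (tpush R PM A PM B id f y)) (tpush R KM B PM B id id z)"
    using tensor_right_middle[OF KM_module PM_module mM mB KM_incl_hom piM_hom one_closed ex(2-4) tpush_tfree[OF y]] by blast
  then have "tequiv PM B (tpush R PM A PM B id f y) (tpush R KM B PM B id id z)" using y by (simp add: tpush_tfree)
  with that y z xy show thesis by blast
qed

lemma chase_kernel:
  assumes y: "y \<in> tfree R PM A" and z: "z \<in> tfree R KM B"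
    and yz: "tequiv PM B (tpush R PM A PM B id f y) (tpush R KM B PM B id id z)"
  obtains w where "w \<in> tfree R KM A"
    "tequiv KM B (fsmult R ((s \<otimes> s) \<otimes> (t \<otimes> s)) z) (tpush R KM A KM B id f w)"
proof -
  let ?fy = "tpush R PM A PM B id f y" and ?iz = "tpush R KM B PM B id id z"
  let ?gz = "tpush R KM B KM C id g z"
  have fyt: "?fy \<in> tfree R PM B" and izt: "?iz \<in> tfree R PM B" and gzt: "?gz \<in> tfree R KM C"
    using y z by (simp_all add: tpush_tfree)
  have gfyt: "tpush R PM B PM C id g ?fy \<in> tfree R PM C" and gizt: "tpush R PM B PM C id g ?iz \<in> tfree R PM C"
    using fyt izt by (simp_all add: tpush_tfree)
  have "tequiv PM C (tpush R PM B PM C id g ?iz) (tpush R PM B PM C id g ?fy)"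
    by (rule tpush_tequiv[OF PM_module mB PM_module mC mod_hom_id hg izt fyt tequiv_sym[OF PM_module mB _ _ yz]]) (use izt fyt in simp_all)
  then have "tequiv PM C (fsmult R s (tpush R PM B PM C id g ?iz)) (fsmult R s (tpush R PM B PM C id g ?fy))"
    using tequiv_smult[OF PM_module mC sR] gfyt gizt by simp
  moreover have "fsmult R s (tpush R PM B PM C id g ?fy) \<in> trel R PM C"
    using tensor_left_complex[OF PM_module mA mB mC hf hg sR e2 e3 e4 y] fyt sR by (simp add: tpush_fsmult)
  ultimately have "fsmult R s (tpush R PM B PM C id g ?iz) \<in> trel R PM C"
    by (meson tequiv_rel[OF PM_module mC] fsmult_rfuns tfree_rfuns gfyt gizt sR)
  moreover have "tpush R PM B PM C id g ?iz = tpush R KM C PM C id id ?gz"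
    by (rule tpush_commute[OF z KM_incl_funcset mod_hom_funcset[OF hg]])
  ultimately have "tpush R KM C PM C id id (fsmult R s ?gz) \<in> trel R PM C"
    using gzt sR by (simp add: tpush_fsmult)
  then have "fsmult R t (fsmult R s ?gz) \<in> trel R KM C"
    by (rule kernel_inj[OF fsmult_tfree[OF sR gzt]])
  moreover have "fsmult R t (fsmult R s ?gz) = tpush R KM B KM C id g (fsmult R (t \<otimes> s) z)"
    using z sR tR by (simp add: tpush_fsmult fsmult_assoc)
  ultimately obtain w where w: "w \<in> tfree R KM A"
    and "tequiv KM B (fsmult R (s \<otimes> s) (fsmult R (t \<otimes> s) z)) (tpush R KM A KM B id f w)"
    using tensor_left_middle[OF KM_module mA mB mC hf hg sR e2 e3 e4] z sR tR by (metis m_closed fsmult_tfree)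
  then show thesis using that z sR tR by (simp add: fsmult_assoc)
qed

lemma chase_correction:
  assumes y: "y \<in> tfree R PM A" and z: "z \<in> tfree R KM B" and w: "w \<in> tfree R KM A"
    and yz: "tequiv PM B (tpush R PM A PM B id f y) (tpush R KM B PM B id id z)"
    and zw: "tequiv KM B (fsmult R c z) (tpush R KM A KM B id f w)" and cR: "c \<in> carrier R"
  shows "fsmult R s (fadd R (fsmult R c y) (fneg R (tpush R KM A PM A id id w))) \<in> trel R PM A"
proof (rule tensor_free_left_inj[OF mA mB hf sR e1])
  let ?fy = "tpush R PM A PM B id f y" and ?iz = "tpush R KM B PM B id id z"
  let ?iw = "tpush R KM A PM A id id w"
  let ?u = "tpush R PM A PM B id f ?iw"
  have fyt: "?fy \<in> tfree R PM B" and izt: "?iz \<in> tfree R PM B" and iwt: "?iw \<in> tfree R PM A"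
    and ut: "?u \<in> tfree R PM B" and fwt: "tpush R KM A KM B id f w \<in> tfree R KM B"
    using y z w by (simp_all add: tpush_tfree)
  show "fadd R (fsmult R c y) (fneg R ?iw) \<in> tfree R PM A" using y iwt cR by simp
  have "?u = tpush R KM B PM B id id (tpush R KM A KM B id f w)"
    by (rule tpush_commute[OF w KM_incl_funcset mod_hom_funcset[OF hf]])
  moreover have "tequiv PM B (tpush R KM B PM B id id (tpush R KM A KM B id f w)) (tpush R KM B PM B id id (fsmult R c z))"
    by (rule tpush_tequiv[OF KM_module mB PM_module mB KM_incl_hom mod_hom_id fwt _ tequiv_sym[OF KM_module mB _ _ zw]]) (use z fwt cR in simp_all)
  ultimately have "tequiv PM B ?u (fsmult R c ?iz)" using z cR by (simp add: tpush_fsmult)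
  moreover have "tequiv PM B (fsmult R c ?iz) (fsmult R c ?fy)"
    by (rule tequiv_smult[OF PM_module mB cR _ _ tequiv_sym[OF PM_module mB _ _ yz]]) (use izt fyt in simp_all)
  ultimately have "tequiv PM B ?u (fsmult R c ?fy)"
    using tequiv_trans[OF PM_module mB] ut fyt izt cR by (meson fsmult_rfuns tfree_rfuns)
  then have "tequiv PM B (fadd R (fsmult R c ?fy) (fneg R ?u)) (fadd R (fsmult R c ?fy) (fneg R (fsmult R c ?fy)))"
    by (intro tequiv_add[OF PM_module mB] tequiv_refl[OF PM_module mB] tequiv_neg[OF PM_module mB]) (use ut fyt cR in simp_all)
  moreover have "tpush R PM A PM B id f (fadd R (fsmult R c y) (fneg R ?iw)) = fadd R (fsmult R c ?fy) (fneg R ?u)"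
    using y iwt cR by (simp add: tpush_fadd tpush_fsmult tpush_fneg)
  ultimately show "tpush R PM A PM B id f (fadd R (fsmult R c y) (fneg R ?iw)) \<in> trel R PM B"
    using ut fyt cR by (simp add: tequiv_zero_iff[OF PM_module mB])
qed

lemma tensor_left_inj_via_cover:
  assumes x: "x \<in> tfree R M A" and k: "tpush R M A M B id f x \<in> trel R M B"
  shows "fsmult R (s \<otimes> ((s \<otimes> s) \<otimes> (t \<otimes> s))) x \<in> trel R M A"
proof -
  let ?c = "(s \<otimes> s) \<otimes> (t \<otimes> s)"
  have cR: "?c \<in> carrier R" using sR tR by simp
  obtain y z where y: "y \<in> tfree R PM A" and z: "z \<in> tfree R KM B"
    and xy: "tequiv M A x (tpush R PM A M A piM id y)"
    and yz: "tequiv PM B (tpush R PM A PM B id f y) (tpush R KM B PM B id id z)"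
    using chase_lift[OF x k] .
  obtain w where w: "w \<in> tfree R KM A" and zw: "tequiv KM B (fsmult R ?c z) (tpush R KM A KM B id f w)"
    using chase_kernel[OF y z yz] .
  let ?Py = "tpush R PM A M A piM id y" and ?iw = "tpush R KM A PM A id id w"
  have Pyt: "?Py \<in> tfree R M A" and iwt: "?iw \<in> tfree R PM A" using y w by (simp_all add: tpush_tfree)
  have "tpush R PM A M A piM id (fsmult R s (fadd R (fsmult R ?c y) (fneg R ?iw))) \<in> trel R M A"
    by (rule tpush_trel[OF PM_module mA mM mA piM_hom mod_hom_id chase_correction[OF y z w yz zw cR]])
  moreover have "tpush R PM A M A piM id ?iw \<in> trel R M A"
  proof -
    have "tpush R PM A M A piM id ?iw = tpush R KM A M A (\<lambda>m. piM (id m)) (\<lambda>a. id (id a)) w"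
      by (rule tpush_comp[OF w KM_incl_funcset _ piM_funcset]) simp_all
    moreover have "tpush R KM A M A (\<lambda>m. piM (id m)) (\<lambda>a. id (id a)) w \<in> trel R M A"
      by (rule tpush_zero_map[OF mM mA w]) (simp_all add: cover_kernel_carrier[OF mM])
    ultimately show ?thesis by simp
  qed
  moreover have "tpush R PM A M A piM id (fsmult R s (fadd R (fsmult R ?c y) (fneg R ?iw))) =
     fadd R (fsmult R (s \<otimes> ?c) ?Py) (fneg R (fsmult R s (tpush R PM A M A piM id ?iw)))"
    using y iwt cR sR by (simp add: tpush_fadd tpush_fsmult tpush_fneg fsmult_fadd fsmult_assoc fsmult_fneg)
  ultimately have "fsmult R (s \<otimes> ?c) ?Py \<in> trel R M A"
    using sR cR Pyt iwt fdiff_fadd_cancel[of "fsmult R (s \<otimes> ?c) ?Py" "fsmult R s (tpush R PM A M A piM id ?iw)"]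
    by (metis trel_fadd trel_fsmult fsmult_rfuns m_closed tfree_rfuns tpush_tfree)
  moreover have "tequiv M A (fsmult R (s \<otimes> ?c) x) (fsmult R (s \<otimes> ?c) ?Py)"
    by (rule tequiv_smult[OF mM mA _ _ _ xy]) (use sR cR x Pyt in simp_all)
  ultimately show ?thesis by (meson tequiv_rel[OF mM mA] fsmult_rfuns tfree_rfuns m_closed x Pyt sR cR)
qed

lemma u_S_exact_tensor_left_via_cover:
  assumes cS: "s \<otimes> ((s \<otimes> s) \<otimes> (t \<otimes> s)) \<in> S"
  shows "u_S_exact R S (tensor R M A) (tensor R M B) (tensor R M C) (tensor_map R M A M B id f) (tensor_map R M B M C id g)"
proof (rule u_S_exact_tensor_scaledI[OF mM mA mM mB mM mC mod_hom_id hf mod_hom_id hg sR tR cS])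
  show "\<And>x. x \<in> tfree R M A \<Longrightarrow> tpush R M A M B id f x \<in> trel R M B \<Longrightarrow>
      fsmult R (s \<otimes> ((s \<otimes> s) \<otimes> (t \<otimes> s))) x \<in> trel R M A"
    by (rule tensor_left_inj_via_cover)
  show "\<And>y. y \<in> tfree R M B \<Longrightarrow> tpush R M B M C id g y \<in> trel R M C \<Longrightarrow>
      \<exists>x\<in>tfree R M A. tequiv M B (fsmult R (s \<otimes> s) y) (tpush R M A M B id f x)"
    by (rule tensor_left_middle[OF mM mA mB mC hf hg sR e2 e3 e4])
  show "\<And>x. x \<in> tfree R M A \<Longrightarrow> tpush R M B M C id g (fsmult R s (tpush R M A M B id f x)) \<in> trel R M C"
    by (rule tensor_left_complex[OF mM mA mB mC hf hg sR e2 e3 e4])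
  show "\<And>z. z \<in> tfree R M C \<Longrightarrow> \<exists>y\<in>tfree R M B. tequiv M C (fsmult R s z) (tpush R M B M C id g y)"
    by (rule tensor_left_surj[OF mM mA mB mC hf hg sR e2 e3 e4])
qed

end

lemma u_S_exactE:
  assumes "u_S_exact R S A B C f g" and "mult_subset R S"
  obtains s where "s \<in> S" "s \<in> carrier R"
    "\<And>a. a \<in> carrier A \<Longrightarrow> f a = \<zero>\<^bsub>B\<^esub> \<Longrightarrow> s \<odot>\<^bsub>A\<^esub> a = \<zero>\<^bsub>A\<^esub>"
    "\<And>b. b \<in> carrier B \<Longrightarrow> g b = \<zero>\<^bsub>C\<^esub> \<Longrightarrow> s \<odot>\<^bsub>B\<^esub> b \<in> f ` carrier A"
    "\<And>a. a \<in> carrier A \<Longrightarrow> g (s \<odot>\<^bsub>B\<^esub> f a) = \<zero>\<^bsub>C\<^esub>"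
    "\<And>c. c \<in> carrier C \<Longrightarrow> s \<odot>\<^bsub>C\<^esub> c \<in> g ` carrier B"
proof -
  obtain s where s: "s \<in> S" and c: "(\<forall>a\<in>carrier A. f a = \<zero>\<^bsub>B\<^esub> \<longrightarrow> s \<odot>\<^bsub>A\<^esub> a = \<zero>\<^bsub>A\<^esub>) \<and>
     (\<forall>b\<in>carrier B. g b = \<zero>\<^bsub>C\<^esub> \<longrightarrow> s \<odot>\<^bsub>B\<^esub> b \<in> f ` carrier A) \<and>
     (\<forall>a\<in>carrier A. g (s \<odot>\<^bsub>B\<^esub> f a) = \<zero>\<^bsub>C\<^esub>) \<and>
     (\<forall>c\<in>carrier C. s \<odot>\<^bsub>C\<^esub> c \<in> g ` carrier B)"
    using assms(1) unfolding u_S_exact_def by blast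
  have "s \<in> carrier R" using s assms(2) by (auto simp: mult_subset_def)
  then show thesis using that[OF s] c by blast
qed

lemma mult_subset_chase_scalar:
  assumes "mult_subset R S" "s \<in> S" "t \<in> S"
  shows "s \<otimes> ((s \<otimes> s) \<otimes> (t \<otimes> s)) \<in> S"
  using assms by (simp add: mult_subset_def)

lemma u_S_pure_of_u_S_flat:
  fixes F :: "('r,'f) module" and A :: "('r,'a) module" and B :: "('r,'b) module"
  assumes S: "mult_subset R S" and mF: "module R F"
    and flat: "u_S_flat TYPE('m \<Rightarrow> 'r) TYPE('m \<Rightarrow> 'r) TYPE('m) R S F"
    and mA: "module R A" and mB: "module R B" and hf: "mod_hom R A B f" and hg: "mod_hom R B F g"
    and ue: "u_S_exact R S A B F f g"
  shows "u_S_pure TYPE('m) R S A B F f g"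
  unfolding u_S_pure_def
proof (intro allI impI)
  fix M :: "('r,'m) module" assume mM: "module R M"
  obtain s where sS: "s \<in> S" and sR: "s \<in> carrier R" and e: "\<And>a. a \<in> carrier A \<Longrightarrow> f a = \<zero>\<^bsub>B\<^esub> \<Longrightarrow> s \<odot>\<^bsub>A\<^esub> a = \<zero>\<^bsub>A\<^esub>"
    "\<And>b. b \<in> carrier B \<Longrightarrow> g b = \<zero>\<^bsub>F\<^esub> \<Longrightarrow> s \<odot>\<^bsub>B\<^esub> b \<in> f ` carrier A"
    "\<And>a. a \<in> carrier A \<Longrightarrow> g (s \<odot>\<^bsub>B\<^esub> f a) = \<zero>\<^bsub>F\<^esub>"
    "\<And>c. c \<in> carrier F \<Longrightarrow> s \<odot>\<^bsub>F\<^esub> c \<in> g ` carrier B"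
    using u_S_exactE[OF ue S] by blast
  note cover = cover_kernel_module[OF mM] free_mod_module cover_kernel_hom[OF mM] free_cover_hom[OF mM]
  have SR: "S \<subseteq> carrier R" using S by (simp add: mult_subset_def)
  have "u_S_exact R S (cover_kernel R M) (free_mod R (carrier M)) M id (free_cover R M)"
    using short_exact_imp_u_S_exact[OF cover(1,2) mM cover(3,4) cover_kernel_exact[OF mM]] S
    by (simp add: mult_subset_def)
  then have "u_S_exact R S (tensor R (cover_kernel R M) F) (tensor R (free_mod R (carrier M)) F) (tensor R M F)
      (tensor_map R (cover_kernel R M) F (free_mod R (carrier M)) F id id)
      (tensor_map R (free_mod R (carrier M)) F M F (free_cover R M) id)"
    using flat cover mM unfolding u_S_flat_def by blast
  then obtain t where tS: "t \<in> S" and inj: "\<forall>x\<in>tfree R (cover_kernel R M) F.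
      tpush R (cover_kernel R M) F (free_mod R (carrier M)) F id id x \<in> trel R (free_mod R (carrier M)) F \<longrightarrow>
      fsmult R t x \<in> trel R (cover_kernel R M) F"
    using u_S_exact_tensor_injD[OF cover(1) mF cover(2) mF mM mF cover(3) mod_hom_id SR] by blast
  show "u_S_exact R S (tensor R M A) (tensor R M B) (tensor R M F) (tensor_map R M A M B id f) (tensor_map R M B M F id g)"
    using u_S_exact_tensor_left_via_cover[OF mM mA mB mF hf hg sR _ e, of t] inj tS SR
      mult_subset_chase_scalar[OF S sS tS] by blast
qed

lemma u_S_flat_of_u_S_pure_cover:
  fixes F :: "('r,'f) module"
  assumes S: "mult_subset R S" and mF: "module R F"
    and pure: "u_S_pure TYPE('z) R S (cover_kernel R F) (free_mod R (carrier F)) F id (free_cover R F)"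
  shows "u_S_flat TYPE('x) TYPE('y) TYPE('z) R S F"
  unfolding u_S_flat_def
proof (intro allI impI, elim conjE)
  fix A :: "('r,'x) module" and B :: "('r,'y) module" and C :: "('r,'z) module" and f g
  assume mA: "module R A" and mB: "module R B" and mC: "module R C" and hf: "mod_hom R A B f"
    and hg: "mod_hom R B C g" and ue: "u_S_exact R S A B C f g"
  obtain s where sS: "s \<in> S" and sR: "s \<in> carrier R" and e: "\<And>a. a \<in> carrier A \<Longrightarrow> f a = \<zero>\<^bsub>B\<^esub> \<Longrightarrow> s \<odot>\<^bsub>A\<^esub> a = \<zero>\<^bsub>A\<^esub>"
    "\<And>b. b \<in> carrier B \<Longrightarrow> g b = \<zero>\<^bsub>C\<^esub> \<Longrightarrow> s \<odot>\<^bsub>B\<^esub> b \<in> f ` carrier A"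
    "\<And>a. a \<in> carrier A \<Longrightarrow> g (s \<odot>\<^bsub>B\<^esub> f a) = \<zero>\<^bsub>C\<^esub>"
    "\<And>c. c \<in> carrier C \<Longrightarrow> s \<odot>\<^bsub>C\<^esub> c \<in> g ` carrier B"
    using u_S_exactE[OF ue S] by blast
  note cover = cover_kernel_module[OF mF] free_mod_module cover_kernel_hom[OF mF] free_cover_hom[OF mF]
  have SR: "S \<subseteq> carrier R" using S by (simp add: mult_subset_def)
  have "u_S_exact R S (tensor R C (cover_kernel R F)) (tensor R C (free_mod R (carrier F))) (tensor R C F)
      (tensor_map R C (cover_kernel R F) C (free_mod R (carrier F)) id id)
      (tensor_map R C (free_mod R (carrier F)) C F id (free_cover R F))"
    using pure mC unfolding u_S_pure_def by blast
  then obtain t where tS: "t \<in> S" and inj: "\<forall>x\<in>tfree R C (cover_kernel R F).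
      tpush R C (cover_kernel R F) C (free_mod R (carrier F)) id id x \<in> trel R C (free_mod R (carrier F)) \<longrightarrow>
      fsmult R t x \<in> trel R C (cover_kernel R F)"
    using u_S_exact_tensor_injD[OF mC cover(1) mC cover(2) mC mF mod_hom_id cover(3) SR] by blast
  have tR: "t \<in> carrier R" using tS SR by blast
  have "fsmult R t x \<in> trel R (cover_kernel R F) C"
    if "x \<in> tfree R (cover_kernel R F) C"
      "tpush R (cover_kernel R F) C (free_mod R (carrier F)) C id id x \<in> trel R (free_mod R (carrier F)) C" for x
    by (rule tpush_inj_swap[OF cover(1,2) mC mod_hom_funcset[OF cover(3)] _ that]) (use inj in blast)
  then have "fsmult R (s \<otimes> ((s \<otimes> s) \<otimes> (t \<otimes> s))) x \<in> trel R F A"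
    if "x \<in> tfree R F A" "tpush R F A F B id f x \<in> trel R F B" for x
    using tensor_left_inj_via_cover[OF mF mA mB mC hf hg sR tR e _ that] by blast
  then show "u_S_exact R S (tensor R A F) (tensor R B F) (tensor R C F) (tensor_map R A F B F f id)
      (tensor_map R B F C F g id)"
    by (intro u_S_exact_tensor_scaledI[OF mA mF mB mF mC mF hf mod_hom_id hg mod_hom_id sR tR
        mult_subset_chase_scalar[OF S sS tS]] tpush_inj_swap[OF mA mB mF mod_hom_funcset[OF hf]]
        tensor_right_middle[OF mA mB mC mF hf hg sR e(2-4)] tensor_right_complex[OF mA mB mC mF hf hg sR e(2-4)]
        tensor_right_surj[OF mA mB mC mF hf hg sR e(2-4)])
qed

end

theorem proposition2p4:
  fixes R :: "'r ring" and S :: "'r set" and F :: "('r,'f) module"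
  assumes "cring R" and "mult_subset R S" and "module R F"
  shows "(u_S_flat TYPE('m \<Rightarrow> 'r) TYPE('m \<Rightarrow> 'r) TYPE('m) R S F \<longrightarrow>
            (\<forall>(A :: ('r,'a) module) (B :: ('r,'b) module) f g.
               module R A \<and> module R B \<and> mod_hom R A B f \<and> mod_hom R B F g \<and>
               u_S_exact R S A B F f g \<longrightarrow> u_S_pure TYPE('m) R S A B F f g))
       \<and> ((\<forall>(A :: ('r,'f \<Rightarrow> 'r) module) (B :: ('r,'f \<Rightarrow> 'r) module) f g.
               module R A \<and> module R B \<and> mod_hom R A B f \<and> mod_hom R B F g \<and>
               short_exact A B F f g \<longrightarrow>
               u_S_pure TYPE('x) R S A B F f g \<and> u_S_pure TYPE('y) R S A B F f g \<and>
               u_S_pure TYPE('z) R S A B F f g)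
          \<longrightarrow> u_S_flat TYPE('x) TYPE('y) TYPE('z) R S F)"
proof -
  interpret tensor_cring R by (rule tensor_cring.intro) (rule assms(1))
  have presentation: "module R (cover_kernel R F)" "module R (free_mod R (carrier F))"
    "mod_hom R (cover_kernel R F) (free_mod R (carrier F)) id" "mod_hom R (free_mod R (carrier F)) F (free_cover R F)"
    "short_exact (cover_kernel R F) (free_mod R (carrier F)) F id (free_cover R F)"
    using assms(3) by (simp_all add: cover_kernel_module free_mod_module cover_kernel_hom free_cover_hom cover_kernel_exact)
  show ?thesis
    using u_S_pure_of_u_S_flat[OF assms(2,3)] u_S_flat_of_u_S_pure_cover[OF assms(2,3)] presentation
    by blast
qed

end
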